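(* Let $V$ be a Banach space densely and continuously embedded in a Banach space $E$, and let $P$ be a metric space. Suppose that for each $\mu\in P$ the family $\{A^{(\mu)}(t)\}_{t\geq0}$ of linear operators in $E$ satisfies (Hyp1)–(Hyp3) with constants $M,M_V\geq1$, $\omega,\omega_V$ independent of $\mu$. For $\mu\in P$, $\lambda>0$ let $A^{(\mu,\lambda)}(t):=A^{(\mu)}(t/\lambda)$ and let $\{R^{(\mu,\lambda)}(t,s)\}_{t\geq s\geq0}$ be the evolution system corresponding to $\{A^{(\mu,\lambda)}(t)\}_{t\geq0}$. Assume in addition that for each $\mu\in P$ there is a generator $\widehat A^{(\mu)}$ of a $C_0$ semigroup $\{\widehat S^{(\mu)}(t)\}_{t\geq0}$ on $E$ such that $V$ is $\widehat A^{(\mu)}$-admissible, $V\subset D(\widehat A^{(\mu)})$ and $\lim_{T\to+\infty,\ \nu\to\mu}\frac1T\int_0^T\|A^{(\nu)}(t+h)-\widehat A^{(\mu)}\|_{\mathcal L(V,E)}\,dt=0$ uniformly with respect to $h\geq0$. Then for any $\mu\in P$ and $\lambda>0$, $\|R^{(\mu,\lambda)}(t,s)\|\leq Me^{\omega(t-s)}$ whenever $0\leq s\leq t$, and for any $t\geq0$, $s\in[0,t]$, $\mu\in P$, $\bar u\in E$, $\lim_{\lambda\to0^+,\ \bar v\to\bar u,\ \nu\to\mu}R^{(\nu,\lambda)}(t,s)\bar v=\widehat S^{(\mu)}(t-s)\bar u$, uniformly for $t$ and $s$ from bounded intervals.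
   Context: For a generator $A$ of a $C_0$ semigroup $\{S_A(t)\}$ on $E$, $V$ is $A$-admissible if $V$ is invariant under every $S_A(t)$ and the restrictions $\{S_A(t)|_V\}_{t\geq0}$ form a $C_0$ semigroup on $V$; the part $A_V$ of $A$ in $V$ is $A_V\bar v=A\bar v$ on $D(A_V)=\{\bar v\in D(A)\cap V: A\bar v\in V\}$. The hyperbolic conditions for a family $\{A(t)\}_{t\geq0}$: (Hyp1) there are $M\geq1$, $\omega\in\mathbb{R}$ with $\|S_{A(t_n)}(s_n)\cdots S_{A(t_1)}(s_1)\|_{\mathcal L(E,E)}\leq Me^{\omega(s_1+\dots+s_n)}$ whenever $0\leq t_1\leq\dots\leq t_n$, $s_i\geq0$ (each $A(t)$ generating a $C_0$ semigroup $S_{A(t)}$); (Hyp2) $V$ is $A(t)$-admissible for each $t$ and $\{A_V(t)\}$ satisfies the analogous stability estimate on $V$ with constants $M_V\geq1$, $\omega_V$; (Hyp3) $V\subset D(A(t))$, $A(t)\in\mathcal L(V,E)$ for each $t$, and $t\mapsto A(t)\in\mathcal L(V,E)$ is continuous. The corresponding evolution system is the unique evolution system $\{R(t,s)\}$ on $E$ with $\|R(t,s)\|\leq Me^{\omega(t-s)}$, $\frac{\partial^+}{\partial t}R(t,s)v|_{t=s}=A(s)v$ and $\frac{\partial}{\partial s}R(t,s)v=-R(t,s)A(s)v$ for $v\in V$, $0\leq s\leq t$. $\|\widehat A^{(\mu)}\cdots\|_{\mathcal L(V,E)}$ refers to operator norms of restrictions to $V$. *)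

theory Defs
  imports "HOL-Analysis.Analysis"
begin

definition C0_semigroup :: "(real \<Rightarrow> 'a::real_normed_vector \<Rightarrow> 'a) \<Rightarrow> bool" where
  "C0_semigroup S \<longleftrightarrow>
     (\<forall>t\<ge>0. bounded_linear (S t)) \<and> S 0 = id \<and>
     (\<forall>t s. 0 \<le> t \<longrightarrow> 0 \<le> s \<longrightarrow> S (t + s) = S t \<circ> S s) \<and>
     (\<forall>x. continuous_on {0..} (\<lambda>t. S t x))"

text \<open>An (unbounded) operator is a pair of a domain D and a map A (meaningful on D).
  (D, A) is the generator of the C0 semigroup S.\<close>
definition is_generator :: "'a::real_normed_vector set \<Rightarrow> ('a \<Rightarrow> 'a) \<Rightarrow> (real \<Rightarrow> 'a \<Rightarrow> 'a) \<Rightarrow> bool" where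
  "is_generator D A S \<longleftrightarrow> C0_semigroup S \<and>
     D = {x. \<exists>y. ((\<lambda>h. (1 / h) *\<^sub>R (S h x - x)) \<longlongrightarrow> y) (at_right 0)} \<and>
     (\<forall>x\<in>D. ((\<lambda>h. (1 / h) *\<^sub>R (S h x - x)) \<longlongrightarrow> A x) (at_right 0))"

text \<open>The semigroup generated by (D, A) (determined on [0,\<infinity>) when it exists).\<close>
definition sg :: "'a::real_normed_vector set \<Rightarrow> ('a \<Rightarrow> 'a) \<Rightarrow> real \<Rightarrow> 'a \<Rightarrow> 'a" where
  "sg D A = (SOME S. is_generator D A S)"

text \<open>V is represented by a Banach space type 'v with a continuous, injective, dense
  embedding j into E.\<close>

definition admissible :: "('v::real_normed_vector \<Rightarrow> 'e::real_normed_vector) \<Rightarrow> 'e set \<Rightarrow> ('e \<Rightarrow> 'e) \<Rightarrow> bool" where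
  "admissible j D A \<longleftrightarrow>
     (\<forall>t\<ge>0. sg D A t ` range j \<subseteq> range j) \<and>
     C0_semigroup (\<lambda>t v. inv j (sg D A t (j v)))"

definition partD :: "('v \<Rightarrow> 'e) \<Rightarrow> 'e set \<Rightarrow> ('e \<Rightarrow> 'e) \<Rightarrow> 'v set" where
  "partD j D A = {v. j v \<in> D \<and> A (j v) \<in> range j}"

definition partA :: "('v \<Rightarrow> 'e) \<Rightarrow> 'e set \<Rightarrow> ('e \<Rightarrow> 'e) \<Rightarrow> 'v \<Rightarrow> 'v" where
  "partA j D A v = inv j (A (j v))"

fun sgprod :: "(real \<Rightarrow> real \<Rightarrow> 'a \<Rightarrow> 'a) \<Rightarrow> (nat \<Rightarrow> real) \<Rightarrow> (nat \<Rightarrow> real) \<Rightarrow> nat \<Rightarrow> 'a \<Rightarrow> 'a" where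
  "sgprod S \<tau> \<sigma> 0 x = x"
| "sgprod S \<tau> \<sigma> (Suc n) x = S (\<tau> n) (\<sigma> n) (sgprod S \<tau> \<sigma> n x)"

definition hyp1 :: "(real \<Rightarrow> 'a::real_normed_vector set) \<Rightarrow> (real \<Rightarrow> 'a \<Rightarrow> 'a) \<Rightarrow> real \<Rightarrow> real \<Rightarrow> bool" where
  "hyp1 D A M \<omega> \<longleftrightarrow> 1 \<le> M \<and>
     (\<forall>t\<ge>0. \<exists>S. is_generator (D t) (A t) S) \<and>
     (\<forall>n \<tau> \<sigma> x. (\<forall>i<n. 0 \<le> \<tau> i \<and> 0 \<le> \<sigma> i) \<longrightarrow> (\<forall>i k. i \<le> k \<longrightarrow> k < n \<longrightarrow> \<tau> i \<le> \<tau> k) \<longrightarrow>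
        norm (sgprod (\<lambda>t. sg (D t) (A t)) \<tau> \<sigma> n x) \<le> M * exp (\<omega> * (\<Sum>i<n. \<sigma> i)) * norm x)"

definition hyp2 :: "('v::real_normed_vector \<Rightarrow> 'e::real_normed_vector) \<Rightarrow> (real \<Rightarrow> 'e set) \<Rightarrow> (real \<Rightarrow> 'e \<Rightarrow> 'e) \<Rightarrow> real \<Rightarrow> real \<Rightarrow> bool" where
  "hyp2 j D A MV \<omega>V \<longleftrightarrow>
     (\<forall>t\<ge>0. admissible j (D t) (A t)) \<and>
     hyp1 (\<lambda>t. partD j (D t) (A t)) (\<lambda>t. partA j (D t) (A t)) MV \<omega>V"

definition hyp3 :: "('v::real_normed_vector \<Rightarrow> 'e::real_normed_vector) \<Rightarrow> (real \<Rightarrow> 'e set) \<Rightarrow> (real \<Rightarrow> 'e \<Rightarrow> 'e) \<Rightarrow> bool" where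
  "hyp3 j D A \<longleftrightarrow>
     (\<forall>t\<ge>0. range j \<subseteq> D t \<and> bounded_linear (\<lambda>v. A t (j v))) \<and>
     continuous_on {0..} (\<lambda>t. Blinfun (\<lambda>v. A t (j v)))"

text \<open>R t s is only meaningful for 0 \<le> s \<le> t; to make it unique we normalise it to the
  identity elsewhere.\<close>
definition corr_evol_sys :: "('v::real_normed_vector \<Rightarrow> 'e::real_normed_vector) \<Rightarrow> (real \<Rightarrow> 'e \<Rightarrow> 'e) \<Rightarrow> real \<Rightarrow> real \<Rightarrow> (real \<Rightarrow> real \<Rightarrow> 'e \<Rightarrow> 'e) \<Rightarrow> bool" where
  "corr_evol_sys j A M \<omega> R \<longleftrightarrow>
     (\<forall>t s. \<not> (0 \<le> s \<and> s \<le> t) \<longrightarrow> R t s = id) \<and>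
     (\<forall>t s. 0 \<le> s \<and> s \<le> t \<longrightarrow> bounded_linear (R t s)) \<and>
     (\<forall>s\<ge>0. R s s = id) \<and>
     (\<forall>t r s. 0 \<le> s \<and> s \<le> r \<and> r \<le> t \<longrightarrow> R t r \<circ> R r s = R t s) \<and>
     (\<forall>x. continuous_on {(t, s). 0 \<le> s \<and> s \<le> t} (\<lambda>(t, s). R t s x)) \<and>
     (\<forall>t s x. 0 \<le> s \<and> s \<le> t \<longrightarrow> norm (R t s x) \<le> M * exp (\<omega> * (t - s)) * norm x) \<and>
     (\<forall>v s. 0 \<le> s \<longrightarrow> ((\<lambda>t. R t s (j v)) has_vector_derivative A s (j v)) (at s within {s..})) \<and>
     (\<forall>v t s. 0 \<le> s \<and> s \<le> t \<longrightarrow>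
        ((\<lambda>r. R t r (j v)) has_vector_derivative - R t s (A s (j v))) (at s within {0..t}))"

definition evol_sys :: "('v::real_normed_vector \<Rightarrow> 'e::real_normed_vector) \<Rightarrow> (real \<Rightarrow> 'e \<Rightarrow> 'e) \<Rightarrow> real \<Rightarrow> real \<Rightarrow> real \<Rightarrow> real \<Rightarrow> 'e \<Rightarrow> 'e" where
  "evol_sys j A M \<omega> = (THE R. corr_evol_sys j A M \<omega> R)"

end

theory Submission
  imports Defs
begin

text \<open>
  Rescaling time by \<open>\<lambda>\<close> preserves (Hyp1)--(Hyp3) with the same constants, so it suffices
  to construct the corresponding evolution system of a single hyperbolic family.  It is the
  limit of products of the semigroups generated by \<open>A\<close> frozen on the cells of a grid of
  mesh \<open>\<delta>\<close>: the stability estimates bound these products uniformly, and differentiating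
  along \<open>V\<close> shows that the products for two meshes differ by at most a multiple of the
  oscillation of \<open>A\<close> on a cell.  Uniqueness follows because \<open>\<rho> \<mapsto> R'(t,\<rho>) R(\<rho>,s) v\<close>
  is constant for any two such systems.

  For the limit, Duhamel's formula bounds \<open>Sh(t-s) v - R(t,s) v\<close> for \<open>v \<in> V\<close> by
  \<open>C \<integral>\<^sub>s\<^sup>t \<parallel>A\<^sub>\<nu>(r/\<lambda>) - Ah\<parallel> dr\<close>; substituting \<open>r = \<lambda>\<tau>\<close> turns this into \<open>\<lambda>\<close> times an
  integral over an interval of length \<open>(t-s)/\<lambda>\<close>, which the averaging hypothesis makes
  small as \<open>\<lambda> \<rightarrow> 0\<close>, \<open>\<nu> \<rightarrow> \<mu>\<close>.  Density of \<open>V\<close> and the uniform bounds extend the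
  convergence to all of \<open>E\<close>.
\<close>

section \<open>Operator-valued functions of a real variable\<close>

lemma has_vector_derivative_iff_diff_quotient:
  fixes f :: "real \<Rightarrow> 'a::real_normed_vector"
  shows "(f has_vector_derivative f') (at x within S) \<longleftrightarrow>
         ((\<lambda>y. (f y - f x) /\<^sub>R (y - x)) \<longlongrightarrow> f') (at x within S)"
proof -
  have eq: "norm (((f y - f x) - (y - x) *\<^sub>R f') /\<^sub>R norm (y - x)) = norm ((f y - f x) /\<^sub>R (y - x) - f')"
    if "y \<noteq> x" for y
  proof -
    have "((y - x) *\<^sub>R f') /\<^sub>R (y - x) = f'" using that by simp
    then have "(f y - f x) /\<^sub>R (y - x) - f' = ((f y - f x) - (y - x) *\<^sub>R f') /\<^sub>R (y - x)"
      by (metis scaleR_diff_right)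
    then show ?thesis by simp
  qed
  have "((\<lambda>y. ((f y - f x) - (y - x) *\<^sub>R f') /\<^sub>R norm (y - x)) \<longlongrightarrow> 0) (at x within S)
     \<longleftrightarrow> ((\<lambda>y. norm (((f y - f x) - (y - x) *\<^sub>R f') /\<^sub>R norm (y - x))) \<longlongrightarrow> 0) (at x within S)"
    by (rule tendsto_norm_zero_iff[symmetric])
  also have "\<dots> \<longleftrightarrow> ((\<lambda>y. norm ((f y - f x) /\<^sub>R (y - x) - f')) \<longlongrightarrow> 0) (at x within S)"
    by (rule filterlim_cong[OF refl refl], unfold eventually_at_filter, rule always_eventually,
        intro allI impI, rule eq)
  also have "\<dots> \<longleftrightarrow> ((\<lambda>y. (f y - f x) /\<^sub>R (y - x)) \<longlongrightarrow> f') (at x within S)"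
    by (simp add: tendsto_norm_zero_iff Lim_null[symmetric])
  finally show ?thesis
    unfolding has_vector_derivative_def has_derivative_at_within
    by (simp add: bounded_linear_scaleR_left)
qed

lemma uniformly_bounded_apply_tendsto_zero:
  fixes T :: "'i \<Rightarrow> 'a::real_normed_vector \<Rightarrow> 'b::real_normed_vector"
  assumes "eventually (\<lambda>r. bounded_linear (T r) \<and> (\<forall>z. norm (T r z) \<le> C * norm z)) F"
    and "(q \<longlongrightarrow> 0) F"
  shows "((\<lambda>r. T r (q r)) \<longlongrightarrow> 0) F"
proof -
  have "((\<lambda>r. C * norm (q r)) \<longlongrightarrow> C * 0) F"
    using assms(2) by (intro tendsto_intros tendsto_norm_zero)
  then have "((\<lambda>r. C * norm (q r)) \<longlongrightarrow> 0) F" by simp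
  moreover have "eventually (\<lambda>r. norm (T r (q r)) \<le> C * norm (q r)) F"
    using assms(1) by (auto elim: eventually_mono)
  ultimately show ?thesis
    by (rule Lim_null_comparison[rotated])
qed

lemma uniformly_bounded_apply_tendsto:
  fixes T :: "'i \<Rightarrow> 'a::real_normed_vector \<Rightarrow> 'b::real_normed_vector"
  assumes "eventually (\<lambda>r. bounded_linear (T r) \<and> (\<forall>z. norm (T r z) \<le> C * norm z)) F"
    and "(q \<longlongrightarrow> a) F" and "((\<lambda>r. T r a) \<longlongrightarrow> b) F"
  shows "((\<lambda>r. T r (q r)) \<longlongrightarrow> b) F"
proof -
  have "((\<lambda>r. T r (q r - a)) \<longlongrightarrow> 0) F"
    by (rule uniformly_bounded_apply_tendsto_zero[OF assms(1)]) (use assms(2) in \<open>simp add: Lim_null[symmetric]\<close>)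
  then have "((\<lambda>r. T r (q r - a) + T r a) \<longlongrightarrow> 0 + b) F"
    using assms(3) by (intro tendsto_add)
  moreover have "eventually (\<lambda>r. T r (q r - a) + T r a = T r (q r)) F"
    using assms(1) by (auto elim!: eventually_mono simp: linear_simps)
  ultimately show ?thesis by (simp add: tendsto_cong)
qed

lemma has_vector_derivative_operator_apply:
  fixes T :: "real \<Rightarrow> 'a::real_normed_vector \<Rightarrow> 'b::real_normed_vector"
  assumes bd: "\<And>r. r \<in> S \<Longrightarrow> bounded_linear (T r) \<and> (\<forall>z. norm (T r z) \<le> C * norm z)"
    and cont: "\<And>z. ((\<lambda>r. T r z) \<longlongrightarrow> T x z) (at x within S)"
    and dy: "(y has_vector_derivative y') (at x within S)"
    and dT: "((\<lambda>r. T r (y x)) has_vector_derivative d) (at x within S)"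
    and xS: "x \<in> S"
  shows "((\<lambda>r. T r (y r)) has_vector_derivative (T x y' + d)) (at x within S)"
  unfolding has_vector_derivative_iff_diff_quotient
proof -
  have ev: "eventually (\<lambda>r. bounded_linear (T r) \<and> (\<forall>z. norm (T r z) \<le> C * norm z)) (at x within S)"
    using bd by (auto simp: eventually_at_filter)
  have 1: "((\<lambda>r. T r ((y r - y x) /\<^sub>R (r - x))) \<longlongrightarrow> T x y') (at x within S)"
    by (rule uniformly_bounded_apply_tendsto[OF ev]) (use dy cont in \<open>auto simp: has_vector_derivative_iff_diff_quotient\<close>)
  have 2: "((\<lambda>r. (T r (y x) - T x (y x)) /\<^sub>R (r - x)) \<longlongrightarrow> d) (at x within S)"
    using dT by (simp add: has_vector_derivative_iff_diff_quotient)
  have "((\<lambda>r. T r ((y r - y x) /\<^sub>R (r - x)) + (T r (y x) - T x (y x)) /\<^sub>R (r - x)) \<longlongrightarrow> T x y' + d) (at x within S)"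
    by (intro tendsto_add 1 2)
  moreover have "eventually (\<lambda>r. T r ((y r - y x) /\<^sub>R (r - x)) + (T r (y x) - T x (y x)) /\<^sub>R (r - x)
      = (T r (y r) - T x (y x)) /\<^sub>R (r - x)) (at x within S)"
    using ev by (auto elim!: eventually_mono simp: linear_simps algebra_simps)
  ultimately show "((\<lambda>r. (T r (y r) - T x (y x)) /\<^sub>R (r - x)) \<longlongrightarrow> T x y' + d) (at x within S)"
    by (simp add: tendsto_cong)
qed

lemma continuous_on_operator_apply:
  fixes T :: "'p::metric_space \<Rightarrow> 'a::real_normed_vector \<Rightarrow> 'b::real_normed_vector"
  assumes bd: "\<And>p. p \<in> P \<Longrightarrow> bounded_linear (T p) \<and> (\<forall>z. norm (T p z) \<le> C * norm z)"
    and cT: "\<And>z. continuous_on P (\<lambda>p. T p z)" and cy: "continuous_on P y"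
  shows "continuous_on P (\<lambda>p. T p (y p))"
  unfolding continuous_on_def
proof
  fix x assume x: "x \<in> P"
  have ev: "eventually (\<lambda>r. bounded_linear (T r) \<and> (\<forall>z. norm (T r z) \<le> C * norm z)) (at x within P)"
    using bd by (auto simp: eventually_at_filter)
  show "((\<lambda>p. T p (y p)) \<longlongrightarrow> T x (y x)) (at x within P)"
    by (rule uniformly_bounded_apply_tendsto[OF ev]) (use x cT cy in \<open>auto simp: continuous_on_def\<close>)
qed

lemma uniform_boundedness:
  fixes T :: "'i \<Rightarrow> 'a::banach \<Rightarrow> 'b::real_normed_vector"
  assumes lin: "\<And>i. i \<in> I \<Longrightarrow> bounded_linear (T i)"
    and pw: "\<And>x. \<exists>B. \<forall>i\<in>I. norm (T i x) \<le> B"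
  shows "\<exists>C. \<forall>i\<in>I. \<forall>x. norm (T i x) \<le> C * norm x"
proof -
  define F where "F k = {x. \<forall>i\<in>I. norm (T i x) \<le> real k}" for k :: nat
  have clF: "closed (F k)" for k
  proof -
    have "F k = (\<Inter>i\<in>I. {x. norm (T i x) \<le> real k})" by (auto simp: F_def)
    moreover have "closed {x. norm (T i x) \<le> real k}" if "i \<in> I" for i
      using lin[OF that] by (intro closed_Collect_le continuous_intros) (auto intro: linear_continuous_on)
    ultimately show ?thesis by auto
  qed
  have "\<exists>k. interior (F k) \<noteq> {}"
  proof (rule ccontr)
    assume "\<not> ?thesis"
    have "euclidean interior_of \<Union>(range F) = {}"
    proof (rule Baire_category_alt)
      show "completely_metrizable_space (euclidean :: 'a topology) \<or> locally_compact_space (euclidean :: 'a topology) \<and> regular_space (euclidean :: 'a topology)"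
        by (rule disjI1, rule completely_metrizable_space_euclidean)
      show "countable (range F)" by simp
      fix T assume "T \<in> range F"
      then obtain k where "T = F k" by blast
      then show "closedin euclidean T \<and> euclidean interior_of T = {}"
        using clF \<open>\<not> (\<exists>k. interior (F k) \<noteq> {})\<close> by (simp add: closed_closedin[symmetric])
    qed
    moreover have "\<Union>(range F) = UNIV"
    proof safe
      fix x :: 'a
      obtain B where "\<forall>i\<in>I. norm (T i x) \<le> B" using pw by blast
      moreover obtain k :: nat where "B \<le> real k" using real_arch_simple by blast
      ultimately show "x \<in> \<Union>(range F)" by (auto simp: F_def intro: order_trans)
    qed simp
    ultimately show False by simp
  qed
  then obtain k x0 where "x0 \<in> interior (F k)" by blast
  then obtain r where r: "r > 0" "ball x0 r \<subseteq> F k"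
    by (meson open_contains_ball open_interior interior_subset subset_trans)
  have "norm (T i x) \<le> (4 * real k / r) * norm x" if i: "i \<in> I" for i x
  proof (cases "x = 0")
    case True then show ?thesis using lin[OF i] by (simp add: linear_simps)
  next
    case False
    define c where "c = r / 2 / norm x"
    have c: "c > 0" using False r by (simp add: c_def)
    have "x0 + c *\<^sub>R x \<in> ball x0 r" using r False by (simp add: dist_norm c_def)
    then have 1: "norm (T i (x0 + c *\<^sub>R x)) \<le> real k" using r i unfolding F_def by blast
    have "x0 \<in> ball x0 r" using r by simp
    then have 2: "norm (T i x0) \<le> real k" using r i unfolding F_def by blast
    have "T i (c *\<^sub>R x) = T i (x0 + c *\<^sub>R x) - T i x0" using lin[OF i] by (simp add: linear_simps)
    then have "norm (T i (c *\<^sub>R x)) \<le> 2 * real k"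
      using 1 2 norm_triangle_ineq4[of "T i (x0 + c *\<^sub>R x)" "T i x0"] by simp
    then have "c * norm (T i x) \<le> 2 * real k" using lin[OF i] c by (simp add: linear_simps)
    then have "norm (T i x) \<le> 2 * real k / c" using c by (simp add: field_simps)
    also have "2 * real k / c = (4 * real k / r) * norm x" using r False by (simp add: c_def field_simps)
    finally show ?thesis .
  qed
  then show ?thesis by blast
qed

lemma dense_range_approx:
  assumes "closure (range j) = UNIV" "0 < e"
  shows "\<exists>v. norm (x - j v) < e"
proof -
  have "x \<in> closure (range j)" using assms by simp
  then obtain y where "y \<in> range j" "dist y x < e" using assms(2) unfolding closure_approachable by blast
  then show ?thesis by (auto simp: dist_norm norm_minus_commute)
qed

lemma eventually_at_right_0_less: "0 < t \<Longrightarrow> eventually (\<lambda>h::real. 0 < h \<and> h < t) (at_right 0)"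
  using eventually_at_right_less[of 0] eventually_at_right[of 0 t]
  by (auto elim: eventually_elim2)

lemma norm_diff_le_derivative_bound:
  fixes f :: "real \<Rightarrow> 'a::banach"
  assumes F: "finite F" and ab: "a \<le> b" and cf: "continuous_on {a..b} f"
    and d: "\<And>x. x \<in> {a<..<b} - F \<Longrightarrow> (f has_vector_derivative f' x) (at x) \<and> norm (f' x) \<le> B"
    and B: "0 \<le> B"
  shows "norm (f b - f a) \<le> B * (b - a)"
proof -
  define g where "g x = (if x \<in> {a<..<b} - F then f' x else 0)" for x
  have "(g has_integral (f b - f a)) {a..b}"
    by (rule fundamental_theorem_of_calculus_interior_strong[OF F ab _ cf]) (use d in \<open>auto simp: g_def\<close>)
  then have "norm (f b - f a) \<le> B * Henstock_Kurzweil_Integration.content (cbox a b)"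
    by (intro has_integral_bound[OF B]) (use d B in \<open>auto simp: g_def\<close>)
  then show ?thesis using ab by simp
qed

lemma zero_vector_derivative_imp_eq:
  fixes f :: "real \<Rightarrow> 'a::banach"
  assumes ab: "a \<le> b" and cf: "continuous_on {a..b} f"
    and d: "\<And>x. x \<in> {a<..<b} \<Longrightarrow> (f has_vector_derivative 0) (at x)"
  shows "f b = f a"
  using norm_diff_le_derivative_bound[of "{}" a b f "\<lambda>_. 0" 0] assms by simp

lemma onorm_blinfun_diff:
  assumes "bounded_linear f" "bounded_linear g"
  shows "onorm (\<lambda>v. f v - g v) = norm (Blinfun f - Blinfun g)"
proof -
  have "blinfun_apply (Blinfun f - Blinfun g) = (\<lambda>v. f v - g v)"
    using assms by (simp add: fun_eq_iff minus_blinfun.rep_eq bounded_linear_Blinfun_apply)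
  then show ?thesis by (simp add: norm_blinfun.rep_eq)
qed

lemma small_multiplier_exists:
  fixes c x e :: real
  assumes c: "0 < c" and x: "0 \<le> x" and e: "0 < e"
  obtains d where "0 < d" "c * d * x \<le> e"
proof
  define y where "y = x + 1"
  have y: "0 < y" "x \<le> y" using x by (simp_all add: y_def)
  show "0 < e / (c * y)" using c y e by simp
  have "c * (e / (c * y)) * x \<le> c * (e / (c * y)) * y"
    using c y e by (intro mult_left_mono) auto
  also have "\<dots> = e" using c y by simp
  finally show "c * (e / (c * y)) * x \<le> e" .
qed

lemma exp_mult_le_exp_abs_mult:
  fixes w x K :: real
  assumes x: "0 \<le> x" "x \<le> K"
  shows "exp (w * x) \<le> exp (\<bar>w\<bar> * K)"
proof -
  have "w * x \<le> \<bar>w\<bar> * x" by (rule mult_right_mono[OF abs_ge_self x(1)])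
  also have "\<dots> \<le> \<bar>w\<bar> * K" using x by (intro mult_left_mono) auto
  finally show ?thesis by simp
qed

definition growth_bound :: "real \<Rightarrow> real \<Rightarrow> real \<Rightarrow> real" where
  "growth_bound M \<omega> K = M * exp (\<bar>\<omega>\<bar> * K)"

lemma growth_bound_pos: "0 < M \<Longrightarrow> 0 < growth_bound M \<omega> K"
  by (simp add: growth_bound_def)

lemma norm_le_growth_bound:
  assumes y: "norm y \<le> M * exp (\<omega> * (t - s)) * norm x" and M: "0 \<le> M" and st: "s \<le> t" "t - s \<le> K"
  shows "norm y \<le> growth_bound M \<omega> K * norm x"
proof -
  have "M * exp (\<omega> * (t - s)) * norm x \<le> growth_bound M \<omega> K * norm x"
    unfolding growth_bound_def using exp_mult_le_exp_abs_mult[of "t - s" K \<omega>] M st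
    by (intro mult_right_mono mult_left_mono) auto
  with y show ?thesis by linarith
qed

lemma continuous_on_Icc_norm_boundE:
  fixes f :: "real \<Rightarrow> 'a::real_normed_vector"
  assumes "continuous_on {a..b} f"
  obtains B where "0 \<le> B" "\<And>x. a \<le> x \<Longrightarrow> x \<le> b \<Longrightarrow> norm (f x) \<le> B"
proof -
  have "compact (f ` {a..b})" by (rule compact_continuous_image[OF assms compact_Icc])
  then obtain B where "\<forall>y\<in>f ` {a..b}. norm y \<le> B" using compact_imp_bounded bounded_iff by metis
  then show ?thesis using that[of "max B 0"] by force
qed

section \<open>Strongly continuous semigroups and their generators\<close>

lemma C0_semigroup_bounded_linear: "C0_semigroup S \<Longrightarrow> 0 \<le> t \<Longrightarrow> bounded_linear (S t)"
  by (simp add: C0_semigroup_def)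
lemma C0_semigroup_0[simp]: "C0_semigroup S \<Longrightarrow> S 0 x = x"
  by (simp add: C0_semigroup_def)
lemma C0_semigroup_add: "C0_semigroup S \<Longrightarrow> 0 \<le> t \<Longrightarrow> 0 \<le> s \<Longrightarrow> S (t + s) x = S t (S s x)"
  by (simp add: C0_semigroup_def)
lemma C0_semigroup_continuous: "C0_semigroup S \<Longrightarrow> continuous_on {0..} (\<lambda>t. S t x)"
  by (simp add: C0_semigroup_def)

lemma C0_semigroup_boundedE:
  fixes S :: "real \<Rightarrow> 'a::banach \<Rightarrow> 'a"
  assumes S: "C0_semigroup S"
  obtains C where "0 \<le> C" "\<And>t x. 0 \<le> t \<Longrightarrow> t \<le> K \<Longrightarrow> norm (S t x) \<le> C * norm x"
proof -
  have "\<exists>C. \<forall>t\<in>{0..K}. \<forall>x. norm (S t x) \<le> C * norm x"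
  proof (rule uniform_boundedness)
    show "bounded_linear (S t)" if "t \<in> {0..K}" for t using that S by (simp add: C0_semigroup_bounded_linear)
    fix x
    have "compact ((\<lambda>t. S t x) ` {0..K})"
      by (rule compact_continuous_image) (auto intro: continuous_on_subset[OF C0_semigroup_continuous[OF S]])
    then obtain B where "\<forall>y\<in>(\<lambda>t. S t x) ` {0..K}. norm y \<le> B"
      using compact_imp_bounded bounded_iff by metis
    then show "\<exists>B. \<forall>t\<in>{0..K}. norm (S t x) \<le> B" by auto
  qed
  then obtain C where C: "\<forall>t\<in>{0..K}. \<forall>x. norm (S t x) \<le> C * norm x" by blast
  show ?thesis
  proof (rule that[of "max C 0"])
    fix t x assume "0 \<le> t" "t \<le> K"
    then have "norm (S t x) \<le> C * norm x" using C by simp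
    also have "\<dots> \<le> max C 0 * norm x" by (intro mult_right_mono) auto
    finally show "norm (S t x) \<le> max C 0 * norm x" .
  qed simp
qed

lemma generator_C0_semigroup: "is_generator D A S \<Longrightarrow> C0_semigroup S"
  by (simp add: is_generator_def)

lemma generator_tendsto: "is_generator D A S \<Longrightarrow> x \<in> D \<Longrightarrow> ((\<lambda>h. (1 / h) *\<^sub>R (S h x - x)) \<longlongrightarrow> A x) (at_right 0)"
  by (simp add: is_generator_def)

lemma generator_domainI: "is_generator D A S \<Longrightarrow> ((\<lambda>h. (1 / h) *\<^sub>R (S h x - x)) \<longlongrightarrow> y) (at_right 0) \<Longrightarrow> x \<in> D"
  unfolding is_generator_def by blast

lemma generator_semigroup_commute:
  assumes g: "is_generator D A S" and x: "x \<in> D" and t: "0 \<le> t"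
  shows "S t x \<in> D \<and> A (S t x) = S t (A x)"
proof -
  have c0: "C0_semigroup S" using g by (rule generator_C0_semigroup)
  have lin: "bounded_linear (S t)" using c0 t by (rule C0_semigroup_bounded_linear)
  have "((\<lambda>h. S t ((1 / h) *\<^sub>R (S h x - x))) \<longlongrightarrow> S t (A x)) (at_right 0)"
    by (rule bounded_linear.tendsto[OF lin generator_tendsto[OF g x]])
  moreover have "eventually (\<lambda>h. S t ((1 / h) *\<^sub>R (S h x - x)) = (1 / h) *\<^sub>R (S h (S t x) - S t x)) (at_right 0)"
    using eventually_at_right_less[of 0]
  proof (rule eventually_mono)
    fix h :: real assume h: "0 < h"
    have "S h (S t x) = S t (S h x)"
      using C0_semigroup_add[OF c0, of h t x] C0_semigroup_add[OF c0, of t h x] h t by (simp add: add.commute)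
    then show "S t ((1 / h) *\<^sub>R (S h x - x)) = (1 / h) *\<^sub>R (S h (S t x) - S t x)"
      using lin by (simp add: linear_simps)
  qed
  ultimately have lim: "((\<lambda>h. (1 / h) *\<^sub>R (S h (S t x) - S t x)) \<longlongrightarrow> S t (A x)) (at_right 0)"
    by (simp add: tendsto_cong)
  then have mem: "S t x \<in> D" by (rule generator_domainI[OF g])
  have "A (S t x) = S t (A x)"
    using tendsto_unique[OF _ generator_tendsto[OF g mem] lim] by simp
  with mem show ?thesis by simp
qed

lemma C0_semigroup_tendsto_left:
  assumes c0: "C0_semigroup S" and t: "0 < t"
  shows "((\<lambda>h. S (t - h) z) \<longlongrightarrow> S t z) (at_right 0)"
proof -
  have "((\<lambda>r. S r z) \<longlongrightarrow> S t z) (at t within {0..})"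
    using C0_semigroup_continuous[OF c0, of z] t by (simp add: continuous_on_def)
  moreover have "filterlim (\<lambda>h. t - h) (at t within {0..}) (at_right 0)"
    unfolding filterlim_at
  proof
    show "\<forall>\<^sub>F h in at_right 0. t - h \<in> {0..} \<and> t - h \<noteq> t"
      using eventually_at_right_less[of 0] eventually_at_right[of 0 t] t
      by (auto elim: eventually_elim2)
    show "((\<lambda>h. t - h) \<longlongrightarrow> t) (at_right 0)"
      by (rule tendsto_eq_intros refl)+ simp
  qed
  ultimately show ?thesis by (rule filterlim_compose)
qed

lemma semigroup_has_vector_derivative_within:
  fixes S :: "real \<Rightarrow> 'a::banach \<Rightarrow> 'a"
  assumes g: "is_generator D A S" and x: "x \<in> D" and t: "0 \<le> t"
  shows "((\<lambda>r. S r x) has_vector_derivative S t (A x)) (at t within {0..})"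
proof -
  have c0: "C0_semigroup S" using g by (rule generator_C0_semigroup)
  have lin: "bounded_linear (S t)" using c0 t by (rule C0_semigroup_bounded_linear)
  have R: "((\<lambda>r. (S r x - S t x) /\<^sub>R (r - t)) \<longlongrightarrow> S t (A x)) (at_right t)"
    unfolding filterlim_at_right_to_0[of _ _ t]
  proof -
    have "((\<lambda>h. S t ((1 / h) *\<^sub>R (S h x - x))) \<longlongrightarrow> S t (A x)) (at_right 0)"
      by (rule bounded_linear.tendsto[OF lin generator_tendsto[OF g x]])
    moreover have "eventually (\<lambda>h. S t ((1 / h) *\<^sub>R (S h x - x)) = (S (h + t) x - S t x) /\<^sub>R (h + t - t)) (at_right 0)"
      using eventually_at_right_less[of 0]
    proof (rule eventually_mono)
      fix h :: real assume h: "0 < h"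
      have "S (h + t) x = S t (S h x)" using C0_semigroup_add[OF c0, of t h x] h t by (simp add: add.commute)
      then show "S t ((1 / h) *\<^sub>R (S h x - x)) = (S (h + t) x - S t x) /\<^sub>R (h + t - t)"
        using lin by (simp add: linear_simps divide_inverse)
    qed
    ultimately show "((\<lambda>h. (S (h + t) x - S t x) /\<^sub>R (h + t - t)) \<longlongrightarrow> S t (A x)) (at_right 0)"
      by (simp add: tendsto_cong)
  qed
  show ?thesis
  proof (cases "t = 0")
    case True
    then show ?thesis using R by (simp add: has_vector_derivative_iff_diff_quotient at_within_Ici_at_right)
  next
    case False
    with t have tp: "0 < t" by simp
    obtain C where C: "C \<ge> 0" "\<And>r z. 0 \<le> r \<Longrightarrow> r \<le> t \<Longrightarrow> norm (S r z) \<le> C * norm z"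
      using C0_semigroup_boundedE[OF generator_C0_semigroup[OF g]] by blast
    have L: "((\<lambda>r. (S r x - S t x) /\<^sub>R (r - t)) \<longlongrightarrow> S t (A x)) (at_left t)"
      unfolding filterlim_at_left_to_right filterlim_at_right_to_0[of _ _ "-t"]
    proof -
      have ev: "eventually (\<lambda>h. bounded_linear (S (t - h)) \<and> (\<forall>z. norm (S (t - h) z) \<le> C * norm z)) (at_right 0)"
        using eventually_at_right_0_less[OF tp] by (rule eventually_mono) (auto intro: C0_semigroup_bounded_linear[OF c0] C)
      have "((\<lambda>h. S (t - h) ((1 / h) *\<^sub>R (S h x - x))) \<longlongrightarrow> S t (A x)) (at_right 0)"
        by (rule uniformly_bounded_apply_tendsto[OF ev generator_tendsto[OF g x] C0_semigroup_tendsto_left[OF c0 tp]])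
      moreover have "eventually (\<lambda>h. S (t - h) ((1 / h) *\<^sub>R (S h x - x)) = (S (- (h + - t)) x - S t x) /\<^sub>R (- (h + - t) - t)) (at_right 0)"
        using eventually_at_right_0_less[OF tp]
      proof (rule eventually_mono)
        fix h :: real assume h: "0 < h \<and> h < t"
        have lin': "bounded_linear (S (t - h))" using c0 h by (intro C0_semigroup_bounded_linear) auto
        have "S t x = S (t - h) (S h x)" using C0_semigroup_add[OF c0, of "t - h" h x] h by simp
        then show "S (t - h) ((1 / h) *\<^sub>R (S h x - x)) = (S (- (h + - t)) x - S t x) /\<^sub>R (- (h + - t) - t)"
          using lin' h by (simp add: linear_simps algebra_simps divide_inverse)
      qed
      ultimately show "((\<lambda>h. (S (- (h + - t)) x - S t x) /\<^sub>R (- (h + - t) - t)) \<longlongrightarrow> S t (A x)) (at_right 0)"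
        by (simp add: tendsto_cong)
    qed
    have "at t within {0..} = at t"
      using tp by (intro at_within_interior) simp
    then show ?thesis
      using filterlim_split_at[OF L R] by (simp add: has_vector_derivative_iff_diff_quotient)
  qed
qed

lemma semigroup_has_vector_derivative:
  fixes S :: "real \<Rightarrow> 'a::banach \<Rightarrow> 'a"
  assumes g: "is_generator D A S" and x: "x \<in> D" and t: "0 < t"
  shows "((\<lambda>r. S r x) has_vector_derivative S t (A x)) (at t)"
proof -
  have "at t within {0..} = at t"
    using t by (intro at_within_interior) simp
  then show ?thesis using semigroup_has_vector_derivative_within[OF g x, of t] t by simp
qed

lemma generator_domain_scaleR:
  assumes g: "is_generator D A S" and y: "y \<in> D"
  shows "c *\<^sub>R y \<in> D"
proof (rule generator_domainI[OF g])
  have c0: "C0_semigroup S" using g by (rule generator_C0_semigroup)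
  have "((\<lambda>h. c *\<^sub>R ((1 / h) *\<^sub>R (S h y - y))) \<longlongrightarrow> c *\<^sub>R A y) (at_right 0)"
    by (intro tendsto_intros generator_tendsto[OF g y])
  moreover have "eventually (\<lambda>h. c *\<^sub>R ((1 / h) *\<^sub>R (S h y - y)) = (1 / h) *\<^sub>R (S h (c *\<^sub>R y) - c *\<^sub>R y)) (at_right 0)"
    using eventually_at_right_less[of 0]
    by (rule eventually_mono) (simp add: linear_simps C0_semigroup_bounded_linear[OF c0] algebra_simps)
  ultimately show "((\<lambda>h. (1 / h) *\<^sub>R (S h (c *\<^sub>R y) - c *\<^sub>R y)) \<longlongrightarrow> c *\<^sub>R A y) (at_right 0)"
    by (simp add: tendsto_cong)
qed

lemma semigroup_integral_has_vector_derivative: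
  fixes S :: "real \<Rightarrow> 'a::banach \<Rightarrow> 'a"
  assumes c0: "C0_semigroup S" and h: "0 \<le> h" "h \<le> H"
  shows "((\<lambda>h. integral {0..h} (\<lambda>r. S r x)) has_vector_derivative S h x) (at h within {0..H})"
  by (rule integral_has_vector_derivative[OF continuous_on_subset[OF C0_semigroup_continuous[OF c0]]]) (use h in auto)

lemma semigroup_integral_average_tendsto:
  fixes S :: "real \<Rightarrow> 'a::banach \<Rightarrow> 'a"
  assumes c0: "C0_semigroup S"
  shows "((\<lambda>k. (1 / k) *\<^sub>R integral {0..k} (\<lambda>r. S r x)) \<longlongrightarrow> x) (at_right 0)"
  using semigroup_integral_has_vector_derivative[OF c0, of 0 1 x]
  by (simp add: has_vector_derivative_iff_diff_quotient at_within_Icc_at_right C0_semigroup_0[OF c0] divide_inverse)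

lemma semigroup_integral_shift:
  fixes S :: "real \<Rightarrow> 'a::banach \<Rightarrow> 'a"
  assumes c0: "C0_semigroup S" and k: "0 \<le> k" and h: "0 \<le> h"
  shows "S k (integral {0..h} (\<lambda>r. S r x)) = integral {0..h + k} (\<lambda>r. S r x) - integral {0..k} (\<lambda>r. S r x)"
proof -
  define F where "F h = integral {0..h} (\<lambda>r. S r x)" for h
  have dF: "(F has_vector_derivative S h x) (at h within {0..H})" if "0 \<le> h" "h \<le> H" for h H
    unfolding F_def using semigroup_integral_has_vector_derivative[OF c0 that] .
  define G where "G u = S k (F u) - F (u + k) + F k" for u
  have lin: "bounded_linear (S k)" using c0 k by (rule C0_semigroup_bounded_linear)
  have "\<exists>c. \<forall>u\<in>{0..h}. G u = c"
  proof (rule has_derivative_zero_constant)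
    fix u assume u: "u \<in> {0..h}"
    have 1: "((\<lambda>u. S k (F u)) has_vector_derivative S k (S u x)) (at u within {0..h})"
      by (rule bounded_linear.has_vector_derivative[OF lin dF]) (use u in auto)
    have 2: "((F \<circ> (\<lambda>u. u + k)) has_vector_derivative (1::real) *\<^sub>R S (u + k) x) (at u within {0..h})"
    proof (rule vector_diff_chain_within)
      show "((\<lambda>u. u + k) has_vector_derivative 1) (at u within {0..h})"
        by (auto intro!: derivative_eq_intros)
      show "(F has_vector_derivative S (u + k) x) (at (u + k) within (\<lambda>u. u + k) ` {0..h})"
        by (rule has_vector_derivative_within_subset[OF dF[of "u + k" "h + k"]]) (use u k in auto)
    qed
    have "S k (S u x) = S (u + k) x" using C0_semigroup_add[OF c0, of k u x] u k by (simp add: add.commute)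
    then have "(G has_vector_derivative 0) (at u within {0..h})"
      unfolding G_def using 1 2 by (auto intro!: derivative_eq_intros simp: o_def)
    then show "(G has_derivative (\<lambda>h. 0)) (at u within {0..h})"
      by (simp add: has_vector_derivative_def)
  qed auto
  then obtain c where "\<forall>u\<in>{0..h}. G u = c" by blast
  then have "G h = G 0" using h by auto
  also have "G 0 = 0" using lin by (simp add: G_def F_def linear_simps)
  finally show ?thesis by (simp add: G_def F_def algebra_simps)
qed

lemma semigroup_integral_in_domain:
  fixes S :: "real \<Rightarrow> 'a::banach \<Rightarrow> 'a"
  assumes g: "is_generator D A S" and h: "0 < h"
  shows "integral {0..h} (\<lambda>r. S r x) \<in> D"
proof (rule generator_domainI[OF g])
  have c0: "C0_semigroup S" using g by (rule generator_C0_semigroup)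
  define F where "F h = integral {0..h} (\<lambda>r. S r x)" for h
  have "at h within {0..h+1} = at h" using h by (intro at_within_interior) auto
  then have "((\<lambda>r. (F r - F h) /\<^sub>R (r - h)) \<longlongrightarrow> S h x) (at h)"
    using semigroup_integral_has_vector_derivative[OF c0, of h "h + 1" x] h
    by (simp add: has_vector_derivative_iff_diff_quotient F_def)
  then have "((\<lambda>r. (F r - F h) /\<^sub>R (r - h)) \<longlongrightarrow> S h x) (at_right h)"
    by (rule tendsto_within_subset) simp
  then have l1: "((\<lambda>k. (F (k + h) - F h) /\<^sub>R k) \<longlongrightarrow> S h x) (at_right 0)"
    unfolding filterlim_at_right_to_0[of _ _ h] by simp
  have "((\<lambda>k. (F (k + h) - F h) /\<^sub>R k - (1 / k) *\<^sub>R F k) \<longlongrightarrow> S h x - x) (at_right 0)"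
    unfolding F_def by (intro tendsto_diff l1[unfolded F_def] semigroup_integral_average_tendsto[OF c0])
  moreover have "eventually (\<lambda>k. (F (k + h) - F h) /\<^sub>R k - (1 / k) *\<^sub>R F k = (1 / k) *\<^sub>R (S k (F h) - F h)) (at_right 0)"
    using eventually_at_right_less[of 0]
  proof (rule eventually_mono)
    fix k :: real assume k: "0 < k"
    have "S k (F h) = F (h + k) - F k" unfolding F_def using semigroup_integral_shift[OF c0, of k h] k h by simp
    then show "(F (k + h) - F h) /\<^sub>R k - (1 / k) *\<^sub>R F k = (1 / k) *\<^sub>R (S k (F h) - F h)"
      by (simp add: divide_inverse add.commute scaleR_diff_right)
  qed
  ultimately show "((\<lambda>k. (1 / k) *\<^sub>R (S k (F h) - F h)) \<longlongrightarrow> S h x - x) (at_right 0)"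
    by (simp add: tendsto_cong)
qed

lemma generator_domain_dense:
  fixes S :: "real \<Rightarrow> 'a::banach \<Rightarrow> 'a"
  assumes g: "is_generator D A S"
  shows "closure D = UNIV"
proof -
  have c0: "C0_semigroup S" using g by (rule generator_C0_semigroup)
  have "x \<in> closure D" for x
    unfolding closure_approachable
  proof (intro allI impI)
    fix e :: real assume e: "0 < e"
    have "eventually (\<lambda>k. dist ((1 / k) *\<^sub>R integral {0..k} (\<lambda>r. S r x)) x < e \<and> 0 < k) (at_right 0)"
      using tendstoD[OF semigroup_integral_average_tendsto[OF c0] e] eventually_at_right_less[of 0]
      by (rule eventually_conj)
    then obtain k where k: "dist ((1 / k) *\<^sub>R integral {0..k} (\<lambda>r. S r x)) x < e" "0 < k"
      using eventually_happens by fastforce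
    moreover have "(1 / k) *\<^sub>R integral {0..k} (\<lambda>r. S r x) \<in> D"
      by (rule generator_domain_scaleR[OF g semigroup_integral_in_domain[OF g k(2)]])
    ultimately show "\<exists>y\<in>D. dist y x < e" by metis
  qed
  then show ?thesis by auto
qed

lemma C0_semigroup_continuous_reflected:
  assumes c0: "C0_semigroup S"
  shows "continuous_on {..t} (\<lambda>r. S (t - r) z)"
proof -
  have "continuous_on {..t} ((\<lambda>r. S r z) \<circ> (\<lambda>r. t - r))"
    by (rule continuous_on_compose) (auto intro!: continuous_intros intro: continuous_on_subset[OF C0_semigroup_continuous[OF c0]])
  then show ?thesis by (simp add: o_def)
qed

lemma semigroup_reflected_has_vector_derivative:
  fixes S :: "real \<Rightarrow> 'a::banach \<Rightarrow> 'a"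
  assumes g: "is_generator D A S" and y: "y \<in> D" and r: "r < t"
  shows "((\<lambda>r. S (t - r) y) has_vector_derivative - S (t - r) (A y)) (at r within X)"
proof -
  have "(((\<lambda>u. S u y) \<circ> (\<lambda>r. t - r)) has_vector_derivative (-1) *\<^sub>R S (t - r) (A y)) (at r within X)"
  proof (rule vector_diff_chain_within)
    show "((\<lambda>r. t - r) has_vector_derivative -1) (at r within X)"
      by (auto intro!: derivative_eq_intros)
    show "((\<lambda>u. S u y) has_vector_derivative S (t - r) (A y)) (at (t - r) within (\<lambda>r. t - r) ` X)"
      using semigroup_has_vector_derivative[OF g y, of "t - r"] r by (auto intro: has_vector_derivative_at_within)
  qed
  then show ?thesis by (simp add: o_def)
qed

lemma semigroup_intertwining_on_domain:
  fixes S :: "real \<Rightarrow> 'e::banach \<Rightarrow> 'e" and W :: "real \<Rightarrow> 'v::banach \<Rightarrow> 'v"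
  assumes L: "bounded_linear L" and g: "is_generator D A S" and gW: "is_generator DW AW W"
    and LD: "\<And>v. v \<in> DW \<Longrightarrow> L v \<in> D \<and> A (L v) = L (AW v)"
    and s: "0 \<le> s" and v: "v \<in> DW"
  shows "L (W s v) = S s (L v)"
proof -
  have c0: "C0_semigroup S" using g by (rule generator_C0_semigroup)
  have c0W: "C0_semigroup W" using gW by (rule generator_C0_semigroup)
  obtain C where C: "C \<ge> 0" "\<And>r z. 0 \<le> r \<Longrightarrow> r \<le> s \<Longrightarrow> norm (S r z) \<le> C * norm z"
    using C0_semigroup_boundedE[OF c0] by blast
  have bd: "bounded_linear (S (s - p)) \<and> (\<forall>z. norm (S (s - p) z) \<le> C * norm z)" if "0 \<le> p" "p \<le> s" for p
    using that by (auto intro: C0_semigroup_bounded_linear[OF c0] C)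
  define f where "f r = S (s - r) (L (W r v))" for r
  have "f s = f 0"
  proof (rule zero_vector_derivative_imp_eq[OF s])
    show "continuous_on {0..s} f"
      unfolding f_def
    proof (rule continuous_on_operator_apply[where T="\<lambda>p. S (s - p)" and y="\<lambda>p. L (W p v)" and C=C])
      show "continuous_on {0..s} (\<lambda>p. S (s - p) z)" for z
        by (rule continuous_on_subset[OF C0_semigroup_continuous_reflected[OF c0]]) auto
      show "continuous_on {0..s} (\<lambda>p. L (W p v))"
        by (rule continuous_on_compose2[OF linear_continuous_on[OF L] continuous_on_subset[OF C0_semigroup_continuous[OF c0W]]]) auto
    qed (use bd in auto)
    fix r assume r: "r \<in> {0<..<s}"
    have W_dom: "W r v \<in> DW" "AW (W r v) = W r (AW v)" using generator_semigroup_commute[OF gW v] r by auto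
    have "(f has_vector_derivative S (s - r) (L (W r (AW v))) + - S (s - r) (A (L (W r v)))) (at r within {0<..<s})"
      unfolding f_def
    proof (rule has_vector_derivative_operator_apply[where T="\<lambda>p. S (s - p)" and y="\<lambda>p. L (W p v)" and C=C])
      show "((\<lambda>p. S (s - p) z) \<longlongrightarrow> S (s - r) z) (at r within {0<..<s})" for z
      proof -
        have "((\<lambda>p. S (s - p) z) \<longlongrightarrow> S (s - r) z) (at r within {..s})"
          using C0_semigroup_continuous_reflected[OF c0, of s z] r by (auto simp: continuous_on_def)
        then show ?thesis by (rule tendsto_within_subset) auto
      qed
      show "((\<lambda>p. L (W p v)) has_vector_derivative L (W r (AW v))) (at r within {0<..<s})"
        by (rule bounded_linear.has_vector_derivative[OF L])
          (use semigroup_has_vector_derivative[OF gW v, of r] r in \<open>auto intro: has_vector_derivative_at_within\<close>)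
      show "((\<lambda>p. S (s - p) (L (W r v))) has_vector_derivative - S (s - r) (A (L (W r v)))) (at r within {0<..<s})"
        by (rule semigroup_reflected_has_vector_derivative[OF g]) (use LD[OF W_dom(1)] r in auto)
    qed (use r bd in auto)
    moreover have "at r within {0<..<s} = at r" using r by (intro at_within_open) auto
    moreover have "A (L (W r v)) = L (W r (AW v))" using LD[OF W_dom(1)] W_dom(2) by simp
    ultimately show "(f has_vector_derivative 0) (at r)" by simp
  qed
  then show ?thesis using s by (simp add: f_def C0_semigroup_0[OF c0] C0_semigroup_0[OF c0W])
qed

lemma semigroup_intertwining:
  fixes S :: "real \<Rightarrow> 'e::banach \<Rightarrow> 'e" and W :: "real \<Rightarrow> 'v::banach \<Rightarrow> 'v"
  assumes L: "bounded_linear L" and g: "is_generator D A S" and gW: "is_generator DW AW W"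
    and LD: "\<And>v. v \<in> DW \<Longrightarrow> L v \<in> D \<and> A (L v) = L (AW v)"
    and s: "0 \<le> s"
  shows "L (W s v) = S s (L v)"
proof -
  have "closure DW \<subseteq> {v. L (W s v) - S s (L v) = 0}"
  proof (rule closure_minimal)
    show "DW \<subseteq> {v. L (W s v) - S s (L v) = 0}"
      using semigroup_intertwining_on_domain[OF L g gW LD s] by auto
    have "bounded_linear (S s)" "bounded_linear (W s)"
      using s by (auto intro: C0_semigroup_bounded_linear generator_C0_semigroup g gW)
    then show "closed {v. L (W s v) - S s (L v) = 0}"
      using L by (intro closed_Collect_eq continuous_intros continuous_on_compose2[OF linear_continuous_on[OF L]]
          continuous_on_compose2[OF linear_continuous_on[of "S s"]] linear_continuous_on) auto
  qed
  then show ?thesis using generator_domain_dense[OF gW] by auto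
qed

lemma generator_unique:
  fixes S S' :: "real \<Rightarrow> 'a::banach \<Rightarrow> 'a"
  assumes g: "is_generator D A S" and g': "is_generator D A S'" and t: "0 \<le> t"
  shows "S t = S' t"
  using semigroup_intertwining[OF bounded_linear_ident g' g _ t] by (auto simp: fun_eq_iff)

lemma part_operator_apply:
  assumes "v \<in> partD j D A"
  shows "j (partA j D A v) = A (j v)"
  using assms unfolding partD_def partA_def by (auto intro: f_inv_into_f)

lemma part_semigroup_restrict:
  fixes j :: "'v::banach \<Rightarrow> 'e::banach"
  assumes j: "bounded_linear j"
    and g: "is_generator D A S" and gW: "is_generator (partD j D A) (partA j D A) W"
    and s: "0 \<le> s"
  shows "j (W s v) = S s (j v)"
  by (rule semigroup_intertwining[OF j g gW _ s]) (auto simp: partD_def part_operator_apply)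

lemma bounded_linear_pointwise_limit:
  fixes T :: "'i \<Rightarrow> 'a::real_normed_vector \<Rightarrow> 'b::real_normed_vector"
  assumes F: "F \<noteq> bot"
    and bd: "eventually (\<lambda>h. bounded_linear (T h) \<and> (\<forall>v. norm (T h v) \<le> C * norm v)) F"
    and lim: "\<And>v. ((\<lambda>h. T h v) \<longlongrightarrow> L v) F"
  shows "bounded_linear L"
proof (rule bounded_linear_intro[where K=C])
  fix v w
  have "((\<lambda>h. T h v + T h w) \<longlongrightarrow> L v + L w) F" by (intro tendsto_add lim)
  moreover have "eventually (\<lambda>h. T h v + T h w = T h (v + w)) F"
    using bd by (rule eventually_mono) (auto simp: linear_simps)
  ultimately have "((\<lambda>h. T h (v + w)) \<longlongrightarrow> L v + L w) F" by (simp add: tendsto_cong)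
  then show "L (v + w) = L v + L w" using tendsto_unique[OF F lim] by simp
next
  fix r v
  have "((\<lambda>h. r *\<^sub>R T h v) \<longlongrightarrow> r *\<^sub>R L v) F" by (intro tendsto_scaleR tendsto_const lim)
  moreover have "eventually (\<lambda>h. r *\<^sub>R T h v = T h (r *\<^sub>R v)) F"
    using bd by (rule eventually_mono) (auto simp: linear_simps)
  ultimately have "((\<lambda>h. T h (r *\<^sub>R v)) \<longlongrightarrow> r *\<^sub>R L v) F" by (simp add: tendsto_cong)
  then show "L (r *\<^sub>R v) = r *\<^sub>R L v" using tendsto_unique[OF F lim] by simp
next
  fix v
  have "norm (L v) \<le> C * norm v"
  proof (rule tendsto_le[OF F tendsto_const])
    show "((\<lambda>h. norm (T h v)) \<longlongrightarrow> norm (L v)) F" by (intro tendsto_intros lim)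
    show "eventually (\<lambda>h. norm (T h v) \<le> C * norm v) F" using bd by (rule eventually_mono) auto
  qed
  then show "norm (L v) \<le> norm v * C" by (simp add: mult.commute)
qed

lemma generator_bounded_on_embedded:
  fixes S :: "real \<Rightarrow> 'e::banach \<Rightarrow> 'e" and j :: "'v::banach \<Rightarrow> 'e"
  assumes g: "is_generator D A S" and j: "bounded_linear j" and rj: "range j \<subseteq> D"
  shows "bounded_linear (\<lambda>v. A (j v))"
proof -
  have c0: "C0_semigroup S" using g by (rule generator_C0_semigroup)
  define T where "T h v = (1 / h) *\<^sub>R (S h (j v) - j v)" for h v
  have Tlin: "bounded_linear (T h)" if "h \<in> {0<..1}" for h
  proof -
    have Sh: "bounded_linear (S h)" using that C0_semigroup_bounded_linear[OF c0, of h] by auto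
    show ?thesis unfolding T_def
      by (rule bounded_linear_compose[OF bounded_linear_scaleR_right bounded_linear_sub[OF bounded_linear_compose[OF Sh j] j]])
  qed
  have lim: "((\<lambda>h. T h v) \<longlongrightarrow> A (j v)) (at_right 0)" for v
    unfolding T_def using rj by (intro generator_tendsto[OF g]) auto
  have "\<exists>C. \<forall>h\<in>{0<..1}. \<forall>v. norm (T h v) \<le> C * norm v"
  proof (rule uniform_boundedness[OF Tlin])
    fix v
    have "eventually (\<lambda>h. dist (T h v) (A (j v)) < 1) (at_right 0)" using tendstoD[OF lim] by simp
    then obtain b where b: "b > 0" "\<And>h. 0 < h \<Longrightarrow> h < b \<Longrightarrow> dist (T h v) (A (j v)) < 1"
      unfolding eventually_at_right_field by auto
    define b' where "b' = min (b / 2) 1"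
    have b': "0 < b'" "b' < b" "b' \<le> 1" using b by (auto simp: b'_def)
    have "continuous_on {b'..1} (\<lambda>h. T h v)"
      unfolding T_def using b'
      by (intro continuous_intros continuous_on_subset[OF C0_semigroup_continuous[OF c0]]) auto
    then obtain B where B: "0 \<le> B" "\<And>h. b' \<le> h \<Longrightarrow> h \<le> 1 \<Longrightarrow> norm (T h v) \<le> B"
      by (rule continuous_on_Icc_norm_boundE) auto
    have "norm (T h v) \<le> max B (norm (A (j v)) + 1)" if "h \<in> {0<..1}" for h
    proof (cases "h < b'")
      case True
      then have "dist (T h v) (A (j v)) < 1" using b b' that by auto
      then have "norm (T h v) \<le> norm (A (j v)) + 1"
        by (metis dist_norm less_imp_le norm_triangle_ineq2 add.commute diff_le_eq order_trans)
      then show ?thesis by simp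
    next
      case False
      then have "norm (T h v) \<le> B" using B that by auto
      then show ?thesis by simp
    qed
    then show "\<exists>B. \<forall>h\<in>{0<..1}. norm (T h v) \<le> B" by blast
  qed
  then obtain C where C: "\<And>h v. h \<in> {0<..1} \<Longrightarrow> norm (T h v) \<le> C * norm v" by blast
  have "eventually (\<lambda>h. h \<in> {0<..1}) (at_right (0::real))"
    using eventually_at_right_0_less[of 1] by (auto elim: eventually_mono)
  then have "eventually (\<lambda>h. bounded_linear (T h) \<and> (\<forall>v. norm (T h v) \<le> C * norm v)) (at_right 0)"
    by (rule eventually_mono) (use Tlin C in auto)
  then show ?thesis by (rule bounded_linear_pointwise_limit[OF trivial_limit_at_right_real _ lim])
qed

lemma sg_eq_generated:
  fixes S :: "real \<Rightarrow> 'a::banach \<Rightarrow> 'a"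
  assumes g: "is_generator D A S" and t: "0 \<le> t"
  shows "sg D A t = S t"
proof -
  have "\<exists>S. is_generator D A S" using g by blast
  then have "is_generator D A (sg D A)" unfolding sg_def by (rule someI_ex)
  then show ?thesis using generator_unique[OF _ g t] by blast
qed

lemma admissible_semigroup_in_range:
  fixes S :: "real \<Rightarrow> 'e::banach \<Rightarrow> 'e" and j :: "'v::real_normed_vector \<Rightarrow> 'e"
  assumes g: "is_generator D A S" and adm: "admissible j D A" and t: "0 \<le> t"
  shows "S t (j w) = j (inv j (S t (j w)))"
proof -
  have "sg D A t (j w) \<in> range j" using adm t unfolding admissible_def by blast
  then show ?thesis using sg_eq_generated[OF g t] by (metis f_inv_into_f)
qed

lemma admissible_semigroup_continuous:
  fixes S :: "real \<Rightarrow> 'e::banach \<Rightarrow> 'e" and j :: "'v::real_normed_vector \<Rightarrow> 'e"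
  assumes g: "is_generator D A S" and adm: "admissible j D A"
  shows "continuous_on {0..} (\<lambda>t. inv j (S t (j w)))"
proof -
  have "continuous_on {0..} (\<lambda>t. inv j (sg D A t (j w)))"
    using adm unfolding admissible_def C0_semigroup_def by blast
  then show ?thesis by (rule continuous_on_eq) (auto simp: sg_eq_generated[OF g])
qed

lemma corr_evol_sys_growth_bound:
  assumes R: "corr_evol_sys j A M \<omega> R" and M: "0 \<le> M" and st: "0 \<le> s" "s \<le> t" "t \<le> K"
  shows "bounded_linear (R t s) \<and> (\<forall>x. norm (R t s x) \<le> growth_bound M \<omega> K * norm x)"
proof (intro conjI allI)
  show "bounded_linear (R t s)" using R st by (simp add: corr_evol_sys_def)
  show "norm (R t s x) \<le> growth_bound M \<omega> K * norm x" for x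
    by (rule norm_le_growth_bound[where s = s and t = t]) (use R M st in \<open>auto simp: corr_evol_sys_def\<close>)
qed

lemma corr_evol_sys_continuous_snd:
  assumes "corr_evol_sys j A M \<omega> R"
  shows "continuous_on {0..t} (\<lambda>r. R t r z)"
proof -
  have cc: "continuous_on {(t, s). 0 \<le> s \<and> s \<le> t} (\<lambda>(t, s). R t s z)"
    using assms unfolding corr_evol_sys_def by blast
  have "continuous_on {0..t} ((\<lambda>(t, s). R t s z) \<circ> (\<lambda>\<rho>. (t, \<rho>)))"
    by (rule continuous_on_compose[OF _ continuous_on_subset[OF cc]]) (auto intro!: continuous_intros)
  then show ?thesis by (simp add: o_def)
qed

section \<open>Products of semigroups frozen on a grid\<close>

lemma sgprod_split:
  "sgprod S \<tau> \<sigma> (k + m) x = sgprod S (\<lambda>i. \<tau> (k + i)) (\<lambda>i. \<sigma> (k + i)) m (sgprod S \<tau> \<sigma> k x)"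
  by (induction m) auto

lemma sgprod_cong:
  "(\<And>i. i < N \<Longrightarrow> \<sigma> i = \<sigma>' i) \<Longrightarrow> sgprod S \<tau> \<sigma> N x = sgprod S \<tau> \<sigma>' N x"
  by (induction N) auto

lemma sgprod_zero:
  assumes "\<And>i. i < N \<Longrightarrow> \<sigma> i = 0" "\<And>i y. i < N \<Longrightarrow> S (\<tau> i) 0 y = y"
  shows "sgprod S \<tau> \<sigma> N x = x"
  using assms by (induction N) auto

lemma sgprod_bounded_linear:
  "(\<And>i. i < N \<Longrightarrow> bounded_linear (S (\<tau> i) (\<sigma> i))) \<Longrightarrow> bounded_linear (sgprod S \<tau> \<sigma> N)"
proof (induction N)
  case 0 then show ?case by (simp add: bounded_linear_ident[unfolded id_def])
next
  case (Suc N)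
  have 1: "bounded_linear (S (\<tau> N) (\<sigma> N))" using Suc.prems by simp
  have 2: "bounded_linear (sgprod S \<tau> \<sigma> N)" using Suc by simp
  show ?case using bounded_linear_compose[OF 1 2] by simp
qed

definition cell_overlap :: "real \<Rightarrow> real \<Rightarrow> real \<Rightarrow> nat \<Rightarrow> real" where
  "cell_overlap \<delta> t s i = max 0 (min t (real (Suc i) * \<delta>) - max s (real i * \<delta>))"

lemma cell_overlap_nonneg: "0 \<le> cell_overlap \<delta> t s i" by (simp add: cell_overlap_def)
lemma cell_overlap_le: "0 \<le> \<delta> \<Longrightarrow> cell_overlap \<delta> t s i \<le> \<delta>"
  by (simp add: cell_overlap_def algebra_simps)
lemma cell_overlap_zero: "t \<le> real i * \<delta> \<Longrightarrow> cell_overlap \<delta> t s i = 0"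
  by (simp add: cell_overlap_def)

lemma sum_cell_overlap:
  assumes d: "0 < \<delta>" and st: "s \<le> t" and s: "0 \<le> s"
  shows "(\<Sum>i<N. cell_overlap \<delta> t s i) = max 0 (min t (real N * \<delta>) - s)"
proof (induction N)
  case 0 then show ?case using st d s by (simp add: max_def min_def)
next
  case (Suc N)
  have "(\<Sum>i<Suc N. cell_overlap \<delta> t s i) = max 0 (min t (real N * \<delta>) - s) + cell_overlap \<delta> t s N"
    using Suc by simp
  also have "\<dots> = max 0 (min t (real (Suc N) * \<delta>) - s)"
    using d st s by (simp add: cell_overlap_def max_def min_def algebra_simps)
  finally show ?case .
qed

definition grid_floor :: "real \<Rightarrow> real \<Rightarrow> real" where "grid_floor \<delta> r = real (nat \<lfloor>r / \<delta>\<rfloor>) * \<delta>"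

lemma grid_cell:
  assumes d: "0 < \<delta>" and r: "0 \<le> r" and ng: "\<And>k. r \<noteq> real k * \<delta>"
  shows "real (nat \<lfloor>r / \<delta>\<rfloor>) * \<delta> < r" "r < real (Suc (nat \<lfloor>r / \<delta>\<rfloor>)) * \<delta>"
proof -
  have f0: "0 \<le> \<lfloor>r / \<delta>\<rfloor>" using d r by simp
  have "real_of_int \<lfloor>r / \<delta>\<rfloor> \<le> r / \<delta>" by (rule of_int_floor_le)
  then have "real_of_int \<lfloor>r / \<delta>\<rfloor> * \<delta> \<le> r" using d by (metis pos_le_divide_eq)
  then have le: "real (nat \<lfloor>r / \<delta>\<rfloor>) * \<delta> \<le> r" using f0 by simp
  moreover have "real (nat \<lfloor>r / \<delta>\<rfloor>) * \<delta> \<noteq> r" using ng by metis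
  ultimately show "real (nat \<lfloor>r / \<delta>\<rfloor>) * \<delta> < r" by simp
  have "r / \<delta> < real_of_int \<lfloor>r / \<delta>\<rfloor> + 1" by (rule real_of_int_floor_add_one_gt)
  then have "r < (real_of_int \<lfloor>r / \<delta>\<rfloor> + 1) * \<delta>" using d by (metis pos_divide_less_eq)
  then show "r < real (Suc (nat \<lfloor>r / \<delta>\<rfloor>)) * \<delta>" using f0 by (simp add: add.commute)
qed

lemma grid_floor_bounds:
  assumes d: "0 < \<delta>" and r: "0 \<le> r"
  shows "0 \<le> grid_floor \<delta> r" "grid_floor \<delta> r \<le> r" "r - \<delta> < grid_floor \<delta> r"
proof -
  have f0: "0 \<le> \<lfloor>r / \<delta>\<rfloor>" using d r by simp
  show "0 \<le> grid_floor \<delta> r" using d by (simp add: grid_floor_def)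
  have "real_of_int \<lfloor>r / \<delta>\<rfloor> \<le> r / \<delta>" by (rule of_int_floor_le)
  then have "real_of_int \<lfloor>r / \<delta>\<rfloor> * \<delta> \<le> r" using d by (metis pos_le_divide_eq)
  then show "grid_floor \<delta> r \<le> r" using f0 by (simp add: grid_floor_def)
  have "r / \<delta> < real_of_int \<lfloor>r / \<delta>\<rfloor> + 1" by (rule real_of_int_floor_add_one_gt)
  then have "r < (real_of_int \<lfloor>r / \<delta>\<rfloor> + 1) * \<delta>" using d by (metis pos_divide_less_eq)
  then show "r - \<delta> < grid_floor \<delta> r" using f0 by (simp add: grid_floor_def algebra_simps)
qed

lemma grid_cell_index_less:
  assumes d: "0 < \<delta>" and "real k * \<delta> < r" "r < t" "t \<le> real N * \<delta>"
  shows "k < N"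
proof -
  have "real k * \<delta> < real N * \<delta>" using assms by linarith
  then show ?thesis using d by simp
qed

lemma not_grid_point:
  assumes d: "0 < \<delta>" and "r < real N * \<delta>" "r \<notin> (\<lambda>k. real k * \<delta>) ` {..N}"
  shows "r \<noteq> real k * \<delta>"
proof
  assume r: "r = real k * \<delta>"
  show False
  proof (cases "k \<le> N")
    case True then show False using assms r by auto
  next
    case False
    then have "real N * \<delta> \<le> real k * \<delta>" using d by (intro mult_right_mono) auto
    then show False using assms r by simp
  qed
qed

definition "mesh n = 1 / real (Suc n)"
definition "grid_size n K = nat \<lceil>K * real (Suc n)\<rceil> + 1"

lemma mesh_pos: "0 < mesh n" by (simp add: mesh_def)
lemma mesh_antimono: "n0 \<le> n \<Longrightarrow> mesh n \<le> mesh n0" by (simp add: mesh_def frac_le)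

lemma grid_size_covers: "K \<le> real (grid_size n K) * mesh n"
proof -
  have "K * real (Suc n) \<le> real (grid_size n K)"
    unfolding grid_size_def by (metis le_nat_iff of_int_ceiling_le_add_one nat_ceiling_le_eq order_refl
        of_nat_add of_nat_1 real_nat_ceiling_ge add_increasing2 zero_le_one)
  then show ?thesis by (simp add: mesh_def field_simps)
qed

lemma grid_size_mono: "K \<le> K' \<Longrightarrow> grid_size n K \<le> grid_size n K'"
  unfolding grid_size_def by (intro add_right_mono nat_mono ceiling_mono mult_right_mono) auto

lemma grid_cellE:
  assumes d: "0 < \<delta>" and r: "0 \<le> r" "r < t" "t \<le> real N * \<delta>"
    and off_grid: "r \<notin> (\<lambda>k. real k * \<delta>) ` {..N}"
  obtains k where "real k * \<delta> < r" "r < real (Suc k) * \<delta>" "k < N" "grid_floor \<delta> r = real k * \<delta>"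
proof -
  have "r \<noteq> real k * \<delta>" for k by (rule not_grid_point[OF d, of _ N]) (use r off_grid in auto)
  then have c: "real (nat \<lfloor>r / \<delta>\<rfloor>) * \<delta> < r" "r < real (Suc (nat \<lfloor>r / \<delta>\<rfloor>)) * \<delta>"
    by (rule grid_cell[OF d r(1)])+
  moreover have "nat \<lfloor>r / \<delta>\<rfloor> < N" by (rule grid_cell_index_less[OF d c(1) r(2,3)])
  ultimately show ?thesis using that by (simp add: grid_floor_def)
qed

lemma mesh_eventually_less:
  assumes "0 < \<eta>" obtains n1 where "\<And>n. n \<ge> n1 \<Longrightarrow> mesh n < \<eta>"
proof -
  obtain m where m: "0 < m" "inverse (real m) < \<eta>" using ex_inverse_of_nat_less[OF assms] by blast
  have "mesh n < \<eta>" if "n \<ge> m - 1" for n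
  proof -
    have "mesh n \<le> mesh (m - 1)" using that by (rule mesh_antimono)
    also have "mesh (m - 1) = inverse (real m)" using m by (simp add: mesh_def divide_inverse)
    finally show ?thesis using m by simp
  qed
  then show ?thesis using that by blast
qed

section \<open>Construction of the evolution system\<close>

locale hyperbolic_family =
  fixes j :: "'v::banach \<Rightarrow> 'e::banach" and D :: "real \<Rightarrow> 'e set" and A :: "real \<Rightarrow> 'e \<Rightarrow> 'e"
    and M \<omega> MV \<omega>V :: real
  assumes j_lin: "bounded_linear j" and j_dense: "closure (range j) = UNIV"
    and h1: "hyp1 D A M \<omega>" and h2: "hyp2 j D A MV \<omega>V" and h3: "hyp3 j D A"
begin

definition "SG \<tau> = sg (D \<tau>) (A \<tau>)"
definition "SGV \<tau> = sg (partD j (D \<tau>) (A \<tau>)) (partA j (D \<tau>) (A \<tau>))"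

lemma SG_generator: "0 \<le> \<tau> \<Longrightarrow> is_generator (D \<tau>) (A \<tau>) (SG \<tau>)"
proof -
  assume "0 \<le> \<tau>"
  then have "\<exists>S. is_generator (D \<tau>) (A \<tau>) S" using h1 unfolding hyp1_def by blast
  then show ?thesis unfolding SG_def sg_def by (rule someI_ex)
qed

lemma SGV_generator: "0 \<le> \<tau> \<Longrightarrow> is_generator (partD j (D \<tau>) (A \<tau>)) (partA j (D \<tau>) (A \<tau>)) (SGV \<tau>)"
proof -
  assume "0 \<le> \<tau>"
  then have "\<exists>S. is_generator (partD j (D \<tau>) (A \<tau>)) (partA j (D \<tau>) (A \<tau>)) S"
    using h2 unfolding hyp2_def hyp1_def by blast
  then show ?thesis unfolding SGV_def sg_def by (rule someI_ex)
qed

lemma SG_C0: "0 \<le> \<tau> \<Longrightarrow> C0_semigroup (SG \<tau>)" by (rule generator_C0_semigroup[OF SG_generator])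
lemma SG_0: "0 \<le> \<tau> \<Longrightarrow> SG \<tau> 0 x = x" using SG_C0 by simp
lemma SG_lin: "0 \<le> \<tau> \<Longrightarrow> 0 \<le> \<sigma> \<Longrightarrow> bounded_linear (SG \<tau> \<sigma>)" using SG_C0 C0_semigroup_bounded_linear by blast

lemma SG_eq: "(\<lambda>t. sg (D t) (A t)) = SG" by (simp add: SG_def fun_eq_iff)
lemma SGV_eq: "(\<lambda>t. sg (partD j (D t) (A t)) (partA j (D t) (A t))) = SGV" by (simp add: SGV_def fun_eq_iff)

lemma M_ge_1: "1 \<le> M" using h1 by (simp add: hyp1_def)
lemma MV_ge_1: "1 \<le> MV" using h2 by (simp add: hyp2_def hyp1_def)

lemma SG_product_bound:
  assumes "\<And>i. i < n \<Longrightarrow> 0 \<le> \<tau> i \<and> 0 \<le> \<sigma> i" "\<And>i k. i \<le> k \<Longrightarrow> k < n \<Longrightarrow> \<tau> i \<le> \<tau> k"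
  shows "norm (sgprod SG \<tau> \<sigma> n x) \<le> M * exp (\<omega> * (\<Sum>i<n. \<sigma> i)) * norm x"
  using h1 assms unfolding hyp1_def SG_eq by blast

lemma SGV_product_bound:
  assumes "\<And>i. i < n \<Longrightarrow> 0 \<le> \<tau> i \<and> 0 \<le> \<sigma> i" "\<And>i k. i \<le> k \<Longrightarrow> k < n \<Longrightarrow> \<tau> i \<le> \<tau> k"
  shows "norm (sgprod SGV \<tau> \<sigma> n x) \<le> MV * exp (\<omega>V * (\<Sum>i<n. \<sigma> i)) * norm x"
  using h2 assms unfolding hyp2_def hyp1_def SGV_eq by blast

lemma SG_bound:
  assumes "0 \<le> \<tau>" "0 \<le> \<sigma>" shows "norm (SG \<tau> \<sigma> x) \<le> M * exp (\<omega> * \<sigma>) * norm x"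
  using SG_product_bound[of 1 "\<lambda>_. \<tau>" "\<lambda>_. \<sigma>" x] assms by simp

lemma SGV_restrict: "0 \<le> \<tau> \<Longrightarrow> 0 \<le> \<sigma> \<Longrightarrow> j (SGV \<tau> \<sigma> v) = SG \<tau> \<sigma> (j v)"
  by (rule part_semigroup_restrict[OF j_lin SG_generator SGV_generator])

lemma embedded_in_domain: "0 \<le> \<tau> \<Longrightarrow> j v \<in> D \<tau>" using h3 by (auto simp: hyp3_def)
lemma AJ_lin: "0 \<le> \<tau> \<Longrightarrow> bounded_linear (\<lambda>v. A \<tau> (j v))" using h3 by (auto simp: hyp3_def)

definition "AJ \<tau> = Blinfun (\<lambda>v. A \<tau> (j v))"
lemma AJ_apply: "0 \<le> \<tau> \<Longrightarrow> blinfun_apply (AJ \<tau>) v = A \<tau> (j v)"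
  by (simp add: AJ_def bounded_linear_Blinfun_apply[OF AJ_lin])
lemma AJ_cont: "continuous_on {0..} AJ" using h3 by (simp add: hyp3_def AJ_def)
lemma AJ_bound: "0 \<le> \<tau> \<Longrightarrow> norm (A \<tau> (j v)) \<le> norm (AJ \<tau>) * norm v"
  using norm_blinfun[of "AJ \<tau>" v] AJ_apply by simp

(* The propagator of the piecewise constant family equal to A(k\<delta>) on [k\<delta>, (k+1)\<delta>), k < N. *)
definition "U \<delta> N t s = sgprod SG (\<lambda>i. real i * \<delta>) (cell_overlap \<delta> t s) N"
definition "UV \<delta> N t s = sgprod SGV (\<lambda>i. real i * \<delta>) (cell_overlap \<delta> t s) N"

lemma U_bound:
  assumes d: "0 < \<delta>" and st: "s \<le> t" "0 \<le> s" "t \<le> real N * \<delta>"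
  shows "norm (U \<delta> N t s x) \<le> M * exp (\<omega> * (t - s)) * norm x"
proof -
  have "(\<Sum>i<N. cell_overlap \<delta> t s i) = t - s" using sum_cell_overlap[OF d st(1) st(2), of N] st by simp
  moreover have "norm (sgprod SG (\<lambda>i. real i * \<delta>) (cell_overlap \<delta> t s) N x) \<le> M * exp (\<omega> * (\<Sum>i<N. cell_overlap \<delta> t s i)) * norm x"
  proof (rule SG_product_bound)
    show "0 \<le> real i * \<delta> \<and> 0 \<le> cell_overlap \<delta> t s i" for i using d by (simp add: cell_overlap_nonneg)
    show "real i * \<delta> \<le> real k * \<delta>" if "i \<le> k" for i k using d that by (simp add: mult_right_mono)
  qed
  ultimately show ?thesis unfolding U_def by simp
qed

lemma UV_bound:
  assumes d: "0 < \<delta>" and st: "s \<le> t" "0 \<le> s" "t \<le> real N * \<delta>"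
  shows "norm (UV \<delta> N t s x) \<le> MV * exp (\<omega>V * (t - s)) * norm x"
proof -
  have "(\<Sum>i<N. cell_overlap \<delta> t s i) = t - s" using sum_cell_overlap[OF d st(1) st(2), of N] st by simp
  moreover have "norm (sgprod SGV (\<lambda>i. real i * \<delta>) (cell_overlap \<delta> t s) N x) \<le> MV * exp (\<omega>V * (\<Sum>i<N. cell_overlap \<delta> t s i)) * norm x"
  proof (rule SGV_product_bound)
    show "0 \<le> real i * \<delta> \<and> 0 \<le> cell_overlap \<delta> t s i" for i using d by (simp add: cell_overlap_nonneg)
    show "real i * \<delta> \<le> real k * \<delta>" if "i \<le> k" for i k using d that by (simp add: mult_right_mono)
  qed
  ultimately show ?thesis unfolding UV_def by simp
qed

lemma UV_embed: "0 < \<delta> \<Longrightarrow> j (UV \<delta> N t s v) = U \<delta> N t s (j v)"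
  unfolding U_def UV_def by (induction N) (auto simp: SGV_restrict cell_overlap_nonneg)

lemma U_lin: "0 < \<delta> \<Longrightarrow> bounded_linear (U \<delta> N t s)"
  unfolding U_def
proof (induction N)
  case 0 then show ?case by (simp add: bounded_linear_ident[unfolded id_def])
next
  case (Suc N)
  have 1: "bounded_linear (SG (real N * \<delta>) (cell_overlap \<delta> t s N))"
    using Suc.prems by (intro SG_lin) (auto simp: cell_overlap_nonneg)
  have 2: "bounded_linear (sgprod SG (\<lambda>i. real i * \<delta>) (cell_overlap \<delta> t s) N)"
    using Suc by blast
  show ?case using bounded_linear_compose[OF 1 2] by simp
qed

lemma U_diag: "0 < \<delta> \<Longrightarrow> U \<delta> N t t x = x"
  unfolding U_def by (rule sgprod_zero) (auto simp: cell_overlap_def SG_0)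

lemma U_extend:
  assumes d: "0 < \<delta>" and t: "t \<le> real N * \<delta>" and N: "N \<le> N'"
  shows "U \<delta> N' t s = U \<delta> N t s"
proof
  fix x
  have "U \<delta> N' t s x = U \<delta> (N + (N' - N)) t s x" using N by simp
  also have "\<dots> = U \<delta> N t s x"
    unfolding U_def sgprod_split
  proof (rule sgprod_zero)
    fix i assume "i < N' - N"
    have "t \<le> real (N + i) * \<delta>" using t d by (intro order_trans[OF t] mult_right_mono) auto
    then show "cell_overlap \<delta> t s (N + i) = 0" by (rule cell_overlap_zero)
  next
    fix i y show "SG (real (N + i) * \<delta>) 0 y = y" using d by (intro SG_0) simp
  qed
  finally show "U \<delta> N' t s x = U \<delta> N t s x" .
qed

lemma sgprod_continuous_param:
  fixes \<sigma>f :: "'p::metric_space \<Rightarrow> nat \<Rightarrow> real"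
  assumes c: "\<And>i. continuous_on P (\<lambda>p. \<sigma>f p i)"
    and b: "\<And>p i. p \<in> P \<Longrightarrow> 0 \<le> \<sigma>f p i \<and> \<sigma>f p i \<le> B"
    and tau: "\<And>i. 0 \<le> \<tau> i"
  shows "continuous_on P (\<lambda>p. sgprod SG \<tau> (\<sigma>f p) N x)"
proof (induction N)
  case 0 then show ?case by simp
next
  case (Suc N)
  show ?case
    unfolding sgprod.simps
  proof (rule continuous_on_operator_apply[where T="\<lambda>p. SG (\<tau> N) (\<sigma>f p N)" and C="M * exp (\<bar>\<omega>\<bar> * B)"])
    fix p assume p: "p \<in> P"
    show "bounded_linear (SG (\<tau> N) (\<sigma>f p N)) \<and> (\<forall>z. norm (SG (\<tau> N) (\<sigma>f p N) z) \<le> M * exp (\<bar>\<omega>\<bar> * B) * norm z)"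
    proof (intro conjI allI)
      show "bounded_linear (SG (\<tau> N) (\<sigma>f p N))" using b[OF p] tau by (intro SG_lin) auto
      fix z
      have "norm (SG (\<tau> N) (\<sigma>f p N) z) \<le> M * exp (\<omega> * \<sigma>f p N) * norm z"
        using b[OF p] tau by (intro SG_bound) auto
      also have "\<dots> \<le> M * exp (\<bar>\<omega>\<bar> * B) * norm z"
      proof (intro mult_right_mono mult_left_mono)
        have "\<omega> * \<sigma>f p N \<le> \<bar>\<omega>\<bar> * \<sigma>f p N" using b[OF p] by (intro mult_right_mono) auto
        also have "\<dots> \<le> \<bar>\<omega>\<bar> * B" using b[OF p] by (intro mult_left_mono) auto
        finally show "exp (\<omega> * \<sigma>f p N) \<le> exp (\<bar>\<omega>\<bar> * B)" by simp
      qed (use M_ge_1 in auto)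
      finally show "norm (SG (\<tau> N) (\<sigma>f p N) z) \<le> M * exp (\<bar>\<omega>\<bar> * B) * norm z" .
    qed
  next
    fix z
    show "continuous_on P (\<lambda>p. SG (\<tau> N) (\<sigma>f p N) z)"
      by (rule continuous_on_compose2[OF C0_semigroup_continuous[OF SG_C0[OF tau]] c]) (use b in auto)
  next
    show "continuous_on P (\<lambda>p. sgprod SG \<tau> (\<sigma>f p) N x)" by (rule Suc)
  qed
qed

lemma cell_overlap_continuous: "continuous_on P (\<lambda>p. cell_overlap \<delta> (fst p) (snd p) i)"
  unfolding cell_overlap_def by (intro continuous_intros)

lemma U_continuous:
  assumes d: "0 < \<delta>" shows "continuous_on P (\<lambda>p. U \<delta> N (fst p) (snd p) x)"
  unfolding U_def
  by (rule sgprod_continuous_param[where B=\<delta>]) (use d in \<open>auto intro: cell_overlap_continuous cell_overlap_nonneg cell_overlap_le\<close>)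

lemma U_embedded_in_domain: "0 < \<delta> \<Longrightarrow> 0 \<le> \<tau> \<Longrightarrow> U \<delta> N t s (j v) \<in> D \<tau>"
  using UV_embed[of \<delta> N t s v] embedded_in_domain by metis

lemma U_has_derivative_fst:
  assumes d: "0 < \<delta>" and k: "real k * \<delta> < r" "r < real (Suc k) * \<delta>" "k < N"
    and s: "0 \<le> s" "s < r"
  shows "((\<lambda>\<rho>. U \<delta> N \<rho> s (j v)) has_vector_derivative A (real k * \<delta>) (U \<delta> N r s (j v))) (at r)"
proof -
  define c where "c = max s (real k * \<delta>)"
  define I where "I = {c<..<real (Suc k) * \<delta>}"
  define y0 where "y0 = U \<delta> k r s (j v)"
  obtain m where "N = Suc (k + m)" using less_imp_Suc_add[OF k(3)] by blast
  then have N: "N = k + Suc m" by simp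
  have kd: "0 \<le> real k * \<delta>" using d by simp
  have repr: "U \<delta> N \<rho> s x = SG (real k * \<delta>) (\<rho> - c) (U \<delta> k r s x)" if \<rho>: "\<rho> \<in> I" for \<rho> x
  proof -
    have \<rho>c: "c < \<rho>" "\<rho> < real (Suc k) * \<delta>" using \<rho> by (auto simp: I_def)
    have "U \<delta> N \<rho> s x = sgprod SG (\<lambda>i. real (k + i) * \<delta>) (\<lambda>i. cell_overlap \<delta> \<rho> s (k + i)) (1 + m) (U \<delta> k \<rho> s x)"
      unfolding U_def N using sgprod_split[of SG "\<lambda>i. real i * \<delta>" "cell_overlap \<delta> \<rho> s" k "Suc m" x] by simp
    also have "\<dots> = sgprod SG (\<lambda>i. real (k + (1 + i)) * \<delta>) (\<lambda>i. cell_overlap \<delta> \<rho> s (k + (1 + i))) m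
         (SG (real k * \<delta>) (cell_overlap \<delta> \<rho> s k) (U \<delta> k \<rho> s x))"
      by (simp only: sgprod_split One_nat_def sgprod.simps add_0_right)
    also have "\<dots> = SG (real k * \<delta>) (cell_overlap \<delta> \<rho> s k) (U \<delta> k \<rho> s x)"
    proof (rule sgprod_zero)
      fix i assume "i < m"
      have "\<rho> \<le> real (k + (1 + i)) * \<delta>" using \<rho>c d by (intro order_trans[OF less_imp_le[OF \<rho>c(2)]] mult_right_mono) auto
      then show "cell_overlap \<delta> \<rho> s (k + (1 + i)) = 0" by (rule cell_overlap_zero)
    next
      fix i y show "SG (real (k + (1 + i)) * \<delta>) 0 y = y" using d by (intro SG_0) simp
    qed
    also have "cell_overlap \<delta> \<rho> s k = \<rho> - c" using \<rho>c by (simp add: cell_overlap_def c_def)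
    also have "U \<delta> k \<rho> s x = U \<delta> k r s x"
      unfolding U_def
    proof (rule sgprod_cong)
      fix i assume i: "i < k"
      have "real (Suc i) * \<delta> \<le> real k * \<delta>" using i d by (intro mult_right_mono) auto
      then have "real (Suc i) * \<delta> \<le> \<rho>" "real (Suc i) * \<delta> \<le> r" using \<rho>c k by (auto simp: c_def)
      then show "cell_overlap \<delta> \<rho> s i = cell_overlap \<delta> r s i" by (simp add: cell_overlap_def)
    qed
    finally show ?thesis .
  qed
  have rI: "r \<in> I" using k s by (auto simp: I_def c_def)
  have y0D: "y0 \<in> D (real k * \<delta>)" unfolding y0_def by (rule U_embedded_in_domain[OF d kd])
  have gk: "is_generator (D (real k * \<delta>)) (A (real k * \<delta>)) (SG (real k * \<delta>))" by (rule SG_generator[OF kd])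
  have "(((\<lambda>u. SG (real k * \<delta>) u y0) \<circ> (\<lambda>\<rho>. \<rho> - c)) has_vector_derivative 1 *\<^sub>R SG (real k * \<delta>) (r - c) (A (real k * \<delta>) y0)) (at r)"
  proof (rule vector_diff_chain_within)
    show "((\<lambda>\<rho>. \<rho> - c) has_vector_derivative 1) (at r)" by (auto intro!: derivative_eq_intros)
    show "((\<lambda>u. SG (real k * \<delta>) u y0) has_vector_derivative SG (real k * \<delta>) (r - c) (A (real k * \<delta>) y0)) (at (r - c) within (\<lambda>\<rho>. \<rho> - c) ` UNIV)"
      using semigroup_has_vector_derivative[OF gk y0D, of "r - c"] rI by (auto simp: I_def intro: has_vector_derivative_at_within)
  qed
  moreover have "SG (real k * \<delta>) (r - c) (A (real k * \<delta>) y0) = A (real k * \<delta>) (U \<delta> N r s (j v))"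
    using generator_semigroup_commute[OF gk y0D, of "r - c"] rI repr[OF rI] by (auto simp: I_def y0_def)
  ultimately have "((\<lambda>\<rho>. SG (real k * \<delta>) (\<rho> - c) y0) has_vector_derivative A (real k * \<delta>) (U \<delta> N r s (j v))) (at r)"
    by (simp add: o_def)
  then show ?thesis
    by (rule has_vector_derivative_transform_within_open[where S=I]) (use rI repr in \<open>auto simp: I_def y0_def\<close>)
qed

lemma U_has_derivative_snd:
  assumes d: "0 < \<delta>" and k: "real k * \<delta> < s" "s < real (Suc k) * \<delta>" "k < N" and st: "s < t"
  shows "((\<lambda>\<sigma>. U \<delta> N t \<sigma> (j v)) has_vector_derivative - U \<delta> N t s (A (real k * \<delta>) (j v))) (at s)"
proof -
  define c where "c = min t (real (Suc k) * \<delta>)"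
  define I where "I = {real k * \<delta><..<c}"
  obtain m where "N = Suc (k + m)" using less_imp_Suc_add[OF k(3)] by blast
  then have N: "N = k + Suc m" by simp
  define L where "L = sgprod SG (\<lambda>i. real (k + (1 + i)) * \<delta>) (\<lambda>i. cell_overlap \<delta> t s (k + (1 + i))) m"
  have kd: "0 \<le> real k * \<delta>" using d by simp
  have repr: "U \<delta> N t \<sigma> x = L (SG (real k * \<delta>) (c - \<sigma>) x)" if \<sigma>: "\<sigma> \<in> I" for \<sigma> x
  proof -
    have \<sigma>c: "real k * \<delta> < \<sigma>" "\<sigma> < c" using \<sigma> by (auto simp: I_def)
    have "U \<delta> N t \<sigma> x = sgprod SG (\<lambda>i. real (k + i) * \<delta>) (\<lambda>i. cell_overlap \<delta> t \<sigma> (k + i)) (1 + m) (U \<delta> k t \<sigma> x)"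
      unfolding U_def N using sgprod_split[of SG "\<lambda>i. real i * \<delta>" "cell_overlap \<delta> t \<sigma>" k "Suc m" x] by simp
    also have "U \<delta> k t \<sigma> x = x"
      unfolding U_def
    proof (rule sgprod_zero)
      fix i assume i: "i < k"
      have "real (Suc i) * \<delta> \<le> real k * \<delta>" using i d by (intro mult_right_mono) auto
      then show "cell_overlap \<delta> t \<sigma> i = 0" using \<sigma>c by (simp add: cell_overlap_def)
    next
      fix i y show "SG (real i * \<delta>) 0 y = y" using d by (intro SG_0) simp
    qed
    also have "sgprod SG (\<lambda>i. real (k + i) * \<delta>) (\<lambda>i. cell_overlap \<delta> t \<sigma> (k + i)) (1 + m) x =
        sgprod SG (\<lambda>i. real (k + (1 + i)) * \<delta>) (\<lambda>i. cell_overlap \<delta> t \<sigma> (k + (1 + i))) m (SG (real k * \<delta>) (cell_overlap \<delta> t \<sigma> k) x)"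
      by (simp only: sgprod_split One_nat_def sgprod.simps add_0_right)
    also have "cell_overlap \<delta> t \<sigma> k = c - \<sigma>" using \<sigma>c by (simp add: cell_overlap_def c_def)
    also have "sgprod SG (\<lambda>i. real (k + (1 + i)) * \<delta>) (\<lambda>i. cell_overlap \<delta> t \<sigma> (k + (1 + i))) m = L"
      unfolding L_def
    proof (rule ext, rule sgprod_cong)
      fix i
      have "real (Suc k) * \<delta> \<le> real (k + (1 + i)) * \<delta>" using d by (intro mult_right_mono) auto
      then have "\<sigma> \<le> real (k + (1 + i)) * \<delta>" "s \<le> real (k + (1 + i)) * \<delta>" using \<sigma>c k by (auto simp: c_def)
      then show "cell_overlap \<delta> t \<sigma> (k + (1 + i)) = cell_overlap \<delta> t s (k + (1 + i))" by (simp add: cell_overlap_def)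
    qed
    finally show ?thesis .
  qed
  have sI: "s \<in> I" using k st by (auto simp: I_def c_def)
  have Llin: "bounded_linear L" unfolding L_def using d by (intro sgprod_bounded_linear SG_lin) (auto simp: cell_overlap_nonneg)
  have gk: "is_generator (D (real k * \<delta>)) (A (real k * \<delta>)) (SG (real k * \<delta>))" by (rule SG_generator[OF kd])
  have "((\<lambda>\<sigma>. SG (real k * \<delta>) (c - \<sigma>) (j v)) has_vector_derivative - SG (real k * \<delta>) (c - s) (A (real k * \<delta>) (j v))) (at s)"
    by (rule semigroup_reflected_has_vector_derivative[OF gk embedded_in_domain[OF kd]]) (use sI in \<open>auto simp: I_def\<close>)
  then have "((\<lambda>\<sigma>. L (SG (real k * \<delta>) (c - \<sigma>) (j v))) has_vector_derivative L (- SG (real k * \<delta>) (c - s) (A (real k * \<delta>) (j v)))) (at s)"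
    by (rule bounded_linear.has_vector_derivative[OF Llin])
  moreover have "L (- SG (real k * \<delta>) (c - s) (A (real k * \<delta>) (j v))) = - U \<delta> N t s (A (real k * \<delta>) (j v))"
    using repr[OF sI] linear_simps[OF Llin] by simp
  ultimately have "((\<lambda>\<sigma>. L (SG (real k * \<delta>) (c - \<sigma>) (j v))) has_vector_derivative - U \<delta> N t s (A (real k * \<delta>) (j v))) (at s)"
    by simp
  then show ?thesis
    by (rule has_vector_derivative_transform_within_open[where S=I]) (use sI repr in \<open>auto simp: I_def\<close>)
qed

abbreviation "CE \<equiv> growth_bound M \<omega>"
abbreviation "CV \<equiv> growth_bound MV \<omega>V"

lemma CE_pos: "0 < CE K" using M_ge_1 by (simp add: growth_bound_pos)
lemma CV_pos: "0 < CV K" using MV_ge_1 by (simp add: growth_bound_pos)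

lemma U_boundK:
  assumes d: "0 < \<delta>" and st: "0 \<le> s" "s \<le> t" "t \<le> K" "t \<le> real N * \<delta>"
  shows "norm (U \<delta> N t s x) \<le> CE K * norm x"
  by (rule norm_le_growth_bound[OF U_bound]) (use d st M_ge_1 in auto)

lemma UV_boundK:
  assumes d: "0 < \<delta>" and st: "0 \<le> s" "s \<le> t" "t \<le> K" "t \<le> real N * \<delta>"
  shows "norm (UV \<delta> N t s x) \<le> CV K * norm x"
  by (rule norm_le_growth_bound[OF UV_bound]) (use d st MV_ge_1 in auto)

lemma U_continuous_snd: "0 < \<delta> \<Longrightarrow> continuous_on X (\<lambda>r. U \<delta> N t r z)"
proof -
  assume d: "0 < \<delta>"
  have "continuous_on X (\<lambda>r. (t, r))" by (intro continuous_intros)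
  from continuous_on_compose2[OF U_continuous[OF d, of UNIV N z] this] show ?thesis by simp
qed

lemma U_continuous_fst: "0 < \<delta> \<Longrightarrow> continuous_on X (\<lambda>r. U \<delta> N r s z)"
proof -
  assume d: "0 < \<delta>"
  have "continuous_on X (\<lambda>r. (r, s))" by (intro continuous_intros)
  from continuous_on_compose2[OF U_continuous[OF d, of UNIV N z] this] show ?thesis by simp
qed

(* The derivative of r \<mapsto> U \<delta>1 N1 t r (U \<delta>2 N2 r s v) is
   U \<delta>1 N1 t r ((A (grid_floor \<delta>2 r) - A (grid_floor \<delta>1 r)) (U \<delta>2 N2 r s v)). *)
lemma U_embedded_diff_bound:
  assumes d1: "0 < \<delta>1" and d2: "0 < \<delta>2" and K1: "K \<le> real N1 * \<delta>1" and K2: "K \<le> real N2 * \<delta>2"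
    and st: "0 \<le> s" "s \<le> t" "t \<le> K"
    and eps: "0 \<le> \<epsilon>" "\<And>r. 0 \<le> r \<Longrightarrow> r \<le> K \<Longrightarrow> norm (AJ (grid_floor \<delta>1 r) - AJ (grid_floor \<delta>2 r)) \<le> \<epsilon>"
  shows "norm (U \<delta>1 N1 t s (j v) - U \<delta>2 N2 t s (j v)) \<le> (CE K * \<epsilon> * CV K * norm v) * (t - s)"
proof -
  define \<phi> where "\<phi> r = U \<delta>1 N1 t r (U \<delta>2 N2 r s (j v))" for r
  define G where "G = (\<lambda>k. real k * \<delta>1) ` {..N1} \<union> (\<lambda>k. real k * \<delta>2) ` {..N2}"
  have "norm (\<phi> t - \<phi> s) \<le> (CE K * \<epsilon> * CV K * norm v) * (t - s)"
  proof (rule norm_diff_le_derivative_bound[where F=G])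
    show "finite G" by (simp add: G_def)
    show "s \<le> t" by fact
    show "0 \<le> CE K * \<epsilon> * CV K * norm v"
      using CE_pos[of K] CV_pos[of K] st eps by auto
    show "continuous_on {s..t} \<phi>"
      unfolding \<phi>_def
    proof (rule continuous_on_operator_apply[where T="\<lambda>r. U \<delta>1 N1 t r" and C="CE K"])
      fix p assume "p \<in> {s..t}"
      then show "bounded_linear (U \<delta>1 N1 t p) \<and> (\<forall>z. norm (U \<delta>1 N1 t p z) \<le> CE K * norm z)"
        using U_lin[OF d1] U_boundK[OF d1] st K1 by auto
    qed (auto intro: U_continuous_snd[OF d1] U_continuous_fst[OF d2])
    fix r assume r: "r \<in> {s<..<t} - G"
    have r0: "0 \<le> r" "r \<le> K" using r st by auto
    obtain k1 where c1: "real k1 * \<delta>1 < r" "r < real (Suc k1) * \<delta>1" and k1N: "k1 < N1"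
      and g1: "grid_floor \<delta>1 r = real k1 * \<delta>1"
      by (rule grid_cellE[OF d1 r0(1), of t N1]) (use r st K1 in \<open>auto simp: G_def\<close>)
    obtain k2 where c2: "real k2 * \<delta>2 < r" "r < real (Suc k2) * \<delta>2" and k2N: "k2 < N2"
      and g2: "grid_floor \<delta>2 r = real k2 * \<delta>2"
      by (rule grid_cellE[OF d2 r0(1), of t N2]) (use r st K2 in \<open>auto simp: G_def\<close>)
    define w where "w = UV \<delta>2 N2 r s v"
    have yw: "U \<delta>2 N2 r s (j v) = j w" unfolding w_def by (rule UV_embed[OF d2, symmetric])
    have "(\<phi> has_vector_derivative U \<delta>1 N1 t r (A (real k2 * \<delta>2) (U \<delta>2 N2 r s (j v))) + - U \<delta>1 N1 t r (A (real k1 * \<delta>1) (j w))) (at r within {s<..<t})"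
      unfolding \<phi>_def
    proof (rule has_vector_derivative_operator_apply[where T="\<lambda>r. U \<delta>1 N1 t r" and y="\<lambda>r. U \<delta>2 N2 r s (j v)" and C="CE K"])
      fix p assume "p \<in> {s<..<t}"
      then show "bounded_linear (U \<delta>1 N1 t p) \<and> (\<forall>z. norm (U \<delta>1 N1 t p z) \<le> CE K * norm z)"
        using U_lin[OF d1] U_boundK[OF d1] st K1 by auto
    next
      fix z show "((\<lambda>p. U \<delta>1 N1 t p z) \<longlongrightarrow> U \<delta>1 N1 t r z) (at r within {s<..<t})"
        using U_continuous_snd[OF d1, of UNIV N1 t z] by (auto simp: continuous_on_def intro: tendsto_within_subset)
    next
      show "((\<lambda>r. U \<delta>2 N2 r s (j v)) has_vector_derivative A (real k2 * \<delta>2) (U \<delta>2 N2 r s (j v))) (at r within {s<..<t})"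
        by (rule has_vector_derivative_at_within, rule U_has_derivative_fst[OF d2 c2 k2N]) (use r st in auto)
    next
      show "((\<lambda>p. U \<delta>1 N1 t p (U \<delta>2 N2 r s (j v))) has_vector_derivative - U \<delta>1 N1 t r (A (real k1 * \<delta>1) (j w))) (at r within {s<..<t})"
        unfolding yw by (rule has_vector_derivative_at_within, rule U_has_derivative_snd[OF d1 c1 k1N]) (use r in auto)
    qed (use r in auto)
    moreover have "at r within {s<..<t} = at r" using r by (intro at_within_open) auto
    ultimately have der: "(\<phi> has_vector_derivative U \<delta>1 N1 t r (A (real k2 * \<delta>2) (j w) - A (real k1 * \<delta>1) (j w))) (at r)"
      using yw linear_simps[OF U_lin[OF d1]] by simp
    have k0: "0 \<le> real k1 * \<delta>1" "0 \<le> real k2 * \<delta>2" using d1 d2 by auto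
    have "A (real k2 * \<delta>2) (j w) - A (real k1 * \<delta>1) (j w) = blinfun_apply (AJ (grid_floor \<delta>2 r) - AJ (grid_floor \<delta>1 r)) w"
      using AJ_apply k0 by (simp add: g1 g2 blinfun.diff_left)
    then have "norm (A (real k2 * \<delta>2) (j w) - A (real k1 * \<delta>1) (j w)) \<le> \<epsilon> * norm w"
      using norm_blinfun[of "AJ (grid_floor \<delta>2 r) - AJ (grid_floor \<delta>1 r)" w] eps(2)[OF r0] eps(1)
      by (metis (no_types, opaque_lifting) norm_minus_commute mult_right_mono norm_ge_zero order_trans)
    moreover have "norm w \<le> CV K * norm v" unfolding w_def
      by (rule UV_boundK[OF d2]) (use r st K2 in auto)
    ultimately have "norm (A (real k2 * \<delta>2) (j w) - A (real k1 * \<delta>1) (j w)) \<le> \<epsilon> * (CV K * norm v)"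
      using eps(1) by (meson mult_left_mono order_trans)
    then have "norm (U \<delta>1 N1 t r (A (real k2 * \<delta>2) (j w) - A (real k1 * \<delta>1) (j w))) \<le> CE K * (\<epsilon> * (CV K * norm v))"
      using U_boundK[OF d1, of r t K N1] r st K1 CE_pos[of K]
      by (meson greaterThanLessThan_iff DiffD1 less_imp_le mult_left_mono order_trans)
    then show "(\<phi> has_vector_derivative U \<delta>1 N1 t r (A (grid_floor \<delta>2 r) (j w) - A (grid_floor \<delta>1 r) (j w))) (at r) \<and>
        norm (U \<delta>1 N1 t r (A (grid_floor \<delta>2 r) (j w) - A (grid_floor \<delta>1 r) (j w))) \<le> CE K * \<epsilon> * CV K * norm v"
      using der by (simp add: g1 g2 mult.assoc)
  qed
  moreover have "\<phi> t = U \<delta>2 N2 t s (j v)" by (simp add: \<phi>_def U_diag[OF d1])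
  moreover have "\<phi> s = U \<delta>1 N1 t s (j v)" by (simp add: \<phi>_def U_diag[OF d2])
  ultimately show ?thesis by (simp add: norm_minus_commute)
qed

definition "Useq n t s = U (mesh n) (grid_size n t) t s"

lemma Useq_eq_U: "0 \<le> t \<Longrightarrow> t \<le> K \<Longrightarrow> Useq n t s = U (mesh n) (grid_size n K) t s"
  unfolding Useq_def by (rule U_extend[OF mesh_pos grid_size_covers grid_size_mono, symmetric])

lemma Useq_lin: "bounded_linear (Useq n t s)" unfolding Useq_def by (rule U_lin[OF mesh_pos])

lemma Useq_bound: "0 \<le> s \<Longrightarrow> s \<le> t \<Longrightarrow> norm (Useq n t s x) \<le> M * exp (\<omega> * (t - s)) * norm x"
  unfolding Useq_def by (rule U_bound[OF mesh_pos _ _ grid_size_covers])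

lemma Useq_boundK: "0 \<le> s \<Longrightarrow> s \<le> t \<Longrightarrow> t \<le> K \<Longrightarrow> norm (Useq n t s x) \<le> CE K * norm x"
  unfolding Useq_def by (rule U_boundK[OF mesh_pos _ _ _ grid_size_covers])

lemma Useq_diag: "Useq n t t x = x" unfolding Useq_def by (rule U_diag[OF mesh_pos])

lemma AJ_uniformly_continuous:
  assumes e: "0 < e"
  obtains \<eta> where "\<eta> > 0" "\<And>x x'. 0 \<le> x \<Longrightarrow> x \<le> K \<Longrightarrow> 0 \<le> x' \<Longrightarrow> x' \<le> K \<Longrightarrow> \<bar>x' - x\<bar> < \<eta> \<Longrightarrow> norm (AJ x' - AJ x) < e"
proof -
  have "uniformly_continuous_on {0..K} AJ"
    by (rule compact_uniformly_continuous[OF continuous_on_subset[OF AJ_cont]]) auto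
  then obtain d where d: "d > 0" "\<And>x x'. x \<in> {0..K} \<Longrightarrow> x' \<in> {0..K} \<Longrightarrow> dist x' x < d \<Longrightarrow> dist (AJ x') (AJ x) < e"
    using e unfolding uniformly_continuous_on_def by metis
  show ?thesis by (rule that[OF d(1)]) (use d(2) in \<open>auto simp: dist_norm dist_real_def\<close>)
qed

lemma AJ_grid_floor_close:
  assumes e: "0 < e"
  shows "\<exists>n0. \<forall>n\<ge>n0. \<forall>r. 0 \<le> r \<longrightarrow> r \<le> K \<longrightarrow> norm (AJ (grid_floor (mesh n) r) - AJ r) \<le> e"
proof -
  obtain \<eta> where \<eta>: "\<eta> > 0"
    "\<And>x x'. 0 \<le> x \<Longrightarrow> x \<le> K \<Longrightarrow> 0 \<le> x' \<Longrightarrow> x' \<le> K \<Longrightarrow> \<bar>x' - x\<bar> < \<eta> \<Longrightarrow> norm (AJ x' - AJ x) < e"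
    using AJ_uniformly_continuous[OF e] by blast
  obtain n0 where n0: "\<And>n. n \<ge> n0 \<Longrightarrow> mesh n < \<eta>" using mesh_eventually_less[OF \<eta>(1)] by blast
  have "norm (AJ (grid_floor (mesh n) r) - AJ r) \<le> e" if "n \<ge> n0" "0 \<le> r" "r \<le> K" for n r
  proof -
    have "0 \<le> grid_floor (mesh n) r" "grid_floor (mesh n) r \<le> r" "r - mesh n < grid_floor (mesh n) r"
      using grid_floor_bounds[OF mesh_pos that(2)] by auto
    then show ?thesis using \<eta>(2)[of r "grid_floor (mesh n) r"] n0[OF that(1)] that by auto
  qed
  then show ?thesis by blast
qed

lemma Useq_uniformly_Cauchy_embedded:
  assumes K: "0 \<le> K" and e: "0 < e"
  shows "\<exists>n0. \<forall>n\<ge>n0. \<forall>m\<ge>n0. \<forall>s t. 0 \<le> s \<and> s \<le> t \<and> t \<le> K \<longrightarrow> norm (Useq n t s (j v) - Useq m t s (j v)) \<le> e"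
proof -
  define B where "B = CE K * CV K * (norm v + 1) * (K + 1)"
  have Bp: "0 < B" unfolding B_def
    by (intro mult_pos_pos) (use CE_pos[of K] CV_pos[of K] K in \<open>auto intro: add_nonneg_pos\<close>)
  define e' where "e' = e / (2 * B)"
  have e': "0 < e'" using e Bp by (simp add: e'_def)
  obtain n0 where n0: "\<And>n r. n \<ge> n0 \<Longrightarrow> 0 \<le> r \<Longrightarrow> r \<le> K \<Longrightarrow> norm (AJ (grid_floor (mesh n) r) - AJ r) \<le> e'"
    using AJ_grid_floor_close[OF e'] by blast
  have "norm (Useq n t s (j v) - Useq m t s (j v)) \<le> e" if nm: "n \<ge> n0" "m \<ge> n0" and st: "0 \<le> s" "s \<le> t" "t \<le> K" for n m s t
  proof -
    have "norm (U (mesh n) (grid_size n K) t s (j v) - U (mesh m) (grid_size m K) t s (j v)) \<le> (CE K * (2 * e') * CV K * norm v) * (t - s)"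
    proof (rule U_embedded_diff_bound[OF mesh_pos mesh_pos grid_size_covers grid_size_covers st])
      show "0 \<le> 2 * e'" using e' by simp
      fix r assume r: "0 \<le> r" "r \<le> K"
      have "norm (AJ (grid_floor (mesh n) r) - AJ (grid_floor (mesh m) r)) \<le> norm (AJ (grid_floor (mesh n) r) - AJ r) + norm (AJ (grid_floor (mesh m) r) - AJ r)"
      proof -
        have "AJ (grid_floor (mesh n) r) - AJ (grid_floor (mesh m) r) = (AJ (grid_floor (mesh n) r) - AJ r) - (AJ (grid_floor (mesh m) r) - AJ r)" by simp
        then show ?thesis by (metis norm_triangle_ineq4)
      qed
      also have "\<dots> \<le> 2 * e'" using n0[OF nm(1) r] n0[OF nm(2) r] by simp
      finally show "norm (AJ (grid_floor (mesh n) r) - AJ (grid_floor (mesh m) r)) \<le> 2 * e'" .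
    qed
    also have "\<dots> \<le> (CE K * (2 * e') * CV K * (norm v + 1)) * (K + 1)"
      using CE_pos[of K] CV_pos[of K] e' st
      by (intro mult_mono mult_left_mono) auto
    also have "\<dots> = e" using Bp by (simp add: e'_def B_def field_simps)
    finally show ?thesis using Useq_eq_U st by simp
  qed
  then show ?thesis by blast
qed

lemma Useq_uniformly_Cauchy:
  assumes K: "0 \<le> K" and e: "0 < e"
  shows "\<exists>n0. \<forall>n\<ge>n0. \<forall>m\<ge>n0. \<forall>s t. 0 \<le> s \<and> s \<le> t \<and> t \<le> K \<longrightarrow> norm (Useq n t s x - Useq m t s x) \<le> e"
proof -
  define e' where "e' = e / (3 * CE K)"
  have e': "0 < e'" using e CE_pos[of K] by (simp add: e'_def)
  obtain v where v: "norm (x - j v) < e'" using dense_range_approx[OF j_dense e'] by blast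
  obtain n0 where n0: "\<And>n m s t. n \<ge> n0 \<Longrightarrow> m \<ge> n0 \<Longrightarrow> 0 \<le> s \<and> s \<le> t \<and> t \<le> K \<Longrightarrow> norm (Useq n t s (j v) - Useq m t s (j v)) \<le> e / 3"
  proof -
    have "0 < e / 3" using e by simp
    from Useq_uniformly_Cauchy_embedded[OF K this, of v] show ?thesis using that by blast
  qed
  have "norm (Useq n t s x - Useq m t s x) \<le> e" if nm: "n \<ge> n0" "m \<ge> n0" and st: "0 \<le> s" "s \<le> t" "t \<le> K" for n m s t
  proof -
    have lin: "Useq n t s x - Useq m t s x = Useq n t s (x - j v) + (Useq n t s (j v) - Useq m t s (j v)) - Useq m t s (x - j v)"
      by (simp add: linear_simps[OF Useq_lin] algebra_simps)
    have 1: "norm (Useq n t s (x - j v)) \<le> CE K * e'"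
      using Useq_boundK[OF st, of n "x - j v"] v CE_pos[of K] by (meson less_imp_le mult_left_mono order_trans)
    have 2: "norm (Useq m t s (x - j v)) \<le> CE K * e'"
      using Useq_boundK[OF st, of m "x - j v"] v CE_pos[of K] by (meson less_imp_le mult_left_mono order_trans)
    have "norm (Useq n t s x - Useq m t s x) \<le> norm (Useq n t s (x - j v)) + norm (Useq n t s (j v) - Useq m t s (j v)) + norm (Useq m t s (x - j v))"
      unfolding lin by (meson norm_triangle_ineq4 norm_triangle_ineq order_trans add_right_mono)
    also have "\<dots> \<le> CE K * e' + e / 3 + CE K * e'" using 1 2 n0[OF nm] st by (intro add_mono) auto
    also have "\<dots> = e" using CE_pos[of K] by (simp add: e'_def field_simps)
    finally show ?thesis .
  qed
  then show ?thesis by blast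
qed

definition "evol t s x = (if 0 \<le> s \<and> s \<le> t then lim (\<lambda>n. Useq n t s x) else x)"

lemma evol_LIMSEQ:
  assumes st: "0 \<le> s" "s \<le> t"
  shows "(\<lambda>n. Useq n t s x) \<longlonglongrightarrow> evol t s x"
proof -
  have "Cauchy (\<lambda>n. Useq n t s x)"
  proof (rule metric_CauchyI)
    fix e :: real assume e: "0 < e"
    have e2: "0 < e / 2" using e by simp
    obtain n0 where n0: "\<forall>n\<ge>n0. \<forall>m\<ge>n0. \<forall>s' t'. 0 \<le> s' \<and> s' \<le> t' \<and> t' \<le> t \<longrightarrow> norm (Useq n t' s' x - Useq m t' s' x) \<le> e / 2"
      using Useq_uniformly_Cauchy[OF _ e2, of t x] st by auto
    show "\<exists>M. \<forall>m\<ge>M. \<forall>n\<ge>M. dist (Useq m t s x) (Useq n t s x) < e"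
      using n0 e st by (intro exI[of _ n0]) (force simp: dist_norm)
  qed
  then have "convergent (\<lambda>n. Useq n t s x)" by (simp add: Cauchy_convergent_iff)
  then show ?thesis using st by (simp add: evol_def convergent_LIMSEQ_iff)
qed

lemma evol_uniform_limit:
  assumes K: "0 \<le> K" and e: "0 < e"
  shows "\<exists>n0. \<forall>n\<ge>n0. \<forall>s t. 0 \<le> s \<and> s \<le> t \<and> t \<le> K \<longrightarrow> norm (Useq n t s x - evol t s x) \<le> e"
proof -
  obtain n0 where n0: "\<And>n m s t. n \<ge> n0 \<Longrightarrow> m \<ge> n0 \<Longrightarrow> 0 \<le> s \<and> s \<le> t \<and> t \<le> K \<Longrightarrow> norm (Useq n t s x - Useq m t s x) \<le> e"
    using Useq_uniformly_Cauchy[OF K e, of x] by blast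
  have "norm (Useq n t s x - evol t s x) \<le> e" if n: "n \<ge> n0" and st: "0 \<le> s" "s \<le> t" "t \<le> K" for n s t
  proof (rule LIMSEQ_le_const2)
    show "(\<lambda>m. norm (Useq n t s x - Useq m t s x)) \<longlonglongrightarrow> norm (Useq n t s x - evol t s x)"
      by (intro tendsto_intros evol_LIMSEQ) (use st in auto)
    show "\<exists>N. \<forall>m\<ge>N. norm (Useq n t s x - Useq m t s x) \<le> e" using n0 n st by blast
  qed
  then show ?thesis by blast
qed

lemma evol_outside: "\<not> (0 \<le> s \<and> s \<le> t) \<Longrightarrow> evol t s x = x" unfolding evol_def by auto

lemma evol_add: "0 \<le> s \<Longrightarrow> s \<le> t \<Longrightarrow> evol t s (x + y) = evol t s x + evol t s y"
proof -
  assume st: "0 \<le> s" "s \<le> t"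
  have "(\<lambda>n. Useq n t s (x + y)) \<longlonglongrightarrow> evol t s x + evol t s y"
    using tendsto_add[OF evol_LIMSEQ[OF st, of x] evol_LIMSEQ[OF st, of y]] by (simp add: linear_simps[OF Useq_lin])
  then show ?thesis using LIMSEQ_unique[OF evol_LIMSEQ[OF st]] by blast
qed

lemma evol_scaleR: "0 \<le> s \<Longrightarrow> s \<le> t \<Longrightarrow> evol t s (c *\<^sub>R x) = c *\<^sub>R evol t s x"
proof -
  assume st: "0 \<le> s" "s \<le> t"
  have "(\<lambda>n. Useq n t s (c *\<^sub>R x)) \<longlonglongrightarrow> c *\<^sub>R evol t s x"
    using tendsto_scaleR[OF tendsto_const evol_LIMSEQ[OF st, of x]] by (simp add: linear_simps[OF Useq_lin])
  then show ?thesis using LIMSEQ_unique[OF evol_LIMSEQ[OF st]] by blast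
qed

lemma evol_bound: "0 \<le> s \<Longrightarrow> s \<le> t \<Longrightarrow> norm (evol t s x) \<le> M * exp (\<omega> * (t - s)) * norm x"
proof -
  assume st: "0 \<le> s" "s \<le> t"
  show ?thesis
  proof (rule LIMSEQ_le_const2)
    show "(\<lambda>n. norm (Useq n t s x)) \<longlonglongrightarrow> norm (evol t s x)" by (intro tendsto_intros evol_LIMSEQ[OF st])
    show "\<exists>N. \<forall>n\<ge>N. norm (Useq n t s x) \<le> M * exp (\<omega> * (t - s)) * norm x" using Useq_bound[OF st] by blast
  qed
qed

lemma evol_boundK: "0 \<le> s \<Longrightarrow> s \<le> t \<Longrightarrow> t \<le> K \<Longrightarrow> norm (evol t s x) \<le> CE K * norm x"
  by (rule norm_le_growth_bound[OF evol_bound]) (use M_ge_1 in auto)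

lemma evol_lin: "0 \<le> s \<Longrightarrow> s \<le> t \<Longrightarrow> bounded_linear (evol t s)"
proof (rule bounded_linear_intro[where K="M * exp (\<omega> * (t - s))"])
  assume st: "0 \<le> s" "s \<le> t"
  show "evol t s (x + y) = evol t s x + evol t s y" for x y using st by (rule evol_add)
  show "evol t s (r *\<^sub>R x) = r *\<^sub>R evol t s x" for r x using st by (rule evol_scaleR)
  show "norm (evol t s x) \<le> norm x * (M * exp (\<omega> * (t - s)))" for x
    using evol_bound[OF st, of x] by (simp add: ac_simps)
qed

lemma evol_bounded_linear: "bounded_linear (evol t s)"
proof (cases "0 \<le> s \<and> s \<le> t")
  case True then show ?thesis using evol_lin by blast
next
  case False
  then have "evol t s = (\<lambda>x. x)" using evol_outside by blast
  then show ?thesis by (simp add: bounded_linear_ident[unfolded id_def])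
qed

lemma evol_diag: "0 \<le> s \<Longrightarrow> evol s s x = x"
  using LIMSEQ_unique[OF evol_LIMSEQ[where s=s and t=s and x=x]] by (simp add: Useq_diag)

lemma evol_continuous_on_bounded:
  assumes K: "0 \<le> K"
  shows "continuous_on {p. 0 \<le> snd p \<and> snd p \<le> fst p \<and> fst p \<le> K} (\<lambda>p. evol (fst p) (snd p) x)"
proof (rule uniform_limit_theorem[where f="\<lambda>n p. Useq n (fst p) (snd p) x" and F=sequentially])
  show "\<forall>\<^sub>F n in sequentially. continuous_on {p. 0 \<le> snd p \<and> snd p \<le> fst p \<and> fst p \<le> K} (\<lambda>p. Useq n (fst p) (snd p) x)"
  proof (rule always_eventually, rule allI)
    fix n
    show "continuous_on {p. 0 \<le> snd p \<and> snd p \<le> fst p \<and> fst p \<le> K} (\<lambda>p. Useq n (fst p) (snd p) x)"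
      by (rule continuous_on_eq[OF U_continuous[of "mesh n" _ "grid_size n K" x]]) (auto simp: Useq_eq_U mesh_pos)
  qed
  show "uniform_limit {p. 0 \<le> snd p \<and> snd p \<le> fst p \<and> fst p \<le> K} (\<lambda>n p. Useq n (fst p) (snd p) x) (\<lambda>p. evol (fst p) (snd p) x) sequentially"
  proof (rule uniform_limitI)
    fix e :: real assume e: "0 < e"
    obtain n0 where n0: "\<forall>n\<ge>n0. \<forall>s t. 0 \<le> s \<and> s \<le> t \<and> t \<le> K \<longrightarrow> norm (Useq n t s x - evol t s x) \<le> e / 2"
      using evol_uniform_limit[OF K, of "e/2" x] e by auto
    show "\<forall>\<^sub>F n in sequentially. \<forall>p\<in>{p. 0 \<le> snd p \<and> snd p \<le> fst p \<and> fst p \<le> K}. dist (Useq n (fst p) (snd p) x) (evol (fst p) (snd p) x) < e"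
      unfolding eventually_sequentially using n0 e by (force simp: dist_norm)
  qed
qed simp

lemma evol_continuous: "continuous_on {(t, s). 0 \<le> s \<and> s \<le> t} (\<lambda>(t, s). evol t s x)"
  unfolding continuous_on_eq_continuous_within
proof
  fix p :: "real \<times> real" assume p: "p \<in> {(t, s). 0 \<le> s \<and> s \<le> t}"
  define K where "K = fst p + 1"
  have K: "0 \<le> K" using p by (auto simp: K_def)
  define W where "W = {p. 0 \<le> snd p \<and> snd p \<le> fst p \<and> fst p \<le> K}"
  have pW: "p \<in> W" using p by (auto simp: W_def K_def)
  have "continuous (at p within W) (\<lambda>p. evol (fst p) (snd p) x)"
    using evol_continuous_on_bounded[OF K, of x] pW unfolding W_def continuous_on_eq_continuous_within by blast
  moreover have "at p within {(t, s). 0 \<le> s \<and> s \<le> t} = at p within W"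
  proof (rule at_within_nhd[where S="{q. fst q < K}"])
    show "p \<in> {q. fst q < K}" by (simp add: K_def)
    show "open {q :: real \<times> real. fst q < K}" by (intro open_Collect_less continuous_intros)
    show "{(t, s). 0 \<le> s \<and> s \<le> t} \<inter> {q. fst q < K} - {p} = W \<inter> {q. fst q < K} - {p}"
      by (auto simp: W_def)
  qed
  ultimately show "continuous (at p within {(t, s). 0 \<le> s \<and> s \<le> t}) (\<lambda>(t, s). evol t s x)"
    by (simp add: case_prod_beta')
qed

lemma AJ_boundedE:
  obtains LA where "LA \<ge> 0" "\<And>\<tau>. 0 \<le> \<tau> \<Longrightarrow> \<tau> \<le> K \<Longrightarrow> norm (AJ \<tau>) \<le> LA"
proof -
  have "continuous_on {0..K} AJ" by (rule continuous_on_subset[OF AJ_cont]) auto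
  from continuous_on_Icc_norm_boundE[OF this] show ?thesis using that by blast
qed

lemma U_embedded_lipschitz_snd:
  assumes d: "0 < \<delta>" and KN: "K \<le> real N * \<delta>" and ab: "0 \<le> a" "a \<le> b" "b \<le> t" "t \<le> K"
    and LA: "0 \<le> LA" "\<And>\<tau>. 0 \<le> \<tau> \<Longrightarrow> \<tau> \<le> K \<Longrightarrow> norm (AJ \<tau>) \<le> LA"
  shows "norm (U \<delta> N t b (j v) - U \<delta> N t a (j v)) \<le> (CE K * LA * norm v) * (b - a)"
proof (rule norm_diff_le_derivative_bound[where F="(\<lambda>k. real k * \<delta>) ` {..N}" and f'="\<lambda>r. - U \<delta> N t r (A (grid_floor \<delta> r) (j v))"])
  show "finite ((\<lambda>k. real k * \<delta>) ` {..N})" by simp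
  show "a \<le> b" by fact
  show "0 \<le> CE K * LA * norm v" using CE_pos[of K] LA ab by auto
  show "continuous_on {a..b} (\<lambda>r. U \<delta> N t r (j v))" by (rule U_continuous_snd[OF d])
  fix r assume r: "r \<in> {a<..<b} - (\<lambda>k. real k * \<delta>) ` {..N}"
  have r0: "0 \<le> r" using r ab by auto
  obtain k where c: "real k * \<delta> < r" "r < real (Suc k) * \<delta>" and kN: "k < N"
    and gk: "grid_floor \<delta> r = real k * \<delta>"
    by (rule grid_cellE[OF d r0, of t N]) (use r ab KN in auto)
  show "((\<lambda>r. U \<delta> N t r (j v)) has_vector_derivative - U \<delta> N t r (A (grid_floor \<delta> r) (j v))) (at r) \<and>
        norm (- U \<delta> N t r (A (grid_floor \<delta> r) (j v))) \<le> CE K * LA * norm v"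
  proof
    show "((\<lambda>r. U \<delta> N t r (j v)) has_vector_derivative - U \<delta> N t r (A (grid_floor \<delta> r) (j v))) (at r)"
      unfolding gk by (rule U_has_derivative_snd[OF d c kN]) (use r ab in auto)
    have g0: "0 \<le> grid_floor \<delta> r" "grid_floor \<delta> r \<le> K" using grid_floor_bounds[OF d r0] r ab by auto
    have "norm (A (grid_floor \<delta> r) (j v)) \<le> LA * norm v"
      using AJ_bound[OF g0(1), of v] LA(2)[OF g0] by (meson mult_right_mono norm_ge_zero order_trans)
    then have "norm (U \<delta> N t r (A (grid_floor \<delta> r) (j v))) \<le> CE K * (LA * norm v)"
      using U_boundK[OF d r0, of t K N "A (grid_floor \<delta> r) (j v)"] r ab KN CE_pos[of K]
      by (meson DiffD1 greaterThanLessThan_iff less_imp_le order_trans mult_left_mono)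
    then show "norm (- U \<delta> N t r (A (grid_floor \<delta> r) (j v))) \<le> CE K * LA * norm v" by (simp add: mult.assoc)
  qed
qed

lemma Useq_equicontinuous_snd:
  assumes K: "0 \<le> K" and e: "0 < e"
  shows "\<exists>\<eta>>0. \<forall>n a b t. 0 \<le> a \<and> a \<le> b \<and> b \<le> t \<and> t \<le> K \<and> b - a < \<eta> \<longrightarrow> norm (Useq n t b x - Useq n t a x) \<le> e"
proof -
  obtain LA where LA: "0 \<le> LA" "\<And>\<tau>. 0 \<le> \<tau> \<Longrightarrow> \<tau> \<le> K \<Longrightarrow> norm (AJ \<tau>) \<le> LA" using AJ_boundedE by blast
  define e' where "e' = e / (3 * CE K)"
  have e': "0 < e'" using e CE_pos[of K] by (simp add: e'_def)
  obtain v where v: "norm (x - j v) < e'" using dense_range_approx[OF j_dense e'] by blast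
  define \<eta> where "\<eta> = e / (3 * (CE K * LA * norm v + 1))"
  have \<eta>: "0 < \<eta>" using e CE_pos[of K] LA by (simp add: \<eta>_def add_nonneg_pos)
  have "norm (Useq n t b x - Useq n t a x) \<le> e" if ab: "0 \<le> a" "a \<le> b" "b \<le> t" "t \<le> K" "b - a < \<eta>" for n a b t
  proof -
    have lin: "Useq n t b x - Useq n t a x = Useq n t b (x - j v) + (Useq n t b (j v) - Useq n t a (j v)) - Useq n t a (x - j v)"
      by (simp add: linear_simps[OF Useq_lin] algebra_simps)
    have 1: "norm (Useq n t b (x - j v)) \<le> CE K * e'"
      using Useq_boundK[of b t K n "x - j v"] ab v CE_pos[of K] by (meson less_imp_le mult_left_mono order_trans)
    have 2: "norm (Useq n t a (x - j v)) \<le> CE K * e'"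
      using Useq_boundK[of a t K n "x - j v"] ab v CE_pos[of K] by (meson less_imp_le mult_left_mono order_trans)
    have "norm (Useq n t b (j v) - Useq n t a (j v)) \<le> (CE K * LA * norm v) * (b - a)"
    proof -
      have "Useq n t b = U (mesh n) (grid_size n K) t b" "Useq n t a = U (mesh n) (grid_size n K) t a"
        using ab by (auto intro: Useq_eq_U)
      then show ?thesis using ab
        by (simp only:) (rule U_embedded_lipschitz_snd[OF mesh_pos grid_size_covers _ _ _ ab(4) LA], auto)
    qed
    also have "\<dots> \<le> (CE K * LA * norm v + 1) * \<eta>"
      using ab CE_pos[of K] LA by (intro mult_mono) auto
    also have "\<dots> = e / 3"
    proof -
      have "0 \<le> CE K * LA * norm v" using CE_pos[of K] LA by simp
      then have "CE K * LA * norm v + 1 \<noteq> 0" by linarith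
      then show ?thesis unfolding \<eta>_def by (simp add: field_simps)
    qed
    finally have 3: "norm (Useq n t b (j v) - Useq n t a (j v)) \<le> e / 3" .
    have "norm (Useq n t b x - Useq n t a x) \<le> norm (Useq n t b (x - j v)) + norm (Useq n t b (j v) - Useq n t a (j v)) + norm (Useq n t a (x - j v))"
      unfolding lin by (meson norm_triangle_ineq4 norm_triangle_ineq order_trans add_right_mono)
    also have "\<dots> \<le> CE K * e' + e / 3 + CE K * e'" using 1 2 3 by (intro add_mono) auto
    also have "\<dots> = e" using CE_pos[of K] by (simp add: e'_def field_simps)
    finally show ?thesis .
  qed
  then show ?thesis using \<eta> by blast
qed

lemma U_linearization_bound:
  assumes d: "0 < \<delta>" and KN: "K \<le> real N * \<delta>" and ab: "0 \<le> a" "a \<le> b" "b \<le> t" "t \<le> K"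
    and p: "0 \<le> p" and q: "0 \<le> q" "q \<le> t" and y0: "y0 = A p (j v)"
    and e1: "0 \<le> e1" "\<And>\<rho>. a \<le> \<rho> \<Longrightarrow> \<rho> \<le> b \<Longrightarrow> norm (AJ (grid_floor \<delta> \<rho>) - AJ p) \<le> e1"
    and e2: "0 \<le> e2" "\<And>\<rho>. a \<le> \<rho> \<Longrightarrow> \<rho> \<le> b \<Longrightarrow> norm (U \<delta> N t q y0 - U \<delta> N t \<rho> y0) \<le> e2"
  shows "norm ((U \<delta> N t b (j v) + (b - q) *\<^sub>R U \<delta> N t q y0) - (U \<delta> N t a (j v) + (a - q) *\<^sub>R U \<delta> N t q y0))
           \<le> (CE K * e1 * norm v + e2) * (b - a)"
proof (rule norm_diff_le_derivative_bound[where F="(\<lambda>k. real k * \<delta>) ` {..N}"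
      and f'="\<lambda>r. - U \<delta> N t r (A (grid_floor \<delta> r) (j v)) + U \<delta> N t q y0"])
  show "finite ((\<lambda>k. real k * \<delta>) ` {..N})" by simp
  show "a \<le> b" by fact
  show "0 \<le> CE K * e1 * norm v + e2" using CE_pos[of K] ab e1 e2 by auto
  show "continuous_on {a..b} (\<lambda>r. U \<delta> N t r (j v) + (r - q) *\<^sub>R U \<delta> N t q y0)"
    by (intro continuous_intros U_continuous_snd[OF d])
  fix r assume r: "r \<in> {a<..<b} - (\<lambda>k. real k * \<delta>) ` {..N}"
  have r0: "0 \<le> r" using r ab by auto
  obtain k where c: "real k * \<delta> < r" "r < real (Suc k) * \<delta>" and kN: "k < N"
    and gk: "grid_floor \<delta> r = real k * \<delta>"
    by (rule grid_cellE[OF d r0, of t N]) (use r ab KN in auto)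
  have g0: "0 \<le> grid_floor \<delta> r" using grid_floor_bounds[OF d r0] by auto
  have der1: "((\<lambda>r. U \<delta> N t r (j v)) has_vector_derivative - U \<delta> N t r (A (grid_floor \<delta> r) (j v))) (at r)"
    unfolding gk by (rule U_has_derivative_snd[OF d c kN]) (use r ab in auto)
  have der2: "((\<lambda>r. (r - q) *\<^sub>R U \<delta> N t q y0) has_vector_derivative U \<delta> N t q y0) (at r)"
    by (auto intro!: derivative_eq_intros)
  show "((\<lambda>r. U \<delta> N t r (j v) + (r - q) *\<^sub>R U \<delta> N t q y0) has_vector_derivative
          - U \<delta> N t r (A (grid_floor \<delta> r) (j v)) + U \<delta> N t q y0) (at r) \<and>
        norm (- U \<delta> N t r (A (grid_floor \<delta> r) (j v)) + U \<delta> N t q y0) \<le> CE K * e1 * norm v + e2"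
  proof
    show "((\<lambda>r. U \<delta> N t r (j v) + (r - q) *\<^sub>R U \<delta> N t q y0) has_vector_derivative
          - U \<delta> N t r (A (grid_floor \<delta> r) (j v)) + U \<delta> N t q y0) (at r)"
      using has_vector_derivative_add[OF der1 der2] by simp
    have lin: "bounded_linear (U \<delta> N t r)" by (rule U_lin[OF d])
    have eq: "- U \<delta> N t r (A (grid_floor \<delta> r) (j v)) + U \<delta> N t q y0 =
        - U \<delta> N t r (A (grid_floor \<delta> r) (j v) - y0) + (U \<delta> N t q y0 - U \<delta> N t r y0)"
      by (simp add: linear_simps[OF lin])
    have "A (grid_floor \<delta> r) (j v) - y0 = blinfun_apply (AJ (grid_floor \<delta> r) - AJ p) v"
      using AJ_apply g0 p by (simp add: y0 blinfun.diff_left)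
    moreover have "norm (AJ (grid_floor \<delta> r) - AJ p) \<le> e1" using e1(2)[of r] r by auto
    ultimately have "norm (A (grid_floor \<delta> r) (j v) - y0) \<le> e1 * norm v"
      using norm_blinfun[of "AJ (grid_floor \<delta> r) - AJ p" v]
      by (metis mult_right_mono norm_ge_zero order_trans)
    then have 1: "norm (U \<delta> N t r (A (grid_floor \<delta> r) (j v) - y0)) \<le> CE K * (e1 * norm v)"
      using U_boundK[OF d r0, of t K N "A (grid_floor \<delta> r) (j v) - y0"] r ab KN CE_pos[of K]
      by (meson DiffD1 greaterThanLessThan_iff less_imp_le order_trans mult_left_mono)
    have 2: "norm (U \<delta> N t q y0 - U \<delta> N t r y0) \<le> e2" using e2(2)[of r] r by auto
    have "norm (- U \<delta> N t r (A (grid_floor \<delta> r) (j v)) + U \<delta> N t q y0) \<le>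
        norm (U \<delta> N t r (A (grid_floor \<delta> r) (j v) - y0)) + norm (U \<delta> N t q y0 - U \<delta> N t r y0)"
      unfolding eq by (metis norm_minus_cancel norm_triangle_ineq)
    also have "\<dots> \<le> CE K * e1 * norm v + e2" using 1 2 by (simp add: mult.assoc)
    finally show "norm (- U \<delta> N t r (A (grid_floor \<delta> r) (j v)) + U \<delta> N t q y0) \<le> CE K * e1 * norm v + e2" .
  qed
qed

lemma evol_has_derivative_snd:
  assumes st: "0 \<le> s" "s \<le> t"
  shows "((\<lambda>r. evol t r (j v)) has_vector_derivative - evol t s (A s (j v))) (at s within {0..t})"
  unfolding has_vector_derivative_def has_derivative_within_alt
proof (intro conjI allI impI)
  show "bounded_linear (\<lambda>h. h *\<^sub>R - evol t s (A s (j v)))" by (rule bounded_linear_scaleR_left)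
  fix e :: real assume e: "0 < e"
  define K where "K = t"
  have K: "0 \<le> K" using st by (simp add: K_def)
  define y0 where "y0 = A s (j v)"
  have e2: "0 < e / 2" using e by simp
  obtain e1 where e1: "0 < e1" and e1v: "CE K * e1 * norm v \<le> e / 2"
    using small_multiplier_exists[OF CE_pos norm_ge_zero e2] by blast
  obtain \<eta>1 where \<eta>1: "\<eta>1 > 0" "\<And>x x'. 0 \<le> x \<Longrightarrow> x \<le> K \<Longrightarrow> 0 \<le> x' \<Longrightarrow> x' \<le> K \<Longrightarrow> \<bar>x' - x\<bar> < \<eta>1 \<Longrightarrow> norm (AJ x' - AJ x) < e1"
    using AJ_uniformly_continuous[OF e1] by blast
  obtain \<eta>2 where \<eta>2: "\<eta>2 > 0" "\<And>n a b t'. 0 \<le> a \<and> a \<le> b \<and> b \<le> t' \<and> t' \<le> K \<and> b - a < \<eta>2 \<Longrightarrow> norm (Useq n t' b y0 - Useq n t' a y0) \<le> e / 2"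
    using Useq_equicontinuous_snd[OF K e2, of y0] by blast
  have h1: "0 < \<eta>1 / 2" using \<eta>1 by simp
  obtain n1 where n1: "\<And>n. n \<ge> n1 \<Longrightarrow> mesh n < \<eta>1 / 2" using mesh_eventually_less[OF h1] by blast
  define d where "d = min (\<eta>1 / 2) \<eta>2"
  have dpos: "0 < d" using \<eta>1 \<eta>2 by (simp add: d_def)
  define g where "g n \<rho> = Useq n t \<rho> (j v) + (\<rho> - s) *\<^sub>R Useq n t s y0" for n \<rho>
  have est: "norm (g n b - g n a) \<le> e * (b - a)"
    if ab: "0 \<le> a" "a \<le> b" "b \<le> t" "b - a < d" "a = s \<or> b = s" and n: "n \<ge> n1" for a b n
  proof -
    have eqU: "Useq n t r = U (mesh n) (grid_size n K) t r" for r using st by (intro Useq_eq_U) (auto simp: K_def)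
    have "norm ((U (mesh n) (grid_size n K) t b (j v) + (b - s) *\<^sub>R U (mesh n) (grid_size n K) t s y0) -
                (U (mesh n) (grid_size n K) t a (j v) + (a - s) *\<^sub>R U (mesh n) (grid_size n K) t s y0))
           \<le> (CE K * e1 * norm v + e / 2) * (b - a)"
    proof (rule U_linearization_bound[OF mesh_pos grid_size_covers ab(1-3) _ st(1) st y0_def])
      show "t \<le> K" by (simp add: K_def)
      show "0 \<le> e1" "0 \<le> e / 2" using e1 e by auto
      fix \<rho> assume \<rho>: "a \<le> \<rho>" "\<rho> \<le> b"
      have \<rho>s: "\<bar>\<rho> - s\<bar> \<le> b - a" using \<rho> ab by auto
      have g: "0 \<le> grid_floor (mesh n) \<rho>" "grid_floor (mesh n) \<rho> \<le> \<rho>" "\<rho> - mesh n < grid_floor (mesh n) \<rho>"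
        using grid_floor_bounds[OF mesh_pos, of \<rho> n] \<rho> ab by auto
      have "\<bar>grid_floor (mesh n) \<rho> - s\<bar> < \<eta>1" using g \<rho>s n1[OF n] ab(4) by (auto simp: d_def)
      then show "norm (AJ (grid_floor (mesh n) \<rho>) - AJ s) \<le> e1"
        using \<eta>1(2)[of s "grid_floor (mesh n) \<rho>"] g \<rho> ab st by (auto simp: K_def)
      have "norm (Useq n t (max \<rho> s) y0 - Useq n t (min \<rho> s) y0) \<le> e / 2"
        using \<eta>2(2)[of "min \<rho> s" "max \<rho> s" t n] \<rho> \<rho>s ab st by (auto simp: K_def d_def)
      then show "norm (U (mesh n) (grid_size n K) t s y0 - U (mesh n) (grid_size n K) t \<rho> y0) \<le> e / 2"
        unfolding eqU[symmetric] by (cases "\<rho> \<le> s") (auto simp: max_def min_def norm_minus_commute)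
    qed
    also have "\<dots> \<le> e * (b - a)" using e1v ab by (intro mult_right_mono) auto
    finally show ?thesis by (simp add: g_def eqU)
  qed
  show "\<exists>d>0. \<forall>y\<in>{0..t}. norm (y - s) < d \<longrightarrow>
      norm (evol t y (j v) - evol t s (j v) - (y - s) *\<^sub>R - evol t s (A s (j v))) \<le> e * norm (y - s)"
  proof (intro exI[of _ d] conjI ballI impI dpos)
    fix y assume y: "y \<in> {0..t}" "norm (y - s) < d"
    have "norm (Useq n t y (j v) - Useq n t s (j v) - (y - s) *\<^sub>R - Useq n t s y0) \<le> e * norm (y - s)" if n: "n \<ge> n1" for n
    proof (cases "s \<le> y")
      case True
      have "norm (g n y - g n s) \<le> e * (y - s)" using y st True n by (intro est) auto
      then show ?thesis using True by (simp add: g_def algebra_simps)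
    next
      case False
      have "norm (g n s - g n y) \<le> e * (s - y)" using y st False n by (intro est) auto
      then show ?thesis using False by (simp add: g_def norm_minus_commute algebra_simps)
    qed
    moreover have "(\<lambda>n. norm (Useq n t y (j v) - Useq n t s (j v) - (y - s) *\<^sub>R - Useq n t s y0)) \<longlonglongrightarrow>
        norm (evol t y (j v) - evol t s (j v) - (y - s) *\<^sub>R - evol t s y0)"
      by (intro tendsto_intros evol_LIMSEQ) (use y st in auto)
    ultimately show "norm (evol t y (j v) - evol t s (j v) - (y - s) *\<^sub>R - evol t s (A s (j v))) \<le> e * norm (y - s)"
      unfolding y0_def by (intro LIMSEQ_le_const2[of _ _ "e * norm (y - s)"]) (auto simp: y0_def)
  qed
qed

lemma evol_has_derivative_fst:
  assumes s: "0 \<le> s"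
  shows "((\<lambda>t. evol t s (j v)) has_vector_derivative A s (j v)) (at s within {s..})"
  unfolding has_vector_derivative_def has_derivative_within_alt
proof (intro conjI allI impI)
  show "bounded_linear (\<lambda>h. h *\<^sub>R A s (j v))" by (rule bounded_linear_scaleR_left)
  fix e :: real assume e: "0 < e"
  define K where "K = s + 1"
  have K: "0 \<le> K" using s by (simp add: K_def)
  define y0 where "y0 = A s (j v)"
  have e2: "0 < e / 2" using e by simp
  obtain e1 where e1: "0 < e1" and e1v: "CE K * e1 * norm v \<le> e / 2"
    using small_multiplier_exists[OF CE_pos norm_ge_zero e2] by blast
  obtain \<eta>1 where \<eta>1: "\<eta>1 > 0" "\<And>x x'. 0 \<le> x \<Longrightarrow> x \<le> K \<Longrightarrow> 0 \<le> x' \<Longrightarrow> x' \<le> K \<Longrightarrow> \<bar>x' - x\<bar> < \<eta>1 \<Longrightarrow> norm (AJ x' - AJ x) < e1"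
    using AJ_uniformly_continuous[OF e1] by blast
  obtain \<eta>2 where \<eta>2: "\<eta>2 > 0" "\<And>n a b t'. 0 \<le> a \<and> a \<le> b \<and> b \<le> t' \<and> t' \<le> K \<and> b - a < \<eta>2 \<Longrightarrow> norm (Useq n t' b y0 - Useq n t' a y0) \<le> e / 2"
    using Useq_equicontinuous_snd[OF K e2, of y0] by blast
  have h1: "0 < \<eta>1 / 2" using \<eta>1 by simp
  obtain n1 where n1: "\<And>n. n \<ge> n1 \<Longrightarrow> mesh n < \<eta>1 / 2" using mesh_eventually_less[OF h1] by blast
  define d where "d = min 1 (min (\<eta>1 / 2) \<eta>2)"
  have dpos: "0 < d" using \<eta>1 \<eta>2 by (simp add: d_def)
  show "\<exists>d>0. \<forall>y\<in>{s..}. norm (y - s) < d \<longrightarrow>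
      norm (evol y s (j v) - evol s s (j v) - (y - s) *\<^sub>R A s (j v)) \<le> e * norm (y - s)"
  proof (intro exI[of _ d] conjI ballI impI dpos)
    fix y assume y: "y \<in> {s..}" "norm (y - s) < d"
    have ys: "s \<le> y" "y - s < d" using y by auto
    have yK: "y \<le> K" using ys by (simp add: K_def d_def)
    have "norm (Useq n y s (j v) - j v - (y - s) *\<^sub>R y0) \<le> e * norm (y - s)" if n: "n \<ge> n1" for n
    proof -
      have eqU: "Useq n y r = U (mesh n) (grid_size n K) y r" for r using ys s yK by (intro Useq_eq_U) auto
      have "norm ((U (mesh n) (grid_size n K) y y (j v) + (y - y) *\<^sub>R U (mesh n) (grid_size n K) y y y0) -
                (U (mesh n) (grid_size n K) y s (j v) + (s - y) *\<^sub>R U (mesh n) (grid_size n K) y y y0))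
             \<le> (CE K * e1 * norm v + e / 2) * (y - s)"
      proof (rule U_linearization_bound[OF mesh_pos grid_size_covers s ys(1) order_refl yK s _ order_refl y0_def])
        show "0 \<le> y" using s ys by simp
        show "0 \<le> e1" "0 \<le> e / 2" using e1 e by auto
        fix \<rho> assume \<rho>: "s \<le> \<rho>" "\<rho> \<le> y"
        have g: "0 \<le> grid_floor (mesh n) \<rho>" "grid_floor (mesh n) \<rho> \<le> \<rho>" "\<rho> - mesh n < grid_floor (mesh n) \<rho>"
          using grid_floor_bounds[OF mesh_pos, of \<rho> n] \<rho> s by auto
        have "\<bar>grid_floor (mesh n) \<rho> - s\<bar> < \<eta>1" using g \<rho> n1[OF n] ys by (auto simp: d_def)
        then show "norm (AJ (grid_floor (mesh n) \<rho>) - AJ s) \<le> e1"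
          using \<eta>1(2)[of s "grid_floor (mesh n) \<rho>"] g \<rho> yK s by auto
        have "norm (Useq n y y y0 - Useq n y \<rho> y0) \<le> e / 2"
          using \<eta>2(2)[of \<rho> y y n] \<rho> ys s yK by (auto simp: d_def)
        then show "norm (U (mesh n) (grid_size n K) y y y0 - U (mesh n) (grid_size n K) y \<rho> y0) \<le> e / 2"
          unfolding eqU[symmetric] .
      qed
      also have "\<dots> \<le> e * (y - s)" using e1v ys by (intro mult_right_mono) auto
      finally show ?thesis using ys
        by (simp add: eqU[symmetric] Useq_diag norm_minus_commute algebra_simps)
    qed
    moreover have "(\<lambda>n. norm (Useq n y s (j v) - j v - (y - s) *\<^sub>R y0)) \<longlonglongrightarrow> norm (evol y s (j v) - j v - (y - s) *\<^sub>R y0)"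
      by (intro tendsto_intros evol_LIMSEQ) (use ys s in auto)
    ultimately have "norm (evol y s (j v) - j v - (y - s) *\<^sub>R y0) \<le> e * norm (y - s)"
      by (intro LIMSEQ_le_const2[of _ _ "e * norm (y - s)"]) auto
    then show "norm (evol y s (j v) - evol s s (j v) - (y - s) *\<^sub>R A s (j v)) \<le> e * norm (y - s)"
      using s by (simp add: evol_diag y0_def)
  qed
qed

(* The derivative of \<rho> \<mapsto> R \<rho> (U \<rho> s v) is R \<rho> ((A (grid_floor \<delta> \<rho>) - A \<rho>) (U \<rho> s v)). *)
lemma propagator_U_diff_bound:
  fixes R :: "real \<Rightarrow> 'e \<Rightarrow> 'e"
  assumes d: "0 < \<delta>" and KN: "K \<le> real N * \<delta>" and srt: "0 \<le> s" "s \<le> r" "r \<le> t" "t \<le> K"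
    and R: "\<And>\<rho>. 0 \<le> \<rho> \<Longrightarrow> \<rho> \<le> t \<Longrightarrow> bounded_linear (R \<rho>) \<and> (\<forall>z. norm (R \<rho> z) \<le> C * norm z)"
    and Rc: "\<And>z. continuous_on {0..t} (\<lambda>\<rho>. R \<rho> z)"
    and R_deriv: "\<And>w \<rho>. 0 \<le> \<rho> \<Longrightarrow> \<rho> \<le> t \<Longrightarrow> ((\<lambda>\<rho>. R \<rho> (j w)) has_vector_derivative - R \<rho> (A \<rho> (j w))) (at \<rho> within {0..t})"
    and C: "0 \<le> C"
    and eps: "0 \<le> \<epsilon>" "\<And>\<rho>. 0 \<le> \<rho> \<Longrightarrow> \<rho> \<le> K \<Longrightarrow> norm (AJ (grid_floor \<delta> \<rho>) - AJ \<rho>) \<le> \<epsilon>"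
  shows "norm (R t (U \<delta> N t s (j v)) - R r (U \<delta> N r s (j v))) \<le> (C * \<epsilon> * CV K * norm v) * (t - r)"
proof (rule norm_diff_le_derivative_bound[where F="(\<lambda>k. real k * \<delta>) ` {..N}"
    and f'="\<lambda>\<rho>. R \<rho> (A (grid_floor \<delta> \<rho>) (U \<delta> N \<rho> s (j v)) - A \<rho> (U \<delta> N \<rho> s (j v)))"])
  show "finite ((\<lambda>k. real k * \<delta>) ` {..N})" by simp
  show "r \<le> t" by fact
  show "0 \<le> C * \<epsilon> * CV K * norm v" using C eps CV_pos[of K] srt by auto
  show "continuous_on {r..t} (\<lambda>\<rho>. R \<rho> (U \<delta> N \<rho> s (j v)))"
  proof (rule continuous_on_operator_apply[where T=R and C=C])
    show "bounded_linear (R p) \<and> (\<forall>z. norm (R p z) \<le> C * norm z)" if "p \<in> {r..t}" for p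
      using that srt by (intro R) auto
    show "continuous_on {r..t} (\<lambda>p. R p z)" for z
      by (rule continuous_on_subset[OF Rc]) (use srt in auto)
    show "continuous_on {r..t} (\<lambda>p. U \<delta> N p s (j v))" by (rule U_continuous_fst[OF d])
  qed
  fix \<rho> assume \<rho>: "\<rho> \<in> {r<..<t} - (\<lambda>k. real k * \<delta>) ` {..N}"
  have \<rho>0: "0 \<le> \<rho>" using \<rho> srt by auto
  obtain k where c: "real k * \<delta> < \<rho>" "\<rho> < real (Suc k) * \<delta>" and kN: "k < N"
    and gk: "grid_floor \<delta> \<rho> = real k * \<delta>"
    by (rule grid_cellE[OF d \<rho>0, of t N]) (use \<rho> srt KN in auto)
  define w where "w = UV \<delta> N \<rho> s v"
  have yw: "U \<delta> N \<rho> s (j v) = j w" unfolding w_def by (rule UV_embed[OF d, symmetric])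
  have Rlin: "bounded_linear (R \<rho>)" using R[of \<rho>] \<rho> srt by auto
  have "((\<lambda>\<rho>. R \<rho> (U \<delta> N \<rho> s (j v))) has_vector_derivative
      R \<rho> (A (real k * \<delta>) (U \<delta> N \<rho> s (j v))) + - R \<rho> (A \<rho> (j w))) (at \<rho> within {r<..<t})"
  proof (rule has_vector_derivative_operator_apply[where T=R and y="\<lambda>\<rho>. U \<delta> N \<rho> s (j v)" and C=C])
    show "bounded_linear (R p) \<and> (\<forall>z. norm (R p z) \<le> C * norm z)" if "p \<in> {r<..<t}" for p
      using that srt by (intro R) auto
    show "((\<lambda>p. R p z) \<longlongrightarrow> R \<rho> z) (at \<rho> within {r<..<t})" for z
    proof -
      have "((\<lambda>p. R p z) \<longlongrightarrow> R \<rho> z) (at \<rho> within {0..t})"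
        using Rc[of z] \<rho> srt by (auto simp: continuous_on_def)
      then show ?thesis by (rule tendsto_within_subset) (use srt in auto)
    qed
    show "((\<lambda>\<rho>. U \<delta> N \<rho> s (j v)) has_vector_derivative A (real k * \<delta>) (U \<delta> N \<rho> s (j v))) (at \<rho> within {r<..<t})"
      by (rule has_vector_derivative_at_within, rule U_has_derivative_fst[OF d c kN]) (use \<rho> srt in auto)
    show "((\<lambda>p. R p (U \<delta> N \<rho> s (j v))) has_vector_derivative - R \<rho> (A \<rho> (j w))) (at \<rho> within {r<..<t})"
      unfolding yw by (rule has_vector_derivative_within_subset[OF R_deriv]) (use \<rho> srt in auto)
  qed (use \<rho> in auto)
  moreover have "at \<rho> within {r<..<t} = at \<rho>" using \<rho> by (intro at_within_open) auto
  ultimately show "((\<lambda>\<rho>. R \<rho> (U \<delta> N \<rho> s (j v))) has_vector_derivative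
      R \<rho> (A (grid_floor \<delta> \<rho>) (U \<delta> N \<rho> s (j v)) - A \<rho> (U \<delta> N \<rho> s (j v)))) (at \<rho>) \<and>
    norm (R \<rho> (A (grid_floor \<delta> \<rho>) (U \<delta> N \<rho> s (j v)) - A \<rho> (U \<delta> N \<rho> s (j v)))) \<le> C * \<epsilon> * CV K * norm v"
  proof (intro conjI)
    assume der: "((\<lambda>\<rho>. R \<rho> (U \<delta> N \<rho> s (j v))) has_vector_derivative
      R \<rho> (A (real k * \<delta>) (U \<delta> N \<rho> s (j v))) + - R \<rho> (A \<rho> (j w))) (at \<rho> within {r<..<t})"
      and at: "at \<rho> within {r<..<t} = at \<rho>"
    show "((\<lambda>\<rho>. R \<rho> (U \<delta> N \<rho> s (j v))) has_vector_derivative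
      R \<rho> (A (grid_floor \<delta> \<rho>) (U \<delta> N \<rho> s (j v)) - A \<rho> (U \<delta> N \<rho> s (j v)))) (at \<rho>)"
      using der at by (simp add: gk yw linear_simps[OF Rlin])
    have g0: "0 \<le> grid_floor \<delta> \<rho>" using grid_floor_bounds[OF d \<rho>0] by auto
    have "A (grid_floor \<delta> \<rho>) (j w) - A \<rho> (j w) = blinfun_apply (AJ (grid_floor \<delta> \<rho>) - AJ \<rho>) w"
      using AJ_apply g0 \<rho>0 by (simp add: blinfun.diff_left)
    moreover have "norm (AJ (grid_floor \<delta> \<rho>) - AJ \<rho>) \<le> \<epsilon>" using eps(2)[of \<rho>] \<rho> srt by auto
    ultimately have "norm (A (grid_floor \<delta> \<rho>) (j w) - A \<rho> (j w)) \<le> \<epsilon> * norm w"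
      using norm_blinfun[of "AJ (grid_floor \<delta> \<rho>) - AJ \<rho>" w] by (metis mult_right_mono norm_ge_zero order_trans)
    moreover have "norm w \<le> CV K * norm v" unfolding w_def
      by (rule UV_boundK[OF d]) (use \<rho> srt KN in auto)
    ultimately have 1: "norm (A (grid_floor \<delta> \<rho>) (j w) - A \<rho> (j w)) \<le> \<epsilon> * (CV K * norm v)"
      using eps(1) by (meson mult_left_mono order_trans)
    have "norm (R \<rho> (A (grid_floor \<delta> \<rho>) (j w) - A \<rho> (j w))) \<le> C * norm (A (grid_floor \<delta> \<rho>) (j w) - A \<rho> (j w))"
      using R[of \<rho>] \<rho> srt by auto
    also have "\<dots> \<le> C * (\<epsilon> * (CV K * norm v))" using 1 C by (rule mult_left_mono)
    finally show "norm (R \<rho> (A (grid_floor \<delta> \<rho>) (U \<delta> N \<rho> s (j v)) - A \<rho> (U \<delta> N \<rho> s (j v)))) \<le> C * \<epsilon> * CV K * norm v"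
      by (simp add: yw mult.assoc)
  qed
qed

lemma bounded_linear_eq_on_range:
  assumes f: "bounded_linear f" and g: "bounded_linear g" and eq: "\<And>v. f (j v) = g (j v)"
  shows "f = g"
proof -
  have "closure (range j) \<subseteq> {x. f x - g x = 0}"
  proof (rule closure_minimal)
    show "range j \<subseteq> {x. f x - g x = 0}" using eq by auto
    show "closed {x. f x - g x = 0}"
      using f g by (intro closed_Collect_eq continuous_intros) (auto intro: linear_continuous_on)
  qed
  then show ?thesis using j_dense by (auto simp: fun_eq_iff)
qed

lemma propagator_evol_invariant:
  fixes R :: "real \<Rightarrow> 'e \<Rightarrow> 'e"
  assumes srt: "0 \<le> s" "s \<le> r" "r \<le> t"
    and R: "\<And>\<rho>. 0 \<le> \<rho> \<Longrightarrow> \<rho> \<le> t \<Longrightarrow> bounded_linear (R \<rho>) \<and> (\<forall>z. norm (R \<rho> z) \<le> C * norm z)"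
    and Rc: "\<And>z. continuous_on {0..t} (\<lambda>\<rho>. R \<rho> z)"
    and R_deriv: "\<And>w \<rho>. 0 \<le> \<rho> \<Longrightarrow> \<rho> \<le> t \<Longrightarrow> ((\<lambda>\<rho>. R \<rho> (j w)) has_vector_derivative - R \<rho> (A \<rho> (j w))) (at \<rho> within {0..t})"
    and C: "0 \<le> C"
  shows "R t (evol t s (j v)) = R r (evol r s (j v))"
proof -
  define K where "K = t"
  have K: "0 \<le> K" using srt by (simp add: K_def)
  define B where "B = C * CV K * norm v * (t - r)"
  have B: "0 \<le> B" using C CV_pos[of K] srt by (simp add: B_def)
  have Rt: "bounded_linear (R t)" "bounded_linear (R r)" using R srt by auto
  have bnd: "norm (R t (evol t s (j v)) - R r (evol r s (j v))) \<le> B * \<epsilon>" if e: "0 < \<epsilon>" for \<epsilon>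
  proof -
    obtain n0 where n0: "\<And>n \<rho>. n \<ge> n0 \<Longrightarrow> 0 \<le> \<rho> \<Longrightarrow> \<rho> \<le> K \<Longrightarrow> norm (AJ (grid_floor (mesh n) \<rho>) - AJ \<rho>) \<le> \<epsilon>"
      using AJ_grid_floor_close[OF e] by blast
    have "norm (R t (Useq n t s (j v)) - R r (Useq n r s (j v))) \<le> B * \<epsilon>" if n: "n \<ge> n0" for n
    proof -
      have "Useq n t s = U (mesh n) (grid_size n K) t s" "Useq n r s = U (mesh n) (grid_size n K) r s"
        using srt by (auto intro!: Useq_eq_U simp: K_def)
      moreover have "norm (R t (U (mesh n) (grid_size n K) t s (j v)) - R r (U (mesh n) (grid_size n K) r s (j v))) \<le> (C * \<epsilon> * CV K * norm v) * (t - r)"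
        by (rule propagator_U_diff_bound[OF mesh_pos grid_size_covers srt _ R Rc R_deriv C]) (use e n0[OF n] in \<open>auto simp: K_def\<close>)
      ultimately show ?thesis by (simp add: B_def ac_simps)
    qed
    moreover have "(\<lambda>n. norm (R t (Useq n t s (j v)) - R r (Useq n r s (j v)))) \<longlonglongrightarrow> norm (R t (evol t s (j v)) - R r (evol r s (j v)))"
      using srt by (intro tendsto_intros bounded_linear.tendsto[OF Rt(1)] bounded_linear.tendsto[OF Rt(2)] evol_LIMSEQ) auto
    ultimately show ?thesis by (intro LIMSEQ_le_const2[of _ _ "B * \<epsilon>"]) auto
  qed
  have "norm (R t (evol t s (j v)) - R r (evol r s (j v))) \<le> 0"
  proof (rule field_le_epsilon)
    fix e :: real assume e: "0 < e"
    have "0 < e / (B + 1)" using e B by simp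
    then have "norm (R t (evol t s (j v)) - R r (evol r s (j v))) \<le> B * (e / (B + 1))" by (rule bnd)
    also have "\<dots> \<le> e" using B e by (simp add: field_simps)
    finally show "norm (R t (evol t s (j v)) - R r (evol r s (j v))) \<le> 0 + e" by simp
  qed
  then show ?thesis by simp
qed

lemma evol_continuous_snd: "continuous_on {0..t} (\<lambda>\<rho>. evol t \<rho> z)"
proof -
  have "continuous_on {0..t} ((\<lambda>(t, s). evol t s z) \<circ> (\<lambda>\<rho>. (t, \<rho>)))"
    by (rule continuous_on_compose[OF _ continuous_on_subset[OF evol_continuous]]) (auto intro!: continuous_intros)
  then show ?thesis by (simp add: o_def)
qed

lemma evol_compose:
  assumes srt: "0 \<le> s" "s \<le> r" "r \<le> t"
  shows "evol t r (evol r s x) = evol t s x"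
proof -
  have "(\<lambda>x. evol t r (evol r s x)) = evol t s"
  proof (rule bounded_linear_eq_on_range)
    show "bounded_linear (\<lambda>x. evol t r (evol r s x))" by (rule bounded_linear_compose[OF evol_bounded_linear evol_bounded_linear])
    show "bounded_linear (evol t s)" by (rule evol_bounded_linear)
    fix v
    have "evol t t (evol t s (j v)) = evol t r (evol r s (j v))"
    proof (rule propagator_evol_invariant[where C="CE t"])
      show "bounded_linear (evol t \<rho>) \<and> (\<forall>z. norm (evol t \<rho> z) \<le> CE t * norm z)" if "0 \<le> \<rho>" "\<rho> \<le> t" for \<rho>
        using that by (auto intro: evol_lin evol_boundK)
      show "((\<lambda>\<rho>. evol t \<rho> (j w)) has_vector_derivative - evol t \<rho> (A \<rho> (j w))) (at \<rho> within {0..t})"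
        if "0 \<le> \<rho>" "\<rho> \<le> t" for w \<rho> using that by (rule evol_has_derivative_snd)
      show "0 \<le> CE t" using CE_pos[of t] srt by simp
    qed (use srt evol_continuous_snd in auto)
    then show "evol t r (evol r s (j v)) = evol t s (j v)" using srt by (simp add: evol_diag)
  qed
  then show ?thesis by (simp add: fun_eq_iff)
qed

lemma evol_corr: "corr_evol_sys j A M \<omega> evol"
  unfolding corr_evol_sys_def
proof (intro conjI allI impI)
  show "evol t s = id" if "\<not> (0 \<le> s \<and> s \<le> t)" for t s using that evol_outside by (auto simp: fun_eq_iff)
  show "bounded_linear (evol t s)" for t s by (rule evol_bounded_linear)
  show "evol s s = id" if "0 \<le> s" for s using that evol_diag by (auto simp: fun_eq_iff)
  show "evol t r \<circ> evol r s = evol t s" if "0 \<le> s \<and> s \<le> r \<and> r \<le> t" for t r s using that evol_compose by (auto simp: fun_eq_iff)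
  show "continuous_on {(t, s). 0 \<le> s \<and> s \<le> t} (\<lambda>(t, s). evol t s x)" for x by (rule evol_continuous)
  show "norm (evol t s x) \<le> M * exp (\<omega> * (t - s)) * norm x" if "0 \<le> s \<and> s \<le> t" for t s x using that evol_bound by auto
  show "((\<lambda>t. evol t s (j v)) has_vector_derivative A s (j v)) (at s within {s..})" if "0 \<le> s" for v s
    using that by (rule evol_has_derivative_fst)
  show "((\<lambda>r. evol t r (j v)) has_vector_derivative - evol t s (A s (j v))) (at s within {0..t})" if "0 \<le> s \<and> s \<le> t" for v t s
    using that evol_has_derivative_snd by auto
qed

lemma evol_unique:
  assumes c: "corr_evol_sys j A M \<omega> R'"
  shows "R' = evol"
proof (intro ext)
  fix t s x
  show "R' t s x = evol t s x"
  proof (cases "0 \<le> s \<and> s \<le> t")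
    case False
    then show ?thesis using c evol_outside by (auto simp: corr_evol_sys_def)
  next
    case True
    have lin: "bounded_linear (R' t s)" using c True by (auto simp: corr_evol_sys_def)
    have "R' t s = evol t s"
    proof (rule bounded_linear_eq_on_range[OF lin evol_bounded_linear])
      fix v
      have "R' t t (evol t s (j v)) = R' t s (evol s s (j v))"
      proof (rule propagator_evol_invariant[where C="CE t"])
        show "bounded_linear (R' t \<rho>) \<and> (\<forall>z. norm (R' t \<rho> z) \<le> CE t * norm z)" if "0 \<le> \<rho>" "\<rho> \<le> t" for \<rho>
          using M_ge_1 that by (intro corr_evol_sys_growth_bound[OF c]) auto
        show "continuous_on {0..t} (\<lambda>\<rho>. R' t \<rho> z)" for z
          by (rule corr_evol_sys_continuous_snd[OF c])
        show "((\<lambda>\<rho>. R' t \<rho> (j w)) has_vector_derivative - R' t \<rho> (A \<rho> (j w))) (at \<rho> within {0..t})"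
          if "0 \<le> \<rho>" "\<rho> \<le> t" for w \<rho> using c that by (auto simp: corr_evol_sys_def)
        show "0 \<le> CE t" using CE_pos[of t] True by simp
      qed (use True in auto)
      moreover have "R' t t = id" using c True by (auto simp: corr_evol_sys_def)
      ultimately show "R' t s (j v) = evol t s (j v)" using True by (simp add: evol_diag)
    qed
    then show ?thesis by simp
  qed
qed

theorem evol_sys_eq: "evol_sys j A M \<omega> = evol"
  unfolding evol_sys_def
proof (rule the_equality)
  show "corr_evol_sys j A M \<omega> evol" by (rule evol_corr)
  show "R = evol" if "corr_evol_sys j A M \<omega> R" for R using that by (rule evol_unique)
qed

theorem evol_sys_corr: "corr_evol_sys j A M \<omega> (evol_sys j A M \<omega>)"
  using evol_corr evol_sys_eq by simp

end

section \<open>Time rescaling and averaging\<close>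

lemma sgprod_rescale:
  "sgprod (\<lambda>t. S (t / lam)) \<tau> \<sigma> n x = sgprod S (\<lambda>i. \<tau> i / lam) \<sigma> n x"
  by (induction n) auto

lemma hyp1_rescale:
  assumes h: "hyp1 D A M \<omega>" and lam: "0 < lam"
  shows "hyp1 (\<lambda>t. D (t / lam)) (\<lambda>t. A (t / lam)) M \<omega>"
  unfolding hyp1_def
proof (intro conjI allI impI)
  show "1 \<le> M" using h by (simp add: hyp1_def)
  fix t :: real assume "0 \<le> t"
  then show "\<exists>S. is_generator (D (t / lam)) (A (t / lam)) S" using h lam by (simp add: hyp1_def)
next
  fix n :: nat and \<tau> \<sigma> :: "nat \<Rightarrow> real" and x
  assume a: "\<forall>i<n. 0 \<le> \<tau> i \<and> 0 \<le> \<sigma> i" "\<forall>i k. i \<le> k \<longrightarrow> k < n \<longrightarrow> \<tau> i \<le> \<tau> k"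
  have H: "\<And>n (\<tau>::nat \<Rightarrow> real) \<sigma> x. (\<forall>i<n. 0 \<le> \<tau> i \<and> 0 \<le> \<sigma> i) \<Longrightarrow> (\<forall>i k. i \<le> k \<longrightarrow> k < n \<longrightarrow> \<tau> i \<le> \<tau> k) \<Longrightarrow>
        norm (sgprod (\<lambda>t. sg (D t) (A t)) \<tau> \<sigma> n x) \<le> M * exp (\<omega> * (\<Sum>i<n. \<sigma> i)) * norm x"
    using h unfolding hyp1_def by blast
  have "norm (sgprod (\<lambda>t. sg (D t) (A t)) (\<lambda>i. \<tau> i / lam) \<sigma> n x) \<le> M * exp (\<omega> * (\<Sum>i<n. \<sigma> i)) * norm x"
  proof (rule H)
    show "\<forall>i<n. 0 \<le> \<tau> i / lam \<and> 0 \<le> \<sigma> i" using a lam by auto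
    show "\<forall>i k. i \<le> k \<longrightarrow> k < n \<longrightarrow> \<tau> i / lam \<le> \<tau> k / lam" using a lam by (auto simp: divide_right_mono)
  qed
  then show "norm (sgprod (\<lambda>t. sg (D (t / lam)) (A (t / lam))) \<tau> \<sigma> n x) \<le> M * exp (\<omega> * (\<Sum>i<n. \<sigma> i)) * norm x"
    using sgprod_rescale[of "\<lambda>t. sg (D t) (A t)" lam \<tau> \<sigma> n x] by simp
qed

lemma hyperbolic_family_rescale:
  fixes j :: "'v::banach \<Rightarrow> 'e::banach"
  assumes j: "bounded_linear j" "closure (range j) = UNIV"
    and h: "hyp1 D A M \<omega>" "hyp2 j D A MV \<omega>V" "hyp3 j D A" and lam: "0 < lam"
  shows "hyperbolic_family j (\<lambda>t. D (t / lam)) (\<lambda>t. A (t / lam)) M \<omega> MV \<omega>V"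
proof (rule hyperbolic_family.intro)
  show "bounded_linear j" by (fact j)
  show "closure (range j) = UNIV" by (fact j)
  show "hyp1 (\<lambda>t. D (t / lam)) (\<lambda>t. A (t / lam)) M \<omega>" by (rule hyp1_rescale[OF h(1) lam])
  show "hyp2 j (\<lambda>t. D (t / lam)) (\<lambda>t. A (t / lam)) MV \<omega>V"
    unfolding hyp2_def
  proof
    show "\<forall>t\<ge>0. admissible j (D (t / lam)) (A (t / lam))" using h(2) lam by (simp add: hyp2_def)
    have "hyp1 (\<lambda>t. partD j (D t) (A t)) (\<lambda>t. partA j (D t) (A t)) MV \<omega>V" using h(2) by (simp add: hyp2_def)
    from hyp1_rescale[OF this lam]
    show "hyp1 (\<lambda>t. partD j (D (t / lam)) (A (t / lam))) (\<lambda>t. partA j (D (t / lam)) (A (t / lam))) MV \<omega>V" by simp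
  qed
  show "hyp3 j (\<lambda>t. D (t / lam)) (\<lambda>t. A (t / lam))"
    unfolding hyp3_def
  proof
    show "\<forall>t\<ge>0. range j \<subseteq> D (t / lam) \<and> bounded_linear (\<lambda>v. A (t / lam) (j v))" using h(3) lam by (simp add: hyp3_def)
    have c: "continuous_on {0..} (\<lambda>t. Blinfun (\<lambda>v. A t (j v)))" using h(3) by (simp add: hyp3_def)
    have "continuous_on {0..} (\<lambda>t. t / lam)" using lam by (intro continuous_intros) auto
    moreover have "(\<lambda>t. t / lam) ` {0..} \<subseteq> {0..}" using lam by auto
    ultimately show "continuous_on {0..} (\<lambda>t. Blinfun (\<lambda>v. A (t / lam) (j v)))"
      using continuous_on_compose2[OF c] by blast
  qed
qed

lemma evol_sys_rescaled_corr:
  fixes j :: "'v::banach \<Rightarrow> 'e::banach"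
  assumes "bounded_linear j" "closure (range j) = UNIV"
    and "hyp1 D A M \<omega>" "hyp2 j D A MV \<omega>V" "hyp3 j D A" and "0 < lam"
  shows "corr_evol_sys j (\<lambda>t. A (t / lam)) M \<omega> (evol_sys j (\<lambda>t. A (t / lam)) M \<omega>)"
  by (rule hyperbolic_family.evol_sys_corr[OF hyperbolic_family_rescale[OF assms]])

lemma duhamel_formula:
  fixes j :: "'v::banach \<Rightarrow> 'e::banach" and R :: "real \<Rightarrow> real \<Rightarrow> 'e \<Rightarrow> 'e"
    and S :: "real \<Rightarrow> 'e \<Rightarrow> 'e"
  assumes corr: "corr_evol_sys j Ar M \<omega> R"
    and g: "is_generator Dh Ah S" and rj: "range j \<subseteq> Dh" and adm: "admissible j Dh Ah"
    and st: "0 \<le> s" "s \<le> t"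
    and C: "\<And>r z. s \<le> r \<Longrightarrow> r \<le> t \<Longrightarrow> norm (R t r z) \<le> C * norm z"
  shows "((\<lambda>r. R t r (Ah (S (r - s) (j w)) - Ar r (S (r - s) (j w)))) has_integral
           (S (t - s) (j w) - R t s (j w))) {s..t}"
proof -
  have c0: "C0_semigroup S" using g by (rule generator_C0_semigroup)
  have jD: "j w \<in> Dh" using rj by auto
  define y where "y r = inv j (S (r - s) (j w))" for r
  have jy: "S (r - s) (j w) = j (y r)" if "s \<le> r" for r
    using admissible_semigroup_in_range[OF g adm, of "r - s" w] that by (simp add: y_def)
  have Rlin: "bounded_linear (R t r)" if "0 \<le> r" "r \<le> t" for r using corr that by (auto simp: corr_evol_sys_def)
  have Rbd: "bounded_linear (R t p) \<and> (\<forall>z. norm (R t p z) \<le> C * norm z)" if "s \<le> p" "p \<le> t" for p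
    using that st Rlin C by auto
  have Sc: "continuous_on {s..t} (\<lambda>r. S (r - s) (j w))"
  proof -
    have "continuous_on {s..t} ((\<lambda>r. S r (j w)) \<circ> (\<lambda>r. r - s))"
      by (rule continuous_on_compose[OF _ continuous_on_subset[OF C0_semigroup_continuous[OF c0]]]) (auto intro!: continuous_intros)
    then show ?thesis by (simp add: o_def)
  qed
  have "((\<lambda>r. R t r (Ah (S (r - s) (j w)) - Ar r (S (r - s) (j w)))) has_integral
      (R t t (S (t - s) (j w)) - R t s (S (s - s) (j w)))) {s..t}"
  proof (rule fundamental_theorem_of_calculus_interior_strong[where S="{}"])
    show "continuous_on {s..t} (\<lambda>r. R t r (S (r - s) (j w)))"
      by (rule continuous_on_operator_apply[where T="R t" and C=C])
        (use Rbd Sc st in \<open>auto intro: continuous_on_subset[OF corr_evol_sys_continuous_snd[OF corr]]\<close>)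
    fix r assume r: "r \<in> {s<..<t} - {}"
    have A1: "Ah (S (r - s) (j w)) = S (r - s) (Ah (j w))" using generator_semigroup_commute[OF g jD] r by simp
    have "((\<lambda>r. R t r (S (r - s) (j w))) has_vector_derivative R t r (S (r - s) (Ah (j w))) + - R t r (Ar r (j (y r)))) (at r within {s<..<t})"
    proof (rule has_vector_derivative_operator_apply[where T="R t" and y="\<lambda>r. S (r - s) (j w)" and C=C])
      show "((\<lambda>p. R t p z) \<longlongrightarrow> R t r z) (at r within {s<..<t})" for z
      proof -
        have "((\<lambda>p. R t p z) \<longlongrightarrow> R t r z) (at r within {0..t})"
          using corr_evol_sys_continuous_snd[OF corr, of t z] r st by (auto simp: continuous_on_def)
        then show ?thesis by (rule tendsto_within_subset) (use st in auto)
      qed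
      have "(((\<lambda>u. S u (j w)) \<circ> (\<lambda>r. r - s)) has_vector_derivative 1 *\<^sub>R S (r - s) (Ah (j w))) (at r within {s<..<t})"
      proof (rule vector_diff_chain_within)
        show "((\<lambda>r. r - s) has_vector_derivative 1) (at r within {s<..<t})" by (auto intro!: derivative_eq_intros)
        show "((\<lambda>u. S u (j w)) has_vector_derivative S (r - s) (Ah (j w))) (at (r - s) within (\<lambda>r. r - s) ` {s<..<t})"
          using semigroup_has_vector_derivative[OF g jD, of "r - s"] r by (auto intro: has_vector_derivative_at_within)
      qed
      then show "((\<lambda>r. S (r - s) (j w)) has_vector_derivative S (r - s) (Ah (j w))) (at r within {s<..<t})"
        by (simp add: o_def)
      have "((\<lambda>p. R t p (j (y r))) has_vector_derivative - R t r (Ar r (j (y r)))) (at r within {0..t})"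
        using corr r st unfolding corr_evol_sys_def by auto
      then have "((\<lambda>p. R t p (j (y r))) has_vector_derivative - R t r (Ar r (j (y r)))) (at r within {s<..<t})"
        by (rule has_vector_derivative_within_subset) (use st in auto)
      then show "((\<lambda>p. R t p (S (r - s) (j w))) has_vector_derivative - R t r (Ar r (j (y r)))) (at r within {s<..<t})"
        using jy[of r] r by simp
    qed (use r Rbd in auto)
    moreover have "at r within {s<..<t} = at r" using r by (intro at_within_open) auto
    moreover have "R t r (S (r - s) (Ah (j w))) + - R t r (Ar r (j (y r))) =
        R t r (Ah (S (r - s) (j w)) - Ar r (S (r - s) (j w)))"
      using A1 jy[of r] r Rlin[of r] st by (simp add: linear_simps)
    ultimately show "((\<lambda>r. R t r (S (r - s) (j w))) has_vector_derivative
        R t r (Ah (S (r - s) (j w)) - Ar r (S (r - s) (j w)))) (at r)" by simp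
  qed (use st in auto)
  moreover have "R t t = id" using corr st by (auto simp: corr_evol_sys_def)
  ultimately show ?thesis using c0 by simp
qed

lemma duhamel_estimate:
  fixes j :: "'v::banach \<Rightarrow> 'e::banach" and R :: "real \<Rightarrow> real \<Rightarrow> 'e \<Rightarrow> 'e"
    and S :: "real \<Rightarrow> 'e \<Rightarrow> 'e"
  assumes corr: "corr_evol_sys j Ar M \<omega> R"
    and g: "is_generator Dh Ah S" and rj: "range j \<subseteq> Dh" and adm: "admissible j Dh Ah"
    and st: "0 \<le> s" "s \<le> t"
    and C: "0 \<le> C" "\<And>r z. s \<le> r \<Longrightarrow> r \<le> t \<Longrightarrow> norm (R t r z) \<le> C * norm z"
    and B: "0 \<le> B" "\<And>\<tau>. 0 \<le> \<tau> \<Longrightarrow> \<tau> \<le> t - s \<Longrightarrow> norm (inv j (S \<tau> (j w))) \<le> B"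
    and lin: "\<And>r. s \<le> r \<Longrightarrow> r \<le> t \<Longrightarrow> bounded_linear (\<lambda>v. Ar r (j v) - Ah (j v))"
    and gint: "(\<lambda>r. onorm (\<lambda>v. Ar r (j v) - Ah (j v))) integrable_on {s..t}"
  shows "norm (S (t - s) (j w) - R t s (j w)) \<le> C * B * integral {s..t} (\<lambda>r. onorm (\<lambda>v. Ar r (j v) - Ah (j v)))"
proof -
  define f' where "f' r = R t r (Ah (S (r - s) (j w)) - Ar r (S (r - s) (j w)))" for r
  have hi: "(f' has_integral (S (t - s) (j w) - R t s (j w))) {s..t}"
    unfolding f'_def by (rule duhamel_formula[OF corr g rj adm st C(2)])
  have "norm (integral {s..t} f') \<le> integral {s..t} (\<lambda>r. C * B * onorm (\<lambda>v. Ar r (j v) - Ah (j v)))"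
  proof (rule integral_norm_bound_integral)
    show "f' integrable_on {s..t}" using hi by blast
    show "(\<lambda>r. C * B * onorm (\<lambda>v. Ar r (j v) - Ah (j v))) integrable_on {s..t}"
      using gint by (rule integrable_on_mult_right)
    fix r assume r: "r \<in> {s..t}"
    define y where "y = inv j (S (r - s) (j w))"
    have jy: "S (r - s) (j w) = j y"
      using admissible_semigroup_in_range[OF g adm, of "r - s" w] r by (simp add: y_def)
    have "norm (Ah (j y) - Ar r (j y)) = norm (Ar r (j y) - Ah (j y))" by (rule norm_minus_commute)
    also have "\<dots> \<le> onorm (\<lambda>v. Ar r (j v) - Ah (j v)) * norm y" using onorm[OF lin, of r y] r by auto
    also have "\<dots> \<le> onorm (\<lambda>v. Ar r (j v) - Ah (j v)) * B"
      using B(2)[of "r - s"] r onorm_pos_le[OF lin, of r] by (intro mult_left_mono) (auto simp: y_def)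
    finally have 1: "norm (Ah (j y) - Ar r (j y)) \<le> onorm (\<lambda>v. Ar r (j v) - Ah (j v)) * B" .
    have "norm (f' r) \<le> C * norm (Ah (j y) - Ar r (j y))" unfolding f'_def jy using C r by auto
    also have "\<dots> \<le> C * (onorm (\<lambda>v. Ar r (j v) - Ah (j v)) * B)" using 1 C(1) by (rule mult_left_mono)
    finally show "norm (f' r) \<le> C * B * onorm (\<lambda>v. Ar r (j v) - Ah (j v))" by (simp add: ac_simps)
  qed
  moreover have "integral {s..t} f' = S (t - s) (j w) - R t s (j w)" using hi by blast
  ultimately show ?thesis by simp
qed

lemma averaged_integral_rescaled_bound:
  fixes gg :: "real \<Rightarrow> real"
  assumes nn: "\<And>x. 0 \<le> x \<Longrightarrow> 0 \<le> gg x" and cg: "continuous_on {0..} gg"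
    and lam: "0 < lam" and st: "0 \<le> s" "s \<le> t"
    and T0: "0 < T0" and avg: "\<And>T h. T \<ge> T0 \<Longrightarrow> h \<ge> 0 \<Longrightarrow> (1 / T) * integral {0..T} (\<lambda>\<tau>. gg (\<tau> + h)) < e"
  shows "integral {s..t} (\<lambda>r. gg (r / lam)) \<le> e * (t - s + lam * T0)"
proof -
  have intg: "gg integrable_on {a..b}" if "0 \<le> a" for a b
    by (rule integrable_continuous_real, rule continuous_on_subset[OF cg]) (use that in auto)
  define h where "h = s / lam"
  define T where "T = (t - s) / lam"
  have h: "0 \<le> h" using st lam by (simp add: h_def)
  have T: "0 \<le> T" using st lam by (simp add: T_def)
  have "integral ((\<lambda>x. x / (1 / lam)) ` {s / lam..t / lam}) (\<lambda>x. gg ((1 / lam) * x)) = (1 / \<bar>1 / lam\<bar>) *\<^sub>R integral {s / lam..t / lam} gg"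
    by (rule integral_stretch_real) (use lam in simp)
  moreover have "(\<lambda>x. x / (1 / lam)) ` {s / lam..t / lam} = {s..t}"
    using lam image_divide_atLeastAtMost[of "1 / lam" "s / lam" "t / lam"] by simp
  ultimately have 1: "integral {s..t} (\<lambda>r. gg (r / lam)) = lam * integral {h..h + T} gg"
    using lam by (simp add: h_def T_def field_simps)
  have 2: "integral {h..h + T} gg = integral {0..T} (\<lambda>\<tau>. gg (\<tau> + h))"
    using integral_shift_Icc_real[of 0 T gg h] by (simp add: o_def add.commute)
  have intsh: "(\<lambda>\<tau>. gg (\<tau> + h)) integrable_on {0..b}" for b
  proof -
    have "continuous_on {0..b} (\<lambda>\<tau>. gg (\<tau> + h))"
      by (rule continuous_on_compose2[OF cg]) (use h in \<open>auto intro!: continuous_intros\<close>)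
    then show ?thesis by (rule integrable_continuous_real)
  qed
  have "lam * integral {0..T} (\<lambda>\<tau>. gg (\<tau> + h)) \<le> e * (t - s + lam * T0)"
  proof (cases "T \<ge> T0")
    case True
    have Tp: "0 < T" using True T0 by simp
    have "(1 / T) * integral {0..T} (\<lambda>\<tau>. gg (\<tau> + h)) < e" using avg[OF True h] .
    then have "integral {0..T} (\<lambda>\<tau>. gg (\<tau> + h)) < e * T" using Tp by (simp add: field_simps)
    then have "lam * integral {0..T} (\<lambda>\<tau>. gg (\<tau> + h)) \<le> lam * (e * T)" using lam by simp
    also have "\<dots> = e * (t - s)" using lam by (simp add: T_def)
    also have "\<dots> \<le> e * (t - s + lam * T0)"
    proof -
      have "0 \<le> e"
      proof -
        have "0 \<le> integral {0..T} (\<lambda>\<tau>. gg (\<tau> + h))" using nn h by (intro integral_nonneg intsh) auto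
        then show ?thesis using \<open>integral {0..T} (\<lambda>\<tau>. gg (\<tau> + h)) < e * T\<close> Tp
          by (smt (verit) mult_neg_pos)
      qed
      then show ?thesis using lam T0 by (intro mult_left_mono) auto
    qed
    finally show ?thesis .
  next
    case False
    have "integral {0..T} (\<lambda>\<tau>. gg (\<tau> + h)) \<le> integral {0..T0} (\<lambda>\<tau>. gg (\<tau> + h))"
      using False nn h by (intro integral_subset_le intsh) auto
    also have "\<dots> < e * T0"
      using avg[OF order_refl h] T0 by (simp add: field_simps)
    finally have 3: "integral {0..T} (\<lambda>\<tau>. gg (\<tau> + h)) \<le> e * T0" by simp
    have "0 \<le> integral {0..T} (\<lambda>\<tau>. gg (\<tau> + h))" using nn h by (intro integral_nonneg intsh) auto
    then have "0 \<le> e * T0" using 3 by linarith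
    then have e0: "0 \<le> e" using T0 by (simp add: zero_le_mult_iff)
    have "lam * integral {0..T} (\<lambda>\<tau>. gg (\<tau> + h)) \<le> lam * (e * T0)" using 3 lam by simp
    also have "\<dots> \<le> e * (t - s + lam * T0)" using e0 st by (simp add: algebra_simps mult_left_mono)
    finally show ?thesis .
  qed
  then show ?thesis using 1 2 by simp
qed

lemma hyp3_onorm_diff_continuous:
  assumes h3: "hyp3 j D A" and Ah: "bounded_linear (\<lambda>v. Ah (j v))"
  shows "continuous_on {0..} (\<lambda>\<tau>. onorm (\<lambda>v. A \<tau> (j v) - Ah (j v)))"
proof -
  have "continuous_on {0..} (\<lambda>\<tau>. norm (Blinfun (\<lambda>v. A \<tau> (j v)) - Blinfun (\<lambda>v. Ah (j v))))"
    using h3 unfolding hyp3_def by (intro continuous_intros) auto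
  then show ?thesis
  proof (rule continuous_on_eq)
    show "norm (Blinfun (\<lambda>v. A \<tau> (j v)) - Blinfun (\<lambda>v. Ah (j v))) = onorm (\<lambda>v. A \<tau> (j v) - Ah (j v))"
      if "\<tau> \<in> {0..}" for \<tau>
      using h3 that by (intro onorm_blinfun_diff[symmetric] Ah) (auto simp: hyp3_def)
  qed
qed

lemma averaged_convergence_embedded:
  fixes j :: "'v::banach \<Rightarrow> 'e::banach" and A :: "'p::metric_space \<Rightarrow> real \<Rightarrow> 'e \<Rightarrow> 'e"
    and R :: "'p \<Rightarrow> real \<Rightarrow> real \<Rightarrow> real \<Rightarrow> 'e \<Rightarrow> 'e" and S :: "real \<Rightarrow> 'e \<Rightarrow> 'e"
  assumes j: "bounded_linear j" and M: "0 \<le> M"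
    and corr: "\<And>\<nu> lam. 0 < lam \<Longrightarrow> corr_evol_sys j (\<lambda>t. A \<nu> (t / lam)) M \<omega> (R \<nu> lam)"
    and h3: "\<And>\<nu>. hyp3 j (D \<nu>) (A \<nu>)"
    and g: "is_generator Dh Ah S" and adm: "admissible j Dh Ah" and rj: "range j \<subseteq> Dh"
    and avg: "\<And>\<epsilon>. \<epsilon> > 0 \<Longrightarrow> \<exists>T0 \<delta>. \<delta> > 0 \<and> (\<forall>T \<ge> T0. \<forall>\<nu>. dist \<nu> \<mu> < \<delta> \<longrightarrow> (\<forall>h \<ge> 0.
                 (1 / T) * integral {0..T} (\<lambda>t. onorm (\<lambda>v. A \<nu> (t + h) (j v) - Ah (j v))) < \<epsilon>))"
    and e: "0 < \<epsilon>" and K: "0 \<le> K"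
  shows "\<exists>\<delta>>0. \<forall>lam \<nu>. 0 < lam \<and> lam < \<delta> \<and> dist \<nu> \<mu> < \<delta> \<longrightarrow> (\<forall>t s. 0 \<le> s \<and> s \<le> t \<and> t \<le> K \<longrightarrow>
           norm (R \<nu> lam t s (j w) - S (t - s) (j w)) \<le> \<epsilon>)"
proof -
  define C where "C = growth_bound M \<omega> K"
  have C: "0 \<le> C" using M by (simp add: C_def growth_bound_def)
  have "continuous_on {0..K} (\<lambda>\<tau>. inv j (S \<tau> (j w)))"
    by (rule continuous_on_subset[OF admissible_semigroup_continuous[OF g adm]]) auto
  then obtain B where B: "0 \<le> B" "\<And>\<tau>. 0 \<le> \<tau> \<Longrightarrow> \<tau> \<le> K \<Longrightarrow> norm (inv j (S \<tau> (j w))) \<le> B"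
    by (rule continuous_on_Icc_norm_boundE) auto
  have Ahj: "bounded_linear (\<lambda>v. Ah (j v))" by (rule generator_bounded_on_embedded[OF g j rj])
  define X where "X = C * B + 1"
  have X: "C * B \<le> X" "0 < X" using mult_nonneg_nonneg[OF C B(1)] by (simp_all add: X_def)
  define L where "L = K + 1"
  have L: "0 < L" using K by (simp add: L_def)
  define e' where "e' = \<epsilon> / (X * L)"
  have e': "0 < e'" using e X L by (simp add: e'_def)
  obtain T0 \<delta>1 where \<delta>1: "\<delta>1 > 0" and T0: "\<And>T \<nu> h. T \<ge> T0 \<Longrightarrow> dist \<nu> \<mu> < \<delta>1 \<Longrightarrow> h \<ge> 0 \<Longrightarrow>
      (1 / T) * integral {0..T} (\<lambda>t. onorm (\<lambda>v. A \<nu> (t + h) (j v) - Ah (j v))) < e'"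
    using avg[OF e'] by blast
  define T1 where "T1 = max T0 1"
  have T1: "0 < T1" "T0 \<le> T1" by (auto simp: T1_def)
  define \<delta> where "\<delta> = min \<delta>1 (1 / T1)"
  have \<delta>: "0 < \<delta>" using \<delta>1 T1 by (simp add: \<delta>_def)
  show ?thesis
  proof (intro exI[of _ \<delta>] conjI \<delta> allI impI)
    fix lam \<nu> t s
    assume a: "0 < lam \<and> lam < \<delta> \<and> dist \<nu> \<mu> < \<delta>" and st: "0 \<le> s \<and> s \<le> t \<and> t \<le> K"
    have lam: "0 < lam" using a by simp
    have cR: "corr_evol_sys j (\<lambda>t. A \<nu> (t / lam)) M \<omega> (R \<nu> lam)" by (rule corr[OF lam])
    have Alin: "bounded_linear (\<lambda>v. A \<nu> \<tau> (j v))" if "0 \<le> \<tau>" for \<tau> using h3 that by (auto simp: hyp3_def)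
    define gg where "gg \<tau> = onorm (\<lambda>v. A \<nu> \<tau> (j v) - Ah (j v))" for \<tau>
    have ggc: "continuous_on {0..} gg"
      unfolding gg_def by (rule hyp3_onorm_diff_continuous[OF h3 Ahj])
    have Duh: "norm (S (t - s) (j w) - R \<nu> lam t s (j w)) \<le> C * B * integral {s..t} (\<lambda>r. gg (r / lam))"
      unfolding gg_def
    proof (rule duhamel_estimate[OF cR g rj adm])
      show "0 \<le> s" "s \<le> t" using st by auto
      show "norm (R \<nu> lam t r z) \<le> C * norm z" if "s \<le> r" "r \<le> t" for r z
        using corr_evol_sys_growth_bound[OF cR M, of r t K] that st by (simp add: C_def)
      show "norm (inv j (S \<tau> (j w))) \<le> B" if "0 \<le> \<tau>" "\<tau> \<le> t - s" for \<tau>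
        using B(2)[of \<tau>] that st by auto
      show "bounded_linear (\<lambda>v. A \<nu> (r / lam) (j v) - Ah (j v))" if "s \<le> r" "r \<le> t" for r
        using that st lam by (intro bounded_linear_sub Alin Ahj) auto
      have "continuous_on {s..t} (\<lambda>r. gg (r / lam))"
        by (rule continuous_on_compose2[OF ggc]) (use st lam in \<open>auto intro!: continuous_intros\<close>)
      then show "(\<lambda>r. onorm (\<lambda>v. A \<nu> (r / lam) (j v) - Ah (j v))) integrable_on {s..t}"
        unfolding gg_def by (rule integrable_continuous_real)
    qed (use C B in auto)
    have "integral {s..t} (\<lambda>r. gg (r / lam)) \<le> e' * (t - s + lam * T1)"
    proof (rule averaged_integral_rescaled_bound[OF _ ggc lam _ _ T1(1)])
      show "0 \<le> gg \<tau>" if "0 \<le> \<tau>" for \<tau>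
        unfolding gg_def using that by (intro onorm_pos_le bounded_linear_sub Alin Ahj)
      show "0 \<le> s" "s \<le> t" using st by auto
      fix T h :: real assume "T \<ge> T1" "h \<ge> 0"
      then show "1 / T * integral {0..T} (\<lambda>\<tau>. gg (\<tau> + h)) < e'"
        unfolding gg_def using T0[of T \<nu> h] T1 a by (auto simp: \<delta>_def)
    qed
    also have "\<dots> \<le> e' * L"
    proof -
      have "lam * T1 \<le> 1" using a T1 by (simp add: \<delta>_def field_simps)
      then show ?thesis using e' st by (intro mult_left_mono) (auto simp: L_def)
    qed
    finally have "norm (S (t - s) (j w) - R \<nu> lam t s (j w)) \<le> C * B * (e' * L)"
      using Duh C B by (meson mult_nonneg_nonneg mult_left_mono order_trans)
    also have "\<dots> \<le> X * (e' * L)" using X e' L by (intro mult_right_mono) auto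
    also have "\<dots> = \<epsilon>" using X L by (simp add: e'_def)
    finally show "norm (R \<nu> lam t s (j w) - S (t - s) (j w)) \<le> \<epsilon>" by (simp add: norm_minus_commute)
  qed
qed

lemma uniform_convergence_from_dense:
  fixes j :: "'v \<Rightarrow> 'e::banach" and R :: "'p::metric_space \<Rightarrow> real \<Rightarrow> real \<Rightarrow> real \<Rightarrow> 'e \<Rightarrow> 'e"
  assumes dense: "closure (range j) = UNIV" and S: "C0_semigroup S" and C: "0 < C"
    and R: "\<And>\<nu> lam t s. 0 < lam \<Longrightarrow> 0 \<le> s \<Longrightarrow> s \<le> t \<Longrightarrow> t \<le> K \<Longrightarrow>
               bounded_linear (R \<nu> lam t s) \<and> (\<forall>x. norm (R \<nu> lam t s x) \<le> C * norm x)"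
    and conv: "\<And>w \<epsilon>. 0 < \<epsilon> \<Longrightarrow> \<exists>\<delta>>0. \<forall>lam \<nu>. 0 < lam \<and> lam < \<delta> \<and> dist \<nu> \<mu> < \<delta> \<longrightarrow>
               (\<forall>t s. 0 \<le> s \<and> s \<le> t \<and> t \<le> K \<longrightarrow> norm (R \<nu> lam t s (j w) - S (t - s) (j w)) \<le> \<epsilon>)"
    and e: "0 < \<epsilon>"
  shows "\<exists>\<delta>>0. \<forall>lam v \<nu>. 0 < lam \<and> lam < \<delta> \<and> norm (v - u) < \<delta> \<and> dist \<nu> \<mu> < \<delta> \<longrightarrow>
           (\<forall>t s. 0 \<le> s \<and> s \<le> t \<and> t \<le> K \<longrightarrow> norm (R \<nu> lam t s v - S (t - s) u) < \<epsilon>)"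
proof -
  obtain CS where CS: "0 \<le> CS" "\<And>\<tau> x. 0 \<le> \<tau> \<Longrightarrow> \<tau> \<le> K \<Longrightarrow> norm (S \<tau> x) \<le> CS * norm x"
    using C0_semigroup_boundedE[OF S] by blast
  define X where "X = C + CS + 1"
  have X: "0 < X" using C CS by (simp add: X_def)
  define \<eta> where "\<eta> = \<epsilon> / (4 * X)"
  have \<eta>: "0 < \<eta>" using e X by (simp add: \<eta>_def)
  have C\<eta>: "(C + CS) * \<eta> \<le> \<epsilon> / 4"
  proof -
    have "(C + CS) * \<eta> \<le> X * \<eta>" using \<eta> by (simp add: X_def)
    also have "\<dots> = \<epsilon> / 4" using X by (simp add: \<eta>_def)
    finally show ?thesis .
  qed
  obtain w where w: "norm (u - j w) < \<eta>" using dense_range_approx[OF dense \<eta>] by blast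
  obtain \<delta>1 where \<delta>1: "\<delta>1 > 0" and near: "\<And>lam \<nu> t s. 0 < lam \<Longrightarrow> lam < \<delta>1 \<Longrightarrow> dist \<nu> \<mu> < \<delta>1 \<Longrightarrow>
      0 \<le> s \<Longrightarrow> s \<le> t \<Longrightarrow> t \<le> K \<Longrightarrow> norm (R \<nu> lam t s (j w) - S (t - s) (j w)) \<le> \<epsilon> / 4"
  proof -
    have "0 < \<epsilon> / 4" using e by simp
    from conv[OF this, of w] that show ?thesis by blast
  qed
  define \<delta> where "\<delta> = min \<delta>1 (\<epsilon> / (4 * C))"
  have \<delta>: "0 < \<delta>" using \<delta>1 e C by (simp add: \<delta>_def)
  show ?thesis
  proof (intro exI[of _ \<delta>] conjI \<delta> allI impI)
    fix lam v \<nu> t s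
    assume a: "0 < lam \<and> lam < \<delta> \<and> norm (v - u) < \<delta> \<and> dist \<nu> \<mu> < \<delta>" and st: "0 \<le> s \<and> s \<le> t \<and> t \<le> K"
    have Rlin: "bounded_linear (R \<nu> lam t s)" and Rb: "\<And>x. norm (R \<nu> lam t s x) \<le> C * norm x"
      using R[of lam s t \<nu>] a st by auto
    have Slin: "bounded_linear (S (t - s))" using S st by (intro C0_semigroup_bounded_linear) auto
    have 1: "norm (R \<nu> lam t s (v - u)) < \<epsilon> / 4"
    proof -
      have "norm (v - u) < \<epsilon> / (4 * C)" using a by (simp add: \<delta>_def)
      then have "C * norm (v - u) < \<epsilon> / 4" using C by (simp add: field_simps)
      then show ?thesis using Rb[of "v - u"] by linarith
    qed
    have 2: "norm (R \<nu> lam t s (u - j w)) \<le> C * \<eta>"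
      using Rb[of "u - j w"] mult_left_mono[OF less_imp_le[OF w], of C] C by linarith
    have 3: "norm (R \<nu> lam t s (j w) - S (t - s) (j w)) \<le> \<epsilon> / 4"
      using near a st by (simp add: \<delta>_def)
    have 4: "norm (S (t - s) (j w - u)) \<le> CS * \<eta>"
      using CS(2)[of "t - s" "j w - u"] mult_left_mono[OF less_imp_le[OF w] CS(1)] st
      by (simp add: norm_minus_commute)
    have dec: "R \<nu> lam t s v - S (t - s) u = R \<nu> lam t s (v - u) + R \<nu> lam t s (u - j w)
        + (R \<nu> lam t s (j w) - S (t - s) (j w)) + S (t - s) (j w - u)"
      by (simp add: linear_simps[OF Rlin] linear_simps[OF Slin])
    have "norm (R \<nu> lam t s v - S (t - s) u) \<le> norm (R \<nu> lam t s (v - u)) + norm (R \<nu> lam t s (u - j w))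
        + norm (R \<nu> lam t s (j w) - S (t - s) (j w)) + norm (S (t - s) (j w - u))"
      unfolding dec using norm_triangle_ineq[of "R \<nu> lam t s (v - u) + R \<nu> lam t s (u - j w)
          + (R \<nu> lam t s (j w) - S (t - s) (j w))" "S (t - s) (j w - u)"]
        norm_triangle_ineq[of "R \<nu> lam t s (v - u) + R \<nu> lam t s (u - j w)" "R \<nu> lam t s (j w) - S (t - s) (j w)"]
        norm_triangle_ineq[of "R \<nu> lam t s (v - u)" "R \<nu> lam t s (u - j w)"]
      by linarith
    also have "\<dots> < \<epsilon> / 4 + C * \<eta> + \<epsilon> / 4 + CS * \<eta>" using 1 2 3 4 by linarith
    also have "\<dots> \<le> \<epsilon>" using C\<eta> e unfolding distrib_right by linarith
    finally show "norm (R \<nu> lam t s v - S (t - s) u) < \<epsilon>" .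
  qed
qed

theorem theorem3p3:
  fixes j :: "'v::banach \<Rightarrow> 'e::banach"
    and D :: "'p::metric_space \<Rightarrow> real \<Rightarrow> 'e set"
    and A :: "'p \<Rightarrow> real \<Rightarrow> 'e \<Rightarrow> 'e"
    and Dh :: "'p \<Rightarrow> 'e set" and Ah :: "'p \<Rightarrow> 'e \<Rightarrow> 'e" and Sh :: "'p \<Rightarrow> real \<Rightarrow> 'e \<Rightarrow> 'e"
    and M MV \<omega> \<omega>V :: real
  assumes emb: "bounded_linear j" "inj j" "closure (range j) = UNIV"
    and cM: "1 \<le> M" "1 \<le> MV"
    and hyps: "\<And>\<mu>. hyp1 (D \<mu>) (A \<mu>) M \<omega> \<and> hyp2 j (D \<mu>) (A \<mu>) MV \<omega>V \<and> hyp3 j (D \<mu>) (A \<mu>)"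
    and hat: "\<And>\<mu>. is_generator (Dh \<mu>) (Ah \<mu>) (Sh \<mu>) \<and> admissible j (Dh \<mu>) (Ah \<mu>) \<and> range j \<subseteq> Dh \<mu>"
    and avg: "\<And>\<mu> \<epsilon>. \<epsilon> > 0 \<Longrightarrow> \<exists>T0 \<delta>. \<delta> > 0 \<and> (\<forall>T \<ge> T0. \<forall>\<nu>. dist \<nu> \<mu> < \<delta> \<longrightarrow> (\<forall>h \<ge> 0.
                 (1 / T) * integral {0..T} (\<lambda>t. onorm (\<lambda>v. A \<nu> (t + h) (j v) - Ah \<mu> (j v))) < \<epsilon>))"
  shows "(\<forall>\<mu> lam. lam > 0 \<longrightarrow> (\<forall>t s x. 0 \<le> s \<and> s \<le> t \<longrightarrow>
            norm (evol_sys j (\<lambda>t. A \<mu> (t / lam)) M \<omega> t s x) \<le> M * exp (\<omega> * (t - s)) * norm x))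
       \<and> (\<forall>\<mu> u \<epsilon> K. \<epsilon> > 0 \<longrightarrow> (\<exists>\<delta> > 0. \<forall>lam v \<nu>. 0 < lam \<and> lam < \<delta> \<and> norm (v - u) < \<delta> \<and> dist \<nu> \<mu> < \<delta> \<longrightarrow>
            (\<forall>t s. 0 \<le> s \<and> s \<le> t \<and> t \<le> K \<longrightarrow>
               norm (evol_sys j (\<lambda>t. A \<nu> (t / lam)) M \<omega> t s v - Sh \<mu> (t - s) u) < \<epsilon>)))"
proof -
  define R where "R \<nu> lam = evol_sys j (\<lambda>t. A \<nu> (t / lam)) M \<omega>" for \<nu> lam
  have corr: "corr_evol_sys j (\<lambda>t. A \<nu> (t / lam)) M \<omega> (R \<nu> lam)" if "0 < lam" for \<nu> lam
    unfolding R_def using hyps[of \<nu>] by (intro evol_sys_rescaled_corr[OF emb(1,3) _ _ _ that]) auto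
  then have bound: "norm (R \<nu> lam t s x) \<le> M * exp (\<omega> * (t - s)) * norm x"
    if "0 < lam" "0 \<le> s" "s \<le> t" for \<nu> lam t s x
    using that unfolding corr_evol_sys_def by blast
  have conv: "\<exists>\<delta>>0. \<forall>lam v \<nu>. 0 < lam \<and> lam < \<delta> \<and> norm (v - u) < \<delta> \<and> dist \<nu> \<mu> < \<delta> \<longrightarrow>
      (\<forall>t s. 0 \<le> s \<and> s \<le> t \<and> t \<le> K \<longrightarrow> norm (R \<nu> lam t s v - Sh \<mu> (t - s) u) < \<epsilon>)"
    if e: "0 < \<epsilon>" and K: "0 \<le> K" for \<mu> u \<epsilon> K
  proof (rule uniform_convergence_from_dense[OF emb(3) _ growth_bound_pos _ _ e])
    show "C0_semigroup (Sh \<mu>)" using hat[of \<mu>] generator_C0_semigroup by blast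
    show "bounded_linear (R \<nu> lam t s) \<and> (\<forall>x. norm (R \<nu> lam t s x) \<le> growth_bound M \<omega> K * norm x)"
      if "0 < lam" "0 \<le> s" "s \<le> t" "t \<le> K" for \<nu> lam t s
      using cM that by (intro corr_evol_sys_growth_bound[OF corr]) auto
    show "\<exists>\<delta>>0. \<forall>lam \<nu>. 0 < lam \<and> lam < \<delta> \<and> dist \<nu> \<mu> < \<delta> \<longrightarrow> (\<forall>t s. 0 \<le> s \<and> s \<le> t \<and> t \<le> K \<longrightarrow>
        norm (R \<nu> lam t s (j w) - Sh \<mu> (t - s) (j w)) \<le> \<epsilon>')" if "0 < \<epsilon>'" for w \<epsilon>'
      using hat[of \<mu>] hyps cM by (intro averaged_convergence_embedded[OF emb(1) _ corr _ _ _ _ avg that K]) auto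
  qed (use cM in auto)
  have "\<exists>\<delta>>0. \<forall>lam v \<nu>. 0 < lam \<and> lam < \<delta> \<and> norm (v - u) < \<delta> \<and> dist \<nu> \<mu> < \<delta> \<longrightarrow>
      (\<forall>t s. 0 \<le> s \<and> s \<le> t \<and> t \<le> K \<longrightarrow> norm (R \<nu> lam t s v - Sh \<mu> (t - s) u) < \<epsilon>)"
    if "0 < \<epsilon>" for \<mu> u \<epsilon> K
    using conv[OF that] that by (cases "0 \<le> K") (auto intro: exI[of _ 1])
  then show ?thesis using bound unfolding R_def by blast
qed

end
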